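(* Let $X\subseteq\mathbb{R}^n$ be r.e. open. (a) The multi-valued partial mapping $G:\subseteq\mathfrak{O}^n\times\mathbb{R}^n\rightrightarrows\mathbb{N}$ with graph $\{(U,\vec x,k):\overline{B}(\vec x,2^{-k})\subseteq U\}$ (defined when $\vec x\in U$) is $(\theta^n_<\times\rho^n\rightrightarrows\nu)$-computable. (b) For every $(\rho^n\rightrightarrows\rho^m)$-computable multi-valued $f:X\rightrightarrows\mathbb{R}^m$ there exists a $(\rho^n\rightrightarrows\rho^m)$-computable multi-valued sub-function $\tilde f$ of $f$ (i.e. $\tilde f(\vec x)\subseteq f(\vec x)$ for all $\vec x\in X$) such that $\tilde f[K]:=\bigcup_{\vec x\in K}\tilde f(\vec x)$ is bounded for every compact $K\subseteq X$. (c) For $m=1$ and $\tilde f$ as in (b), the multi-valued mapping $K\mapsto N$, with $N\in\mathbb{N}$ satisfying $\tilde f[K]\subseteq[-N,N]$, defined on compact $K\subseteq X$, is $(\kappa^n_>\rightrightarrows\nu)$-computable. Claims (b) and (c) also hold uniformly in $p$ for parametrized computable functions $p\mapsto f(p,\cdot):X\rightrightarrows\mathbb{R}^m$.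
   Context: Type-2 computability (Weihrauch). $\mathfrak{O}^n$: the open subsets of $\mathbb{R}^n$; $\theta^n_<$: a name of open $U$ is a list of rational centers and radii of open balls with union $U$. $\rho^n$: Cauchy representation of $\mathbb{R}^n$; $\nu$: standard notation of $\mathbb{N}$. $\kappa^n_>$: representation of compact subsets of $\mathbb{R}^n$ in which a name of $K$ lists all finite covers of $K$ by open rational balls (covers intersecting $K$ suitably, per Weihrauch's $\kappa_>$). $X$ r.e. open: has a computable $\theta^n_<$-name. A multi-valued $h:A\rightrightarrows B$ is $(\delta\rightrightarrows\delta')$-computable if some machine, on any $\delta$-name of $a$, outputs a $\delta'$-name of some element of $h(a)$. $\overline{B}(\vec x,r)$ is the closed Euclidean ball. *)

theory Defs
  imports "HOL-Analysis.Analysis" "HOL-Library.Nat_Bijection" "HOL-Library.Countable"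
begin

datatype recf = Zr | Sc | Pj nat | Cn recf "recf list" | Pr recf recf | Mn recf

inductive eval :: "recf \<Rightarrow> nat list \<Rightarrow> nat \<Rightarrow> bool" where
  ev_Zr: "eval Zr xs 0"
| ev_Sc: "eval Sc (x # xs) (Suc x)"
| ev_Pj: "i < length xs \<Longrightarrow> eval (Pj i) xs (xs ! i)"
| ev_Cn: "list_all2 (\<lambda>g y. eval g xs y) gs ys \<Longrightarrow> eval f ys z \<Longrightarrow> eval (Cn f gs) xs z"
| ev_Pr0: "eval g xs z \<Longrightarrow> eval (Pr g h) (0 # xs) z"
| ev_PrS: "eval (Pr g h) (n # xs) y \<Longrightarrow> eval h (y # n # xs) z \<Longrightarrow> eval (Pr g h) (Suc n # xs) z"
| ev_Mn: "eval f (n # xs) 0 \<Longrightarrow> (\<forall>m<n. \<exists>v. v > 0 \<and> eval f (m # xs) v) \<Longrightarrow> eval (Mn f) xs n"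

definition comp_seq :: "(nat \<Rightarrow> nat) \<Rightarrow> bool" where
  "comp_seq p \<longleftrightarrow> (\<exists>r. \<forall>i. eval r [i] (p i))"

definition prefix_code :: "(nat \<Rightarrow> nat) \<Rightarrow> nat \<Rightarrow> nat" where
  "prefix_code p n = list_encode (map p [0..<n])"

text \<open>The partial recursive r, read as a Type-2 machine, maps input p to output q:
  on (i, code of a prefix of p) it answers 0 (= not yet) or Suc (q i), consistently,
  and eventually answers Suc (q i).\<close>
definition realizes :: "recf \<Rightarrow> (nat \<Rightarrow> nat) \<Rightarrow> (nat \<Rightarrow> nat) \<Rightarrow> bool" where
  "realizes r p q \<longleftrightarrow>
     (\<forall>i. (\<exists>n. eval r [i, prefix_code p n] (Suc (q i))) \<and>
          (\<forall>n v. eval r [i, prefix_code p n] v \<longrightarrow> v = 0 \<or> v = Suc (q i)))"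

type_synonym 'a rep = "(nat \<Rightarrow> nat) \<Rightarrow> 'a \<Rightarrow> bool"

definition mv_computable :: "'a rep \<Rightarrow> 'b rep \<Rightarrow> 'a set \<Rightarrow> ('a \<Rightarrow> 'b set) \<Rightarrow> bool" where
  "mv_computable \<delta> \<delta>' A h \<longleftrightarrow>
     (\<exists>r. \<forall>a\<in>A. \<forall>p. \<delta> p a \<longrightarrow> (\<exists>q b. realizes r p q \<and> \<delta>' q b \<and> b \<in> h a))"

definition rat_dec :: "nat \<Rightarrow> rat" where
  "rat_dec k = (case prod_decode k of (a, b) \<Rightarrow> Fract (int_decode a) (int b + 1))"

definition vec_dec :: "nat \<Rightarrow> real ^ ('n::finite)" where
  "vec_dec k = (\<chi> j. (let l = list_decode k in
                  if to_nat j < length l then real_of_rat (rat_dec (l ! to_nat j)) else 0))"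

definition rho :: "(real ^ ('n::finite)) rep" where
  "rho p x \<longleftrightarrow> (\<forall>i j. \<bar>vec_dec (p i) $ j - x $ j\<bar> \<le> (1/2) ^ i)"

definition nu :: "nat rep" where
  "nu p k \<longleftrightarrow> p 0 = k"

text \<open>Open rational ball coded by a natural number (radius \<le> 0 gives the empty set).\<close>
definition ball_dec :: "nat \<Rightarrow> (real ^ ('n::finite)) set" where
  "ball_dec k = (case prod_decode k of (c, r) \<Rightarrow> ball (vec_dec c) (real_of_rat (rat_dec r)))"

definition theta :: "(real ^ ('n::finite)) set rep" where
  "theta p U \<longleftrightarrow> U = (\<Union>i. ball_dec (p i))"

definition kappa :: "(real ^ ('n::finite)) set rep" where
  "kappa p K \<longleftrightarrow> compact K \<and>
     (\<forall>k. (\<exists>i. p i = k) \<longleftrightarrow> K \<subseteq> \<Union>(ball_dec ` set (list_decode k)))"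

definition prod_rep :: "'a rep \<Rightarrow> 'b rep \<Rightarrow> ('a \<times> 'b) rep" where
  "prod_rep \<delta>1 \<delta>2 p ab \<longleftrightarrow> \<delta>1 (\<lambda>i. p (2 * i)) (fst ab) \<and> \<delta>2 (\<lambda>i. p (2 * i + 1)) (snd ab)"

definition id_rep :: "(nat \<Rightarrow> nat) rep" where
  "id_rep p p' \<longleftrightarrow> p = p'"

definition re_open :: "(real ^ ('n::finite)) set \<Rightarrow> bool" where
  "re_open X \<longleftrightarrow> (\<exists>p. comp_seq p \<and> theta p X)"

end

(*
  A realizer r of f is only ever run on normalised names: names whose i-th entry is a dyadic
  vector of mesh 2^-(i+1). Over a compact set K these names form a finitely branching tree, and
  the sub-function g(x) keeps the values that r outputs on normalised names of x. If the first
  outputs of r were unbounded over K, Koenig's lemma would give a normalised name of a point of K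
  each of whose prefixes is shared by names with arbitrarily large first outputs; but r reads only
  a finite prefix of it before its first output. Hence g[K] is bounded (b). For (c) a machine
  searches for a depth d and a clock t such that every candidate prefix of length d either makes
  r output within t steps, or is inconsistent, or is shown by a finite rational cover of K, read
  from the kappa-name, to approximate no point of K; the same compactness argument shows that the
  search terminates, and the largest output seen bounds g[K]. For (a) one searches for a ball of
  the name of U and an exponent k such that the current approximation of x lies far enough
  inside the ball.
*)

theory Submission
  imports Defs "HOL-Library.Diagonal_Subsequence"
begin

section \<open>Partial recursive functions\<close>

inductive_cases eval_ZrE: "eval Zr xs v"
inductive_cases eval_ScE: "eval Sc xs v"
inductive_cases eval_PjE: "eval (Pj i) xs v"
inductive_cases eval_CnE: "eval (Cn f gs) xs v"
inductive_cases eval_PrE: "eval (Pr g h) xs v"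
inductive_cases eval_MnE: "eval (Mn f) xs v"

lemma list_all2_unique:
  "list_all2 (\<lambda>x y. \<forall>y'. P x y' \<longrightarrow> y = y') xs ys \<Longrightarrow> list_all2 P xs ys' \<Longrightarrow> ys = ys'"
proof (induction xs arbitrary: ys ys')
  case (Cons x xs)
  then show ?case by (auto simp: list_all2_Cons1)
qed simp

lemma eval_unique: "eval r xs v \<Longrightarrow> eval r xs w \<Longrightarrow> v = w"
proof (induction r xs v arbitrary: w rule: eval.induct)
  case (ev_Zr xs) then show ?case by (auto elim: eval_ZrE)
next
  case (ev_Sc x xs) then show ?case by (auto elim: eval_ScE)
next
  case (ev_Pj i xs) then show ?case by (auto elim: eval_PjE)
next
  case (ev_Cn xs gs ys f z)
  from ev_Cn.prems obtain ys' where a: "list_all2 (\<lambda>g y. eval g xs y) gs ys'" and b: "eval f ys' w"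
    by (auto elim: eval_CnE)
  have "list_all2 (\<lambda>g y. \<forall>w. eval g xs w \<longrightarrow> y = w) gs ys"
    using ev_Cn by (auto elim: list_all2_mono)
  then have "ys = ys'" using a by (rule list_all2_unique)
  with ev_Cn b show ?case by auto
next
  case (ev_Pr0 g xs z h)
  from ev_Pr0.prems have "eval g xs w" by (cases rule: eval_PrE) auto
  with ev_Pr0.IH show ?case by blast
next
  case (ev_PrS g h n xs y z)
  from ev_PrS.prems obtain y' where "eval (Pr g h) (n # xs) y'" "eval h (y' # n # xs) w"
    by (cases rule: eval_PrE) auto
  with ev_PrS.IH show ?case by metis
next
  case (ev_Mn f n xs)
  from ev_Mn.prems have a: "eval f (w # xs) 0" and b: "\<forall>m<w. \<exists>v>0. eval f (m # xs) v"
    by (auto elim: eval_MnE)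
  show ?case
  proof (rule ccontr)
    assume "n \<noteq> w"
    then consider "n < w" | "w < n" by linarith
    then show False
    proof cases
      case 1 with b obtain v where "v > 0" "eval f (n # xs) v" by blast
      with ev_Mn.IH(1) show False by force
    next
      case 2 with ev_Mn.IH(2) a show False by force
    qed
  qed
qed

lemma eval_Cn1: "eval g xs y \<Longrightarrow> eval f [y] z \<Longrightarrow> eval (Cn f [g]) xs z"
  by (rule ev_Cn[of xs "[g]" "[y]"]) auto

lemma eval_Cn2:
  "eval g1 xs y1 \<Longrightarrow> eval g2 xs y2 \<Longrightarrow> eval f [y1, y2] z \<Longrightarrow> eval (Cn f [g1, g2]) xs z"
  by (rule ev_Cn[of xs "[g1, g2]" "[y1, y2]"]) auto

lemma eval_Cn2_iff:
  assumes "eval g1 xs y1" "eval g2 xs y2"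
  shows "eval (Cn f [g1, g2]) xs z \<longleftrightarrow> eval f [y1, y2] z"
proof
  assume "eval (Cn f [g1, g2]) xs z"
  with assms show "eval f [y1, y2] z"
    by (auto elim!: eval_CnE simp: list_all2_Cons1) (metis eval_unique)
qed (rule eval_Cn2[OF assms])

lemma eval_Pr_iterate:
  assumes "eval g xs (R 0)" "\<And>n. eval h (R n # n # xs) (R (Suc n))"
  shows "eval (Pr g h) (n # xs) (R n)"
  by (induction n) (auto intro: ev_Pr0 ev_PrS assms)

lemma eval_Pj0: "eval (Pj 0) (x # xs) x" using ev_Pj[of 0 "x # xs"] by simp
lemma eval_Pj1: "eval (Pj 1) (x # y # xs) y" using ev_Pj[of 1 "x # y # xs"] by simp
lemma eval_Pj2: "eval (Pj 2) (x # y # z # xs) z"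
  using ev_Pj[of 2 "x # y # z # xs"] by (simp add: numeral_2_eq_2)

section \<open>Total recursive functions\<close>

text \<open>The rules in rec_intros have the form total_rec F \<Longrightarrow> total_rec (\<lambda>x. c (F x)), so that
  the computability of an explicit function on codes follows by intro rec_intros.\<close>

named_theorems rec_intros

definition total_rec :: "(nat \<Rightarrow> nat) \<Rightarrow> bool" where
  "total_rec F \<longleftrightarrow> (\<exists>r. \<forall>x. eval r [x] (F x))"

definition total_rec2 :: "(nat \<Rightarrow> nat \<Rightarrow> nat) \<Rightarrow> bool" where
  "total_rec2 F \<longleftrightarrow> (\<exists>r. \<forall>x y. eval r [x, y] (F x y))"

lemma total_rec2_compose:
  "total_rec2 F \<Longrightarrow> total_rec G \<Longrightarrow> total_rec H \<Longrightarrow> total_rec (\<lambda>x. F (G x) (H x))"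
proof -
  assume "total_rec2 F" "total_rec G" "total_rec H"
  then obtain rf rg rh where "\<And>x y. eval rf [x, y] (F x y)" "\<And>x. eval rg [x] (G x)" "\<And>x. eval rh [x] (H x)"
    unfolding total_rec_def total_rec2_def by blast
  then have "\<And>x. eval (Cn rf [rg, rh]) [x] (F (G x) (H x))" by (blast intro: eval_Cn2)
  then show ?thesis unfolding total_rec_def by blast
qed

lemma total_rec_compose: "total_rec F \<Longrightarrow> total_rec G \<Longrightarrow> total_rec (\<lambda>x. F (G x))"
proof -
  assume "total_rec F" "total_rec G"
  then obtain rf rg where "\<And>x. eval rf [x] (F x)" "\<And>x. eval rg [x] (G x)"
    unfolding total_rec_def by blast
  then have "\<And>x. eval (Cn rf [rg]) [x] (F (G x))" by (blast intro: eval_Cn1)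
  then show ?thesis unfolding total_rec_def by blast
qed

lemma total_rec_id[rec_intros]: "total_rec (\<lambda>x. x)"
  unfolding total_rec_def using eval_Pj0 by blast

lemma total_rec_zero: "total_rec (\<lambda>x. 0)"
  unfolding total_rec_def using ev_Zr by blast

lemma total_rec_Suc[rec_intros]: "total_rec F \<Longrightarrow> total_rec (\<lambda>x. Suc (F x))"
proof -
  assume "total_rec F"
  then obtain rf where "\<And>x. eval rf [x] (F x)" unfolding total_rec_def by blast
  then have "\<And>x. eval (Cn Sc [rf]) [x] (Suc (F x))" by (blast intro: eval_Cn1 ev_Sc)
  then show ?thesis unfolding total_rec_def by blast
qed

lemma total_rec_const[rec_intros]: "total_rec (\<lambda>x. c)"
  by (induction c) (auto intro: total_rec_zero total_rec_Suc[of "\<lambda>x. _", simplified])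

lemma total_rec2_fst: "total_rec F \<Longrightarrow> total_rec2 (\<lambda>x y. F x)"
proof -
  assume "total_rec F"
  then obtain rf where "\<And>x. eval rf [x] (F x)" unfolding total_rec_def by blast
  then have "\<And>x y. eval (Cn rf [Pj 0]) [x, y] (F x)" by (blast intro: eval_Cn1 eval_Pj0)
  then show ?thesis unfolding total_rec2_def by blast
qed

lemma total_rec2_snd: "total_rec F \<Longrightarrow> total_rec2 (\<lambda>x y. F y)"
proof -
  assume "total_rec F"
  then obtain rf where "\<And>x. eval rf [x] (F x)" unfolding total_rec_def by blast
  then have "\<And>x y. eval (Cn rf [Pj 1]) [x, y] (F y)" by (blast intro: eval_Cn1 eval_Pj1)
  then show ?thesis unfolding total_rec2_def by blast
qed

lemma total_rec2_add: "total_rec2 (\<lambda>x y. x + y)"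
proof -
  have "eval (Pr (Pj 0) (Cn Sc [Pj 0])) [x, y] (x + y)" for x y
    using eval_Pr_iterate[of "Pj 0" "[y]" "\<lambda>n. n + y" "Cn Sc [Pj 0]" x]
    by (auto intro: eval_Pj0 eval_Cn1 ev_Sc)
  then show ?thesis unfolding total_rec2_def by blast
qed

lemma total_rec2_mult: "total_rec2 (\<lambda>x y. x * y)"
proof -
  obtain ra where ra: "\<And>x y. eval ra [x, y] (x + y)" using total_rec2_add unfolding total_rec2_def by blast
  have "eval (Pr Zr (Cn ra [Pj 0, Pj 2])) [x, y] (x * y)" for x y
  proof (rule eval_Pr_iterate[of Zr "[y]" "\<lambda>n. n * y"])
    show "eval Zr [y] (0 * y)" using ev_Zr by simp
    fix n show "eval (Cn ra [Pj 0, Pj 2]) [n * y, n, y] (Suc n * y)"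
      using eval_Cn2[OF eval_Pj0 eval_Pj2 ra[of "n*y" y]] by (simp add: add.commute)
  qed
  then show ?thesis unfolding total_rec2_def by blast
qed

lemma total_rec2_compose2:
  "total_rec2 F \<Longrightarrow> total_rec2 G \<Longrightarrow> total_rec2 H \<Longrightarrow> total_rec2 (\<lambda>x y. F (G x y) (H x y))"
proof -
  assume "total_rec2 F" "total_rec2 G" "total_rec2 H"
  then obtain rf rg rh where "\<And>x y. eval rf [x, y] (F x y)" "\<And>x y. eval rg [x, y] (G x y)" "\<And>x y. eval rh [x, y] (H x y)"
    unfolding total_rec2_def by blast
  then have "\<And>x y. eval (Cn rf [rg, rh]) [x, y] (F (G x y) (H x y))" by (blast intro: eval_Cn2)
  then show ?thesis unfolding total_rec2_def by blast
qed

lemma total_rec2_proj1: "total_rec2 (\<lambda>x y. x)" using total_rec2_fst[OF total_rec_id] .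
lemma total_rec2_proj2: "total_rec2 (\<lambda>x y. y)" using total_rec2_snd[OF total_rec_id] .

lemma total_rec2_const: "total_rec2 (\<lambda>x y. c)" using total_rec2_fst[OF total_rec_const] .

lemma total_rec_pred_fun: "total_rec (\<lambda>x. x - 1)"
proof -
  have "eval (Pr Zr (Pj 1)) [n] (n - 1)" for n
  proof (rule eval_Pr_iterate[of Zr "[]" "\<lambda>n. n - 1"])
    show "eval Zr [] (0 - 1)" using ev_Zr by simp
    fix n show "eval (Pj 1) [n - 1, n] (Suc n - 1)" using eval_Pj1[of "n - 1" n "[]"] by simp
  qed
  then show ?thesis unfolding total_rec_def by blast
qed

lemma total_rec2_diff: "total_rec2 (\<lambda>x y. x - y)"
proof -
  obtain rp where rp: "\<And>x. eval rp [x] (x - 1)" using total_rec_pred_fun unfolding total_rec_def by blast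
  have "eval (Pr (Pj 0) (Cn rp [Pj 0])) [y, x] (x - y)" for x y
  proof (rule eval_Pr_iterate[of "Pj 0" "[x]" "\<lambda>n. x - n"])
    show "eval (Pj 0) [x] (x - 0)" using eval_Pj0[of x "[]"] by simp
    fix n show "eval (Cn rp [Pj 0]) [x - n, n, x] (x - Suc n)"
    proof -
      have e: "x - Suc n = (x - n) - 1" by simp
      show ?thesis unfolding e by (rule eval_Cn1[OF eval_Pj0 rp[of "x - n"]])
    qed
  qed
  then have "eval (Cn (Pr (Pj 0) (Cn rp [Pj 0])) [Pj 1, Pj 0]) [x, y] (x - y)" for x y
    by (blast intro: eval_Cn2 eval_Pj0 eval_Pj1)
  then show ?thesis unfolding total_rec2_def by blast
qed

lemma total_rec_triangle_fun: "total_rec triangle"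
proof -
  obtain ra where ra: "\<And>x y. eval ra [x, y] (x + y)" using total_rec2_add unfolding total_rec2_def by blast
  have "eval (Pr Zr (Cn ra [Pj 0, Cn Sc [Pj 1]])) [n] (triangle n)" for n
  proof (rule eval_Pr_iterate[of Zr "[]" "triangle"])
    show "eval Zr [] (triangle 0)" using ev_Zr by simp
    fix n show "eval (Cn ra [Pj 0, Cn Sc [Pj 1]]) [triangle n, n] (triangle (Suc n))"
      using eval_Cn2[OF eval_Pj0 eval_Cn1[OF eval_Pj1 ev_Sc] ra[of "triangle n" "Suc n"]] by simp
  qed
  then show ?thesis unfolding total_rec_def by blast
qed

lemma total_rec_minimize:
  assumes "total_rec2 F" "\<And>x. \<exists>n. F n x = 0"
  shows "total_rec (\<lambda>x. LEAST n. F n x = 0)"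
proof -
  obtain rf where rf: "\<And>x y. eval rf [x, y] (F x y)" using assms(1) unfolding total_rec2_def by blast
  have "eval (Mn rf) [x] (LEAST n. F n x = 0)" for x
  proof (rule ev_Mn)
    show "eval rf [LEAST n. F n x = 0, x] 0" using rf LeastI_ex[OF assms(2)[of x]] by metis
    show "\<forall>m<(LEAST n. F n x = 0). \<exists>v>0. eval rf [m, x] v"
      using rf not_less_Least by blast
  qed
  then show ?thesis unfolding total_rec_def by blast
qed

definition npair :: "nat \<Rightarrow> nat \<Rightarrow> nat" where "npair a b = prod_encode (a, b)"
definition nfst :: "nat \<Rightarrow> nat" where "nfst z = fst (prod_decode z)"
definition nsnd :: "nat \<Rightarrow> nat" where "nsnd z = snd (prod_decode z)"

lemma nfst_npair[simp]: "nfst (npair a b) = a" and nsnd_npair[simp]: "nsnd (npair a b) = b"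
  by (simp_all add: nfst_def nsnd_def npair_def)
lemma npair_nfst_nsnd[simp]: "npair (nfst z) (nsnd z) = z"
  by (simp add: nfst_def nsnd_def npair_def)
lemma le_npair1: "a \<le> npair a b" and le_npair2: "b \<le> npair a b"
  by (simp_all add: npair_def le_prod_encode_1 le_prod_encode_2)
lemma nfst_le: "nfst z \<le> z" by (metis le_npair1 npair_nfst_nsnd)
lemma nsnd_le: "nsnd z \<le> z" by (metis le_npair2 npair_nfst_nsnd)
lemma npair_mono: "a \<le> c \<Longrightarrow> b \<le> d \<Longrightarrow> npair a b \<le> npair c d"
proof -
  assume "a \<le> c" "b \<le> d"
  have "triangle (a + b) \<le> triangle (c + d)" using \<open>a \<le> c\<close> \<open>b \<le> d\<close>
    unfolding triangle_def by (intro div_le_mono mult_le_mono) auto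
  then show ?thesis using \<open>a \<le> c\<close> by (simp add: npair_def prod_encode_def)
qed
lemma le_triangle: "n \<le> triangle n" by (induction n) auto
lemma add_le_npair: "a + b \<le> npair a b"
  using le_triangle[of "a+b"] by (simp add: npair_def prod_encode_def)

lemma total_rec2_npair: "total_rec2 npair"
proof -
  have "npair = (\<lambda>x y. triangle (x + y) + x)" by (auto simp: npair_def prod_encode_def fun_eq_iff)
  moreover have "total_rec2 (\<lambda>x y. triangle (x + y))"
    using total_rec2_compose2[OF total_rec2_fst[OF total_rec_triangle_fun] total_rec2_add total_rec2_proj1] by simp
  then have "total_rec2 (\<lambda>x y. triangle (x + y) + x)"
    using total_rec2_compose2[OF total_rec2_add _ total_rec2_proj1] by blast
  ultimately show ?thesis by simp
qed

lemma triangle_mono: "m \<le> n \<Longrightarrow> triangle m \<le> triangle n"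
  unfolding triangle_def by (intro div_le_mono mult_le_mono) auto

definition tri_inv :: "nat \<Rightarrow> nat" where "tri_inv z = (LEAST s. z < triangle (Suc s))"

lemma triangle_nfst_nsnd: "z = triangle (nfst z + nsnd z) + nfst z"
proof -
  have "z = npair (nfst z) (nsnd z)" by simp
  also have "\<dots> = triangle (nfst z + nsnd z) + nfst z" by (simp add: npair_def prod_encode_def)
  finally show ?thesis .
qed
lemma tri_inv_eq: "tri_inv z = nfst z + nsnd z"
proof -
  have z: "z = triangle (nfst z + nsnd z) + nfst z"
    by (rule triangle_nfst_nsnd)
  show ?thesis unfolding tri_inv_def
  proof (rule Least_equality)
    show "z < triangle (Suc (nfst z + nsnd z))" by (subst z) simp
    fix y assume "z < triangle (Suc y)"
    show "nfst z + nsnd z \<le> y"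
    proof (rule ccontr)
      assume "\<not> ?thesis" then have "Suc y \<le> nfst z + nsnd z" by simp
      from triangle_mono[OF this] z \<open>z < triangle (Suc y)\<close> show False by linarith
    qed
  qed
qed

lemma nfst_tri_inv: "nfst z = z - triangle (tri_inv z)"
  unfolding tri_inv_eq using triangle_nfst_nsnd[of z] by linarith
lemma nsnd_tri_inv: "nsnd z = tri_inv z - nfst z"
  by (simp add: tri_inv_eq)

lemma total_rec_tri_inv_fun: "total_rec tri_inv"
proof -
  have "total_rec2 (\<lambda>n x. triangle (Suc n))"
    using total_rec2_fst[OF total_rec_compose[OF total_rec_triangle_fun total_rec_Suc[OF total_rec_id]]] .
  then have "total_rec2 (\<lambda>n x. 1 - (triangle (Suc n) - x))"
    by (rule total_rec2_compose2[OF total_rec2_diff total_rec2_const total_rec2_compose2[OF total_rec2_diff _ total_rec2_proj2]])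
  moreover have "(\<lambda>n x. 1 - (triangle (Suc n) - x)) = (\<lambda>n x. if x < triangle (Suc n) then 0 else 1)"
    by (auto simp: fun_eq_iff)
  ultimately have c: "total_rec2 (\<lambda>n x. if x < triangle (Suc n) then 0 else 1)" by simp
  have "\<exists>n. (if x < triangle (Suc n) then 0 else 1) = (0::nat)" for x
    using le_triangle[of "Suc x"] by (intro exI[of _ x]) auto
  from total_rec_minimize[OF c this] show ?thesis
    unfolding tri_inv_def by (simp add: if_split_eq1 cong: if_cong) 
qed

definition decidable :: "(nat \<Rightarrow> bool) \<Rightarrow> bool" where
  "decidable P \<longleftrightarrow> total_rec (\<lambda>x. if P x then 1 else 0)"

lemma total_rec_add[rec_intros]:
  "total_rec F \<Longrightarrow> total_rec G \<Longrightarrow> total_rec (\<lambda>x. F x + G x)"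
  by (rule total_rec2_compose[OF total_rec2_add])
lemma total_rec_mult[rec_intros]:
  "total_rec F \<Longrightarrow> total_rec G \<Longrightarrow> total_rec (\<lambda>x. F x * G x)"
  by (rule total_rec2_compose[OF total_rec2_mult])
lemma total_rec_diff[rec_intros]:
  "total_rec F \<Longrightarrow> total_rec G \<Longrightarrow> total_rec (\<lambda>x. F x - G x)"
  by (rule total_rec2_compose[OF total_rec2_diff])
lemma total_rec_npair[rec_intros]:
  "total_rec F \<Longrightarrow> total_rec G \<Longrightarrow> total_rec (\<lambda>x. npair (F x) (G x))"
  by (rule total_rec2_compose[OF total_rec2_npair])
lemma total_rec_triangle[rec_intros]: "total_rec F \<Longrightarrow> total_rec (\<lambda>x. triangle (F x))"
  by (rule total_rec_compose[OF total_rec_triangle_fun])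
lemma total_rec_tri_inv[rec_intros]: "total_rec F \<Longrightarrow> total_rec (\<lambda>x. tri_inv (F x))"
  by (rule total_rec_compose[OF total_rec_tri_inv_fun])
lemma total_rec_nfst[rec_intros]: "total_rec F \<Longrightarrow> total_rec (\<lambda>x. nfst (F x))"
proof -
  assume a: "total_rec F"
  show ?thesis unfolding nfst_tri_inv by (rule total_rec_diff[OF a total_rec_triangle[OF total_rec_tri_inv[OF a]]])
qed
lemma total_rec_nsnd[rec_intros]: "total_rec F \<Longrightarrow> total_rec (\<lambda>x. nsnd (F x))"
proof -
  assume a: "total_rec F"
  show ?thesis unfolding nsnd_tri_inv by (rule total_rec_diff[OF total_rec_tri_inv[OF a] total_rec_nfst[OF a]])
qed

lemma decidable_le[rec_intros]:
  "total_rec F \<Longrightarrow> total_rec G \<Longrightarrow> decidable (\<lambda>x. F x \<le> G x)"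
proof -
  assume "total_rec F" "total_rec G"
  then have "total_rec (\<lambda>x. 1 - (F x - G x))" by (intro rec_intros)
  moreover have "(\<lambda>x. 1 - (F x - G x)) = (\<lambda>x. if F x \<le> G x then 1 else 0)" by (auto simp: fun_eq_iff)
  ultimately show ?thesis unfolding decidable_def by simp
qed
lemma decidable_not[rec_intros]: "decidable P \<Longrightarrow> decidable (\<lambda>x. \<not> P x)"
proof -
  assume "decidable P"
  then have "total_rec (\<lambda>x. 1 - (if P x then 1 else 0))" unfolding decidable_def by (intro rec_intros)
  moreover have "(\<lambda>x. 1 - (if P x then 1 else 0)) = (\<lambda>x. if \<not> P x then 1 else (0::nat))" by (auto simp: fun_eq_iff)
  ultimately show ?thesis unfolding decidable_def by simp
qed
lemma decidable_conj[rec_intros]: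
  "decidable P \<Longrightarrow> decidable Q \<Longrightarrow> decidable (\<lambda>x. P x \<and> Q x)"
proof -
  assume "decidable P" "decidable Q"
  then have "total_rec (\<lambda>x. (if P x then 1 else 0) * (if Q x then 1 else 0))" unfolding decidable_def by (intro rec_intros)
  moreover have "(\<lambda>x. (if P x then 1 else 0) * (if Q x then 1 else 0)) = (\<lambda>x. if P x \<and> Q x then 1 else (0::nat))" by (auto simp: fun_eq_iff)
  ultimately show ?thesis unfolding decidable_def by simp
qed
lemma decidable_disj[rec_intros]:
  "decidable P \<Longrightarrow> decidable Q \<Longrightarrow> decidable (\<lambda>x. P x \<or> Q x)"
proof -
  assume "decidable P" "decidable Q"
  then have "decidable (\<lambda>x. \<not> (\<not> P x \<and> \<not> Q x))" by (intro decidable_not decidable_conj)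
  then show ?thesis by simp
qed
lemma decidable_imp[rec_intros]:
  "decidable P \<Longrightarrow> decidable Q \<Longrightarrow> decidable (\<lambda>x. P x \<longrightarrow> Q x)"
proof -
  assume "decidable P" "decidable Q"
  then have "decidable (\<lambda>x. \<not> P x \<or> Q x)" by (intro decidable_disj decidable_not)
  then show ?thesis unfolding imp_conv_disj .
qed
lemma decidable_less[rec_intros]:
  "total_rec F \<Longrightarrow> total_rec G \<Longrightarrow> decidable (\<lambda>x. F x < G x)"
proof -
  assume "total_rec F" "total_rec G"
  then have "decidable (\<lambda>x. \<not> G x \<le> F x)" by (intro rec_intros)
  then show ?thesis by (simp add: not_le)
qed
lemma decidable_eq[rec_intros]:
  "total_rec F \<Longrightarrow> total_rec G \<Longrightarrow> decidable (\<lambda>x. F x = G x)"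
proof -
  assume "total_rec F" "total_rec G"
  then have "decidable (\<lambda>x. F x \<le> G x \<and> G x \<le> F x)" by (intro rec_intros)
  then show ?thesis by (simp add: eq_iff)
qed
lemma decidable_const[rec_intros]: "decidable (\<lambda>x. b)"
  unfolding decidable_def by (cases b) (simp_all add: rec_intros)

lemma total_rec_if[rec_intros]:
  "decidable P \<Longrightarrow> total_rec F \<Longrightarrow> total_rec G \<Longrightarrow> total_rec (\<lambda>x. if P x then F x else G x)"
proof -
  assume "decidable P" "total_rec F" "total_rec G"
  then have "total_rec (\<lambda>x. (if P x then 1 else 0) * F x + (1 - (if P x then 1 else 0)) * G x)"
    unfolding decidable_def by (intro rec_intros)
  moreover have "(\<lambda>x. (if P x then 1 else 0) * F x + (1 - (if P x then 1 else 0)) * G x) = (\<lambda>x. if P x then F x else G x)"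
    by (auto simp: fun_eq_iff)
  ultimately show ?thesis by simp
qed

lemma total_rec2_of_npair: "total_rec (\<lambda>z. F (nfst z) (nsnd z)) \<Longrightarrow> total_rec2 F"
proof -
  assume "total_rec (\<lambda>z. F (nfst z) (nsnd z))"
  from total_rec2_compose[OF total_rec2_npair total_rec_id total_rec_id] total_rec_compose[OF this]
  have "total_rec2 (\<lambda>x y. (\<lambda>z. F (nfst z) (nsnd z)) (npair x y))"
    using total_rec2_compose2[OF total_rec2_fst[OF \<open>total_rec (\<lambda>z. F (nfst z) (nsnd z))\<close>] total_rec2_npair total_rec2_proj1] by simp
  then show ?thesis by simp
qed

lemma total_rec_funpow[rec_intros]:
  assumes "total_rec (\<lambda>z. F (nfst z) (nsnd z))" "total_rec N" "total_rec A"
  shows "total_rec (\<lambda>x. (F x ^^ N x) (A x))"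
proof -
  obtain rf where rf: "\<And>x y. eval rf [x, y] (F x y)" using total_rec2_of_npair[OF assms(1)] unfolding total_rec2_def by blast
  obtain rn where rn: "\<And>x. eval rn [x] (N x)" using assms(2) unfolding total_rec_def by blast
  obtain ra where ra: "\<And>x. eval ra [x] (A x)" using assms(3) unfolding total_rec_def by blast
  have "eval (Pr ra (Cn rf [Pj 2, Pj 0])) [n, x] ((F x ^^ n) (A x))" for n x
  proof (rule eval_Pr_iterate[of ra "[x]" "\<lambda>n. (F x ^^ n) (A x)"])
    show "eval ra [x] ((F x ^^ 0) (A x))" using ra by simp
    fix n show "eval (Cn rf [Pj 2, Pj 0]) [(F x ^^ n) (A x), n, x] ((F x ^^ Suc n) (A x))"
      using eval_Cn2[OF eval_Pj2 eval_Pj0 rf] by simp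
  qed
  then have "eval (Cn (Pr ra (Cn rf [Pj 2, Pj 0])) [rn, Pj 0]) [x] ((F x ^^ N x) (A x))" for x
    by (blast intro: eval_Cn2 rn eval_Pj0)
  then show ?thesis unfolding total_rec_def by blast
qed

lemma total_rec_Least:
  assumes "decidable (\<lambda>z. P (nfst z) (nsnd z))" "\<And>x. \<exists>n. P x n"
  shows "total_rec (\<lambda>x. LEAST n. P x n)"
proof -
  have "total_rec (\<lambda>z. if P (nsnd z) (nfst z) then 0 else 1)"
  proof -
    have "total_rec (\<lambda>z. if P (nfst z) (nsnd z) then 1 else 0)" using assms(1) unfolding decidable_def .
    from total_rec_compose[OF this total_rec_npair[OF total_rec_nsnd[OF total_rec_id] total_rec_nfst[OF total_rec_id]]]
    have "total_rec (\<lambda>z. if P (nsnd z) (nfst z) then 1 else 0)" by simp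
    then have "total_rec (\<lambda>z. 1 - (if P (nsnd z) (nfst z) then 1 else 0))" by (rule total_rec_diff[OF total_rec_const])
    moreover have "(\<lambda>z. 1 - (if P (nsnd z) (nfst z) then 1 else 0)) = (\<lambda>z. if P (nsnd z) (nfst z) then 0 else (1::nat))"
      by (auto simp: fun_eq_iff)
    ultimately show ?thesis by simp
  qed
  then have "total_rec2 (\<lambda>n x. if P x n then 0 else 1)" by (rule total_rec2_of_npair)
  from total_rec_minimize[OF this] assms(2) show ?thesis by (simp add: if_split_eq1 cong: if_cong)
qed

lemma total_rec_compose2:
  "total_rec (\<lambda>z. F (nfst z) (nsnd z)) \<Longrightarrow> total_rec G \<Longrightarrow> total_rec H \<Longrightarrow> total_rec (\<lambda>x. F (G x) (H x))"
  by (rule total_rec2_compose[OF total_rec2_of_npair])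

lemma decidable_compose2:
  "decidable (\<lambda>z. P (nfst z) (nsnd z)) \<Longrightarrow> total_rec G \<Longrightarrow> total_rec H \<Longrightarrow> decidable (\<lambda>x. P (G x) (H x))"
  unfolding decidable_def by (rule total_rec_compose2[where F="\<lambda>a b. if P a b then 1 else 0"])

text \<open>Bounded operations iterate a step function on a pair (counter, accumulator).\<close>

lemma ball_by_iteration:
  "((\<lambda>y. npair (Suc (nfst y)) (if P (nfst y) then nsnd y else 0)) ^^ n) (npair 0 1) = npair n (if \<forall>i<n. P i then 1 else 0)"
  by (induction n) (auto simp: less_Suc_eq)

lemma decidable_ball_less[rec_intros]:
  assumes "decidable (\<lambda>z. P (nfst z) (nsnd z))" "total_rec N"
  shows "decidable (\<lambda>x. \<forall>i<N x. P x i)"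
proof -
  have "total_rec (\<lambda>z. (\<lambda>x y. npair (Suc (nfst y)) (if P x (nfst y) then nsnd y else 0)) (nfst z) (nsnd z))"
    using decidable_compose2[OF assms(1) total_rec_nfst[OF total_rec_id] total_rec_nfst[OF total_rec_nsnd[OF total_rec_id]]]
    by (auto intro!: rec_intros)
  from total_rec_funpow[OF this assms(2) total_rec_const[of "npair 0 1"]]
  have "total_rec (\<lambda>x. nsnd (((\<lambda>y. npair (Suc (nfst y)) (if P x (nfst y) then nsnd y else 0)) ^^ N x) (npair 0 1)))"
    by (rule total_rec_nsnd)
  then show ?thesis unfolding ball_by_iteration decidable_def by simp
qed

lemma decidable_bex_less[rec_intros]:
  assumes "decidable (\<lambda>z. P (nfst z) (nsnd z))" "total_rec N"
  shows "decidable (\<lambda>x. \<exists>i<N x. P x i)"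
proof -
  have "decidable (\<lambda>z. \<not> P (nfst z) (nsnd z))" using assms(1) by (rule decidable_not)
  from decidable_not[OF decidable_ball_less[OF this assms(2)]] show ?thesis by simp
qed

lemma decidable_bex_le[rec_intros]:
  assumes "decidable (\<lambda>z. P (nfst z) (nsnd z))" "total_rec N"
  shows "decidable (\<lambda>x. \<exists>i\<le>N x. P x i)"
proof -
  from decidable_bex_less[OF assms(1) total_rec_Suc[OF assms(2)]] show ?thesis by (simp add: less_Suc_eq_le)
qed

fun bmax :: "(nat \<Rightarrow> nat) \<Rightarrow> nat \<Rightarrow> nat" where
  "bmax f 0 = 0"
| "bmax f (Suc n) = max (bmax f n) (f n)"

lemma bmax_ge: "i < n \<Longrightarrow> f i \<le> bmax f n"
  by (induction n) (auto simp: less_Suc_eq)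

lemma bmax_by_iteration:
  "((\<lambda>y. npair (Suc (nfst y)) (max (nsnd y) (f (nfst y)))) ^^ n) (npair 0 0) = npair n (bmax f n)"
  by (induction n) auto

lemma total_rec_max[rec_intros]:
  "total_rec F \<Longrightarrow> total_rec G \<Longrightarrow> total_rec (\<lambda>x. max (F x) (G x))"
proof -
  assume "total_rec F" "total_rec G"
  then have "total_rec (\<lambda>x. if F x \<le> G x then G x else F x)" by (intro total_rec_if decidable_le)
  then show ?thesis by (simp add: max_def)
qed

lemma total_rec_bmax[rec_intros]:
  assumes "total_rec (\<lambda>z. F (nfst z) (nsnd z))" "total_rec N"
  shows "total_rec (\<lambda>x. bmax (F x) (N x))"
proof -
  have "total_rec (\<lambda>z. (\<lambda>x y. npair (Suc (nfst y)) (max (nsnd y) (F x (nfst y)))) (nfst z) (nsnd z))"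
    using total_rec_compose2[OF assms(1) total_rec_nfst[OF total_rec_id] total_rec_nfst[OF total_rec_nsnd[OF total_rec_id]]]
    by (auto intro!: total_rec_npair total_rec_Suc total_rec_max total_rec_nfst total_rec_nsnd total_rec_id)
  from total_rec_nsnd[OF total_rec_funpow[OF this assms(2) total_rec_const[of "npair 0 0"]]]
  show ?thesis unfolding bmax_by_iteration by simp
qed

lemma total_rec_Least_bounded:
  assumes "decidable (\<lambda>z. P (nfst z) (nsnd z))" "total_rec N"
  shows "total_rec (\<lambda>x. LEAST n. P x n \<or> N x \<le> n)"
proof (rule total_rec_Least)
  show "decidable (\<lambda>z. P (nfst z) (nsnd z) \<or> N (nfst z) \<le> nsnd z)"
    using assms by (intro decidable_disj decidable_le total_rec_compose[OF assms(2)] total_rec_nfst total_rec_nsnd total_rec_id)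
  show "\<exists>n. P x n \<or> N x \<le> n" for x by auto
qed

lemma total_rec_div[rec_intros]:
  "total_rec F \<Longrightarrow> total_rec G \<Longrightarrow> total_rec (\<lambda>x. F x div G x)"
proof -
  assume f: "total_rec F" and g: "total_rec G"
  have "decidable (\<lambda>z. nsnd (nfst z) < nfst (nfst z) * Suc (nsnd z))" by (intro rec_intros)
  from total_rec_Least_bounded[OF this total_rec_nsnd[OF total_rec_id]]
  have c: "total_rec (\<lambda>z. LEAST q. nsnd z < nfst z * Suc q \<or> nsnd z \<le> q)" by simp
  have e: "(LEAST q. x < y * Suc q \<or> x \<le> q) = x div y" if "y \<noteq> 0" for x y :: nat
  proof (rule Least_equality)
    show "x < y * Suc (x div y) \<or> x \<le> x div y"
      using that by (simp add: dividend_less_times_div)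
    fix q assume "x < y * Suc q \<or> x \<le> q"
    then show "x div y \<le> q"
    proof
      assume "x < y * Suc q"
      then have "x div y < Suc q" using that by (simp add: div_less_iff_less_mult mult.commute)
      then show ?thesis by simp
    next
      assume "x \<le> q" then show ?thesis using div_le_dividend[of x y] by linarith
    qed
  qed
  have "total_rec (\<lambda>x. if G x = 0 then 0 else (\<lambda>a b. LEAST q. b < a * Suc q \<or> b \<le> q) (G x) (F x))"
    by (intro total_rec_if decidable_eq g total_rec_const total_rec_compose2[OF c g f])
  moreover have "(\<lambda>x. if G x = 0 then 0 else (\<lambda>a b. LEAST q. b < a * Suc q \<or> b \<le> q) (G x) (F x)) = (\<lambda>x. F x div G x)"
    using e by (auto simp: fun_eq_iff)
  ultimately show ?thesis by simp
qed

lemma total_rec_mod[rec_intros]: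
  "total_rec F \<Longrightarrow> total_rec G \<Longrightarrow> total_rec (\<lambda>x. F x mod G x)"
proof -
  assume f: "total_rec F" and g: "total_rec G"
  have "total_rec (\<lambda>x. F x - G x * (F x div G x))" by (intro total_rec_diff total_rec_mult total_rec_div f g)
  then show ?thesis by (simp add: minus_mult_div_eq_mod)
qed

lemma total_rec_power2[rec_intros]: "total_rec F \<Longrightarrow> total_rec (\<lambda>x. 2 ^ F x)"
proof -
  assume f: "total_rec F"
  have "total_rec (\<lambda>x. ((\<lambda>x y. 2 * y) x ^^ F x) 1)"
    by (rule total_rec_funpow[OF _ f total_rec_const]) (auto intro!: rec_intros)
  moreover have "((\<lambda>y. 2 * y) ^^ n) 1 = (2::nat) ^ n" for n by (induction n) auto
  ultimately show ?thesis by simp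
qed

lemma decidable_mem_finite:
  "finite S \<Longrightarrow> total_rec F \<Longrightarrow> decidable (\<lambda>x. F x \<in> S)"
proof (induction S rule: finite_induct)
  case empty then show ?case by (simp add: decidable_const)
next
  case (insert a S)
  then have "decidable (\<lambda>x. F x = a \<or> F x \<in> S)" by (intro decidable_disj decidable_eq total_rec_const) auto
  then show ?case by simp
qed

definition lhd :: "nat \<Rightarrow> nat" where "lhd c = nfst (c - 1)"
definition ltl :: "nat \<Rightarrow> nat" where "ltl c = (if c = 0 then 0 else nsnd (c - 1))"

lemma list_decode_lhd_ltl: "list_decode c = (if c = 0 then [] else lhd c # list_decode (ltl c))"
  by (cases c) (auto simp: lhd_def ltl_def nfst_def nsnd_def split: prod.split)

lemma ltl_le: "ltl c \<le> c" unfolding ltl_def using nsnd_le[of "c - 1"] by auto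
lemma lhd_le: "lhd c \<le> c" unfolding lhd_def using nfst_le[of "c - 1"] by auto
lemma ltl_less: "c > 0 \<Longrightarrow> ltl c < c"
  unfolding ltl_def using nsnd_le[of "c - 1"] by auto

lemma total_rec_lhd[rec_intros]: "total_rec F \<Longrightarrow> total_rec (\<lambda>x. lhd (F x))"
  unfolding lhd_def by (intro rec_intros)
lemma total_rec_ltl[rec_intros]: "total_rec F \<Longrightarrow> total_rec (\<lambda>x. ltl (F x))"
  unfolding ltl_def by (intro rec_intros)

lemma list_decode_ltl_iter: "list_decode ((ltl ^^ i) c) = drop i (list_decode c)"
proof (induction i arbitrary: c)
  case 0 then show ?case by simp
next
  case (Suc i)
  have h: "(ltl ^^ Suc i) c = (ltl ^^ i) (ltl c)" by (simp only: funpow_Suc_right comp_def)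
  have "drop (Suc i) (list_decode c) = drop i (list_decode (ltl c))"
  proof (cases "c = 0")
    case True then show ?thesis by (simp add: ltl_def)
  next
    case False then show ?thesis using list_decode_lhd_ltl[of c] by simp
  qed
  then show ?case using h Suc.IH[of "ltl c"] by simp
qed

definition lnth :: "nat \<Rightarrow> nat \<Rightarrow> nat" where "lnth c i = lhd ((ltl ^^ i) c)"
definition llen :: "nat \<Rightarrow> nat" where "llen c = length (list_decode c)"

lemma lnth_eq: "i < length (list_decode c) \<Longrightarrow> lnth c i = list_decode c ! i"
proof -
  assume i: "i < length (list_decode c)"
  let ?d = "(ltl ^^ i) c"
  have "list_decode ?d = drop i (list_decode c)" by (rule list_decode_ltl_iter)
  moreover have "drop i (list_decode c) = list_decode c ! i # drop (Suc i) (list_decode c)"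
    using i by (simp add: Cons_nth_drop_Suc)
  ultimately have "list_decode ?d \<noteq> []" and "list_decode ?d = list_decode c ! i # drop (Suc i) (list_decode c)" by auto
  moreover from this(1) have "?d \<noteq> 0" by (rule contrapos_nn) simp
  ultimately show ?thesis unfolding lnth_def using list_decode_lhd_ltl[of ?d] by auto
qed

lemma lnth_encode: "i < length xs \<Longrightarrow> lnth (list_encode xs) i = xs ! i"
  using lnth_eq[of i "list_encode xs"] by simp

lemma length_list_decode_le: "length (list_decode c) \<le> c"
proof (induction c rule: less_induct)
  case (less c)
  show ?case
  proof (cases "c = 0")
    case False
    then have "length (list_decode c) = Suc (length (list_decode (ltl c)))" using list_decode_lhd_ltl[of c] by simp
    moreover have "length (list_decode (ltl c)) \<le> ltl c" using less[OF ltl_less] False by simp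
    moreover have "ltl c < c" using False by (simp add: ltl_less)
    ultimately show ?thesis by linarith
  qed simp
qed

lemma llen_alt: "llen c = (LEAST n. (ltl ^^ n) c = 0 \<or> c \<le> n)"
proof (rule Least_equality[symmetric])
  have "list_decode ((ltl ^^ llen c) c) = []" unfolding llen_def list_decode_ltl_iter by simp
  then have "list_encode (list_decode ((ltl ^^ llen c) c)) = list_encode []" by simp
  then show "(ltl ^^ llen c) c = 0 \<or> c \<le> llen c" by (simp only: list_decode_inverse) simp
  fix n assume "(ltl ^^ n) c = 0 \<or> c \<le> n"
  then show "llen c \<le> n"
  proof
    assume "(ltl ^^ n) c = 0"
    then have "drop n (list_decode c) = []" using list_decode_ltl_iter[of n c] by simp
    then show ?thesis unfolding llen_def by simp
  next
    assume "c \<le> n" then show ?thesis unfolding llen_def using length_list_decode_le[of c] by simp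
  qed
qed

lemma total_rec_ltl_funpow[rec_intros]:
  "total_rec F \<Longrightarrow> total_rec G \<Longrightarrow> total_rec (\<lambda>x. (ltl ^^ F x) (G x))"
  by (rule total_rec_funpow[where F="\<lambda>x. ltl"]) (auto intro!: rec_intros)

lemma total_rec_lnth[rec_intros]:
  "total_rec F \<Longrightarrow> total_rec G \<Longrightarrow> total_rec (\<lambda>x. lnth (F x) (G x))"
  unfolding lnth_def by (intro total_rec_lhd total_rec_ltl_funpow)

lemma total_rec_llen[rec_intros]: "total_rec F \<Longrightarrow> total_rec (\<lambda>x. llen (F x))"
proof -
  assume f: "total_rec F"
  have "total_rec (\<lambda>z. LEAST n. (ltl ^^ n) z = 0 \<or> z \<le> n)"
    by (rule total_rec_Least_bounded[where P="\<lambda>z n. (ltl ^^ n) z = 0" and N="\<lambda>z. z"])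
       (auto intro!: rec_intros)
  from total_rec_compose[OF this f] show ?thesis unfolding llen_alt .
qed

definition lcons :: "nat \<Rightarrow> nat \<Rightarrow> nat" where "lcons a c = Suc (npair a c)"
lemma lcons_list_encode: "lcons a (list_encode xs) = list_encode (a # xs)"
  by (simp add: lcons_def npair_def)
lemma total_rec_lcons[rec_intros]:
  "total_rec F \<Longrightarrow> total_rec G \<Longrightarrow> total_rec (\<lambda>x. lcons (F x) (G x))"
  unfolding lcons_def by (intro rec_intros)

lemma list_build_by_iteration:
  "((\<lambda>y. npair (Suc (nfst y)) (lcons (f (n - Suc (nfst y))) (nsnd y))) ^^ j) (npair 0 0) = npair j (list_encode (map f [n - j..<n]))"
  if "j \<le> n" for n
  using that
proof (induction j)
  case 0 then show ?case by simp
next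
  case (Suc j)
  then have "[n - Suc j..<n] = (n - Suc j) # [n - j..<n]"
  proof -
    have a: "n - Suc j < n" and b: "Suc (n - Suc j) = n - j" using Suc.prems by auto
    show ?thesis using upt_conv_Cons[OF a] unfolding b .
  qed
  with Suc show ?case by (simp add: lcons_list_encode)
qed

lemma total_rec_list_encode_map[rec_intros]:
  assumes "total_rec (\<lambda>z. F (nfst z) (nsnd z))" "total_rec N"
  shows "total_rec (\<lambda>x. list_encode (map (F x) [0..<N x]))"
proof -
  have "total_rec (\<lambda>z. (\<lambda>x y. npair (Suc (nfst y)) (lcons (F x (N x - Suc (nfst y))) (nsnd y))) (nfst z) (nsnd z))"
    using total_rec_compose2[OF assms(1) total_rec_nfst[OF total_rec_id] total_rec_diff[OF total_rec_compose[OF assms(2) total_rec_nfst[OF total_rec_id]] total_rec_Suc[OF total_rec_nfst[OF total_rec_nsnd[OF total_rec_id]]]]]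
    by (auto intro!: total_rec_npair total_rec_Suc total_rec_lcons total_rec_nfst total_rec_nsnd total_rec_id)
  from total_rec_nsnd[OF total_rec_funpow[OF this assms(2) total_rec_const[of "npair 0 0"]]]
  show ?thesis using list_build_by_iteration[of "N x" "N x" "F x" for x] by simp
qed

section \<open>A clocked evaluator\<close>

text \<open>A total evaluator of recf with a clock t that bounds the range of every \<mu>-search. In
  mu_search, 0 means that all values seen so far are positive, 1 that an undefined value was
  met, and n + 2 that n is the least zero.\<close>

fun iter_opt :: "nat option \<Rightarrow> (nat \<Rightarrow> nat \<Rightarrow> nat option) \<Rightarrow> nat \<Rightarrow> nat option" where
  "iter_opt a H 0 = a"
| "iter_opt a H (Suc m) = (case iter_opt a H m of None \<Rightarrow> None | Some y \<Rightarrow> H y m)"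

fun mu_search :: "(nat \<Rightarrow> nat option) \<Rightarrow> nat \<Rightarrow> nat" where
  "mu_search F 0 = 0"
| "mu_search F (Suc j) = (if mu_search F j = 0 then (case F j of None \<Rightarrow> 1 | Some v \<Rightarrow> if v = 0 then Suc (Suc j) else 0) else mu_search F j)"

fun eval_clocked :: "recf \<Rightarrow> nat \<Rightarrow> nat list \<Rightarrow> nat option" where
  "eval_clocked Zr t xs = Some 0"
| "eval_clocked Sc t xs = (case xs of [] \<Rightarrow> None | x # _ \<Rightarrow> Some (Suc x))"
| "eval_clocked (Pj i) t xs = (if i < length xs then Some (xs ! i) else None)"
| "eval_clocked (Cn f gs) t xs = (if (\<forall>g\<in>set gs. eval_clocked g t xs \<noteq> None) then eval_clocked f t (map (\<lambda>g. the (eval_clocked g t xs)) gs) else None)"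
| "eval_clocked (Pr g h) t xs = (case xs of [] \<Rightarrow> None | n # ys \<Rightarrow> iter_opt (eval_clocked g t ys) (\<lambda>y m. eval_clocked h t (y # m # ys)) n)"
| "eval_clocked (Mn f) t xs = (let s = mu_search (\<lambda>m. eval_clocked f t (m # xs)) t in if 2 \<le> s then Some (s - 2) else None)"

lemma mu_search_zero: "(\<forall>m<j. \<exists>v>0. F m = Some v) \<Longrightarrow> mu_search F j = 0"
  by (induction j) auto

lemma mu_search_zeroD: "mu_search F j = 0 \<Longrightarrow> \<forall>m<j. \<exists>v>0. F m = Some v"
proof (induction j)
  case (Suc j)
  then have a: "mu_search F j = 0" by (auto split: if_splits)
  with Suc.prems have "\<exists>v>0. F j = Some v" by (auto split: option.splits if_splits)
  with Suc.IH[OF a] show ?case by (auto simp: less_Suc_eq)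
qed simp

lemma mu_search_found:
  "mu_search F j = Suc (Suc n) \<Longrightarrow> n < j \<and> F n = Some 0 \<and> (\<forall>m<n. \<exists>v>0. F m = Some v)"
proof (induction j)
  case (Suc j)
  show ?case
  proof (cases "mu_search F j = 0")
    case True
    with Suc.prems have "n = j" "F j = Some 0" by (auto split: option.splits if_splits)
    with mu_search_zeroD[OF True] show ?thesis by auto
  next
    case False
    with Suc.prems have "mu_search F j = Suc (Suc n)" by simp
    with Suc.IH show ?thesis by auto
  qed
qed simp

lemma mu_search_find:
  "F n = Some 0 \<Longrightarrow> (\<forall>m<n. \<exists>v>0. F m = Some v) \<Longrightarrow> n < j \<Longrightarrow> mu_search F j = Suc (Suc n)"
proof (induction j)
  case (Suc j)
  show ?case
  proof (cases "n < j")
    case True then show ?thesis using Suc by simp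
  next
    case False then have "n = j" using Suc.prems by simp
    with mu_search_zero[OF Suc.prems(2)] Suc.prems(1) show ?thesis by simp
  qed
qed simp

lemma eval_clocked_Pr_Suc:
  "eval_clocked (Pr g h) t (Suc n # xs) = (case eval_clocked (Pr g h) t (n # xs) of None \<Rightarrow> None | Some y \<Rightarrow> eval_clocked h t (y # n # xs))"
  by simp

lemma list_all2_map_self: "(\<forall>g\<in>set gs. P g (F g)) \<Longrightarrow> list_all2 P gs (map F gs)"
  by (induction gs) auto

lemma eval_clocked_sound: "eval_clocked r t xs = Some v \<Longrightarrow> eval r xs v"
proof (induction r arbitrary: xs v)
  case Zr then show ?case by (auto intro: ev_Zr)
next
  case Sc then show ?case by (auto intro: ev_Sc split: list.splits)
next
  case (Pj i) then show ?case by (auto intro: ev_Pj split: if_splits)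
next
  case (Cn f gs)
  from Cn.prems have a: "\<forall>g\<in>set gs. eval_clocked g t xs \<noteq> None" and b: "eval_clocked f t (map (\<lambda>g. the (eval_clocked g t xs)) gs) = Some v"
    by (auto split: if_splits)
  have "list_all2 (\<lambda>g y. eval g xs y) gs (map (\<lambda>g. the (eval_clocked g t xs)) gs)"
    using a Cn.IH(2) by (intro list_all2_map_self) auto
  from this Cn.IH(1)[OF b] show ?case by (rule ev_Cn)
next
  case (Pr g h)
  from Pr.prems obtain n ys where xs: "xs = n # ys" by (cases xs) auto
  have "eval_clocked (Pr g h) t (n # ys) = Some v \<Longrightarrow> eval (Pr g h) (n # ys) v" for v
  proof (induction n arbitrary: v)
    case 0 then show ?case using Pr.IH(1) by (auto intro: ev_Pr0)
  next
    case (Suc n)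
    from Suc.prems obtain y where "eval_clocked (Pr g h) t (n # ys) = Some y" "eval_clocked h t (y # n # ys) = Some v"
      by (auto simp only: eval_clocked_Pr_Suc split: option.splits)
    with Suc.IH Pr.IH(2) show ?case by (blast intro: ev_PrS)
  qed
  with Pr.prems xs show ?case by simp
next
  case (Mn f)
  let ?F = "\<lambda>m. eval_clocked f t (m # xs)"
  from Mn.prems have "mu_search ?F t = Suc (Suc v)" by (auto simp: Let_def split: if_splits)
  from mu_search_found[OF this] Mn.IH show ?case by (blast intro: ev_Mn)
qed

lemma ex_common_threshold:
  "(\<forall>m<(n::nat). \<exists>t::nat. \<forall>t'\<ge>t. P m t') \<Longrightarrow> \<exists>t. \<forall>m<n. \<forall>t'\<ge>t. P m t'"
proof (induction n)
  case (Suc n)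
  then obtain t1 where t1: "\<forall>m<n. \<forall>t'\<ge>t1. P m t'" by auto
  from Suc.prems obtain t2 where t2: "\<forall>t'\<ge>t2. P n t'" by auto
  show ?case by (rule exI[of _ "max t1 t2"]) (use t1 t2 in \<open>auto simp: less_Suc_eq\<close>)
qed simp

lemma eval_clocked_complete:
  "eval r xs v \<Longrightarrow> \<exists>t. \<forall>t'\<ge>t. eval_clocked r t' xs = Some v"
proof (induction r xs v rule: eval.induct)
  case (ev_Cn xs gs ys f z)
  have len: "length ys = length gs" using ev_Cn.IH(1) by (simp add: list_all2_lengthD)
  have "\<forall>m<length gs. \<exists>t. \<forall>t'\<ge>t. eval_clocked (gs ! m) t' xs = Some (ys ! m)"
    using ev_Cn.IH(1) by (auto simp: list_all2_conv_all_nth)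
  from ex_common_threshold[OF this] obtain t1 where t1: "\<forall>m<length gs. \<forall>t'\<ge>t1. eval_clocked (gs ! m) t' xs = Some (ys ! m)" by blast
  from ev_Cn.IH(2) obtain t2 where t2: "\<forall>t'\<ge>t2. eval_clocked f t' ys = Some z" by blast
  have "eval_clocked (Cn f gs) t' xs = Some z" if "t' \<ge> max t1 t2" for t'
  proof -
    have "\<forall>g\<in>set gs. eval_clocked g t' xs \<noteq> None" using t1 that by (auto simp: in_set_conv_nth)
    moreover have "map (\<lambda>g. the (eval_clocked g t' xs)) gs = ys" using t1 that len by (auto intro!: nth_equalityI)
    ultimately show ?thesis using t2 that by simp
  qed
  then show ?case by blast
next
  case (ev_PrS g h n xs y z)
  then obtain t1 t2 where "\<forall>t'\<ge>t1. eval_clocked (Pr g h) t' (n # xs) = Some y" "\<forall>t'\<ge>t2. eval_clocked h t' (y # n # xs) = Some z" by blast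
  then have "\<forall>t'\<ge>max t1 t2. eval_clocked (Pr g h) t' (Suc n # xs) = Some z" by (simp only: eval_clocked_Pr_Suc) simp
  then show ?case by blast
next
  case (ev_Mn f n xs)
  from ev_Mn.IH(1) obtain t1 where t1: "\<forall>t'\<ge>t1. eval_clocked f t' (n # xs) = Some 0" by blast
  have "\<forall>m<n. \<exists>t. \<forall>t'\<ge>t. \<exists>v>0. eval_clocked f t' (m # xs) = Some v"
    using ev_Mn.IH(2) by metis
  from ex_common_threshold[OF this] obtain t2 where t2: "\<forall>m<n. \<forall>t'\<ge>t2. \<exists>v>0. eval_clocked f t' (m # xs) = Some v" by blast
  have "eval_clocked (Mn f) t' xs = Some n" if "t' \<ge> max (max t1 t2) (Suc n)" for t'
  proof -
    have "mu_search (\<lambda>m. eval_clocked f t' (m # xs)) t' = Suc (Suc n)"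
      using t1 t2 that by (intro mu_search_find) auto
    then show ?thesis by (simp add: Let_def)
  qed
  then show ?case by blast
qed auto

definition option_code :: "nat option \<Rightarrow> nat" where "option_code a = (case a of None \<Rightarrow> 0 | Some v \<Rightarrow> Suc v)"

lemma option_code_simps[simp]: "option_code None = 0" "option_code (Some v) = Suc v"
  by (simp_all add: option_code_def)
lemma option_code_eq_0_iff[simp]: "option_code a = 0 \<longleftrightarrow> a = None"
  by (cases a) auto
lemma option_code_minus_1: "a \<noteq> None \<Longrightarrow> option_code a - 1 = the a"
  by (cases a) auto

definition eval_clocked_code :: "recf \<Rightarrow> nat \<Rightarrow> nat" where
  "eval_clocked_code r z = option_code (eval_clocked r (nfst z) (list_decode (nsnd z)))"

lemma list_decode_ltl: "list_decode (ltl c) = tl (list_decode c)"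
  using list_decode_lhd_ltl[of c] by (cases "c = 0") (auto simp: ltl_def)

lemma list_decode_lcons: "list_decode (lcons a c) = a # list_decode c"
proof -
  have "lcons a c = list_encode (a # list_decode c)" using lcons_list_encode[of a "list_decode c"] by simp
  then show ?thesis by simp
qed

lemma total_rec_list_encode_funs:
  "(\<forall>g\<in>set gs. total_rec (F g)) \<Longrightarrow> total_rec (\<lambda>z. list_encode (map (\<lambda>g. F g z) gs))"
proof (induction gs)
  case Nil then show ?case by (simp add: total_rec_const)
next
  case (Cons g gs)
  then have "total_rec (\<lambda>z. lcons (F g z) (list_encode (map (\<lambda>g. F g z) gs)))" by (intro total_rec_lcons) auto
  then show ?case by (simp add: lcons_list_encode)
qed

lemma decidable_all_nonzero:
  "(\<forall>g\<in>set gs. total_rec (F g)) \<Longrightarrow> decidable (\<lambda>z. \<forall>g\<in>set gs. F g z \<noteq> 0)"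
proof (induction gs)
  case Nil then show ?case by (simp add: decidable_const)
next
  case (Cons g gs)
  then have "decidable (\<lambda>z. \<not> F g z = 0 \<and> (\<forall>g\<in>set gs. F g z \<noteq> 0))" by (intro decidable_conj decidable_not decidable_eq total_rec_const) auto
  then show ?case by simp
qed

lemma iter_opt_by_iteration:
  "((\<lambda>y. npair (Suc (nfst y)) (if nsnd y = 0 then 0 else option_code (H (nsnd y - 1) (nfst y)))) ^^ n) (npair 0 (option_code a))
   = npair n (option_code (iter_opt a H n))"
  by (induction n) (auto simp: option_code_minus_1 split: option.splits)

lemma mu_search_by_iteration:
  "((\<lambda>y. npair (Suc (nfst y)) (if nsnd y = 0 then (if option_code (F (nfst y)) = 0 then 1 else if option_code (F (nfst y)) = 1 then Suc (Suc (nfst y)) else 0) else nsnd y)) ^^ n) (npair 0 0)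
   = npair n (mu_search F n)"
proof (induction n)
  case (Suc n)
  then show ?case by (cases "F n") auto
qed simp

lemma total_rec_eval_clocked_code_Cn:
  assumes f: "total_rec (eval_clocked_code f)" and gs: "\<forall>g\<in>set gs. total_rec (eval_clocked_code g)"
  shows "total_rec (eval_clocked_code (Cn f gs))"
proof -
  let ?ys = "\<lambda>z. list_encode (map (\<lambda>g. eval_clocked_code g z - 1) gs)"
  have eq: "eval_clocked_code (Cn f gs) z = (if \<forall>g\<in>set gs. eval_clocked_code g z \<noteq> 0
      then eval_clocked_code f (npair (nfst z) (?ys z)) else 0)" for z
  proof (cases "\<forall>g\<in>set gs. eval_clocked_code g z \<noteq> 0")
    case True
    then have "\<forall>g\<in>set gs. eval_clocked g (nfst z) (list_decode (nsnd z)) \<noteq> None"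
      by (simp add: eval_clocked_code_def)
    then have m: "map (\<lambda>g. eval_clocked_code g z - 1) gs
        = map (\<lambda>g. the (eval_clocked g (nfst z) (list_decode (nsnd z)))) gs"
      and e: "eval_clocked_code (Cn f gs) z = eval_clocked_code f (npair (nfst z)
        (list_encode (map (\<lambda>g. the (eval_clocked g (nfst z) (list_decode (nsnd z)))) gs)))"
      by (auto simp: eval_clocked_code_def option_code_minus_1)
    show ?thesis using True unfolding m e by simp
  qed (auto simp: eval_clocked_code_def)
  have "\<forall>g\<in>set gs. total_rec (\<lambda>z. eval_clocked_code g z - 1)"
    using gs by (auto intro: total_rec_diff total_rec_const)
  then have "total_rec (\<lambda>z. if \<forall>g\<in>set gs. eval_clocked_code g z \<noteq> 0
      then eval_clocked_code f (npair (nfst z) (?ys z)) else 0)"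
    using gs by (intro total_rec_if decidable_all_nonzero total_rec_compose[OF f] total_rec_npair
        total_rec_nfst total_rec_id total_rec_const total_rec_list_encode_funs)
  then show ?thesis unfolding eq[abs_def] .
qed

lemma total_rec_eval_clocked_code_Pr:
  assumes g: "total_rec (eval_clocked_code g)" and h: "total_rec (eval_clocked_code h)"
  shows "total_rec (eval_clocked_code (Pr g h))"
proof -
  let ?H = "\<lambda>z y m. eval_clocked h (nfst z) (y # m # tl (list_decode (nsnd z)))"
  let ?st = "\<lambda>z y. npair (Suc (nfst y)) (if nsnd y = 0 then 0 else option_code (?H z (nsnd y - 1) (nfst y)))"
  let ?start = "\<lambda>z. npair 0 (eval_clocked_code g (npair (nfst z) (ltl (nsnd z))))"
  have eq: "eval_clocked_code (Pr g h) z =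
      (if llen (nsnd z) = 0 then 0 else nsnd ((?st z ^^ lnth (nsnd z) 0) (?start z)))" for z
  proof (cases "list_decode (nsnd z)")
    case (Cons n ys)
    have tl: "tl (list_decode (nsnd z)) = ys" using Cons by simp
    have "lnth (nsnd z) 0 = n" using Cons lnth_eq[of 0 "nsnd z"] by simp
    then show ?thesis unfolding tl
      using iter_opt_by_iteration[where H="\<lambda>y m. eval_clocked h (nfst z) (y # m # ys)" and n=n]
      by (simp add: eval_clocked_code_def llen_def list_decode_ltl Cons)
  qed (simp add: eval_clocked_code_def llen_def)
  have eh: "option_code (?H z y m) = eval_clocked_code h (npair (nfst z) (lcons y (lcons m (ltl (nsnd z)))))" for z y m
    by (simp add: eval_clocked_code_def list_decode_ltl list_decode_lcons)
  have "total_rec (\<lambda>w. npair (Suc (nfst (nsnd w))) (if nsnd (nsnd w) = 0 then 0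
      else eval_clocked_code h (npair (nfst (nfst w)) (lcons (nsnd (nsnd w) - 1) (lcons (nfst (nsnd w)) (ltl (nsnd (nfst w))))))))"
    by (intro rec_intros total_rec_compose[OF h])
  then have st: "total_rec (\<lambda>w. ?st (nfst w) (nsnd w))" by (simp only: eh)
  have "total_rec (\<lambda>z. if llen (nsnd z) = 0 then 0 else nsnd ((?st z ^^ lnth (nsnd z) 0) (?start z)))"
    by (intro total_rec_if decidable_eq total_rec_llen total_rec_nsnd total_rec_id total_rec_const
        total_rec_funpow[OF st] total_rec_lnth total_rec_npair total_rec_compose[OF g] total_rec_nfst total_rec_ltl)
  then show ?thesis unfolding eq[abs_def] .
qed

lemma total_rec_eval_clocked_code_Mn:
  assumes f: "total_rec (eval_clocked_code f)"
  shows "total_rec (eval_clocked_code (Mn f))"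
proof -
  let ?F = "\<lambda>z m. eval_clocked f (nfst z) (m # list_decode (nsnd z))"
  let ?st = "\<lambda>z y. npair (Suc (nfst y)) (if nsnd y = 0 then (if option_code (?F z (nfst y)) = 0 then 1
      else if option_code (?F z (nfst y)) = 1 then Suc (Suc (nfst y)) else 0) else nsnd y)"
  let ?s = "\<lambda>z. nsnd ((?st z ^^ nfst z) (npair 0 0))"
  have eq: "eval_clocked_code (Mn f) z = (if 2 \<le> ?s z then Suc (?s z - 2) else 0)" for z
    using mu_search_by_iteration[where F="?F z" and n="nfst z"]
    by (simp add: eval_clocked_code_def Let_def)
  have ef: "option_code (?F z m) = eval_clocked_code f (npair (nfst z) (lcons m (nsnd z)))" for z m
    by (simp add: eval_clocked_code_def list_decode_lcons)
  have "total_rec (\<lambda>w. npair (Suc (nfst (nsnd w))) (if nsnd (nsnd w) = 0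
      then (if eval_clocked_code f (npair (nfst (nfst w)) (lcons (nfst (nsnd w)) (nsnd (nfst w)))) = 0 then 1
        else if eval_clocked_code f (npair (nfst (nfst w)) (lcons (nfst (nsnd w)) (nsnd (nfst w)))) = 1
        then Suc (Suc (nfst (nsnd w))) else 0) else nsnd (nsnd w)))"
    by (intro rec_intros total_rec_compose[OF f])
  then have st: "total_rec (\<lambda>w. ?st (nfst w) (nsnd w))" by (simp only: ef)
  have "total_rec (\<lambda>z. if 2 \<le> ?s z then Suc (?s z - 2) else 0)"
    by (intro total_rec_if decidable_le total_rec_const total_rec_Suc total_rec_diff total_rec_nsnd
        total_rec_funpow[OF st] total_rec_nfst total_rec_id)
  then show ?thesis unfolding eq[abs_def] .
qed

lemma total_rec_eval_clocked_code_fun: "total_rec (eval_clocked_code r)"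
proof (induction r)
  case Zr
  have "eval_clocked_code Zr = (\<lambda>z. 1)" by (auto simp: eval_clocked_code_def fun_eq_iff)
  then show ?case by (simp add: total_rec_const)
next
  case Sc
  have "eval_clocked_code Sc = (\<lambda>z. if llen (nsnd z) = 0 then 0 else Suc (Suc (lnth (nsnd z) 0)))"
    by (auto simp: eval_clocked_code_def fun_eq_iff llen_def lnth_eq hd_conv_nth split: list.splits)
  then show ?case by (simp add: rec_intros)
next
  case (Pj i)
  have "eval_clocked_code (Pj i) = (\<lambda>z. if i < llen (nsnd z) then Suc (lnth (nsnd z) i) else 0)"
    by (auto simp: eval_clocked_code_def fun_eq_iff llen_def lnth_eq)
  then show ?case by (simp add: rec_intros)
next
  case (Cn f gs) then show ?case by (intro total_rec_eval_clocked_code_Cn) auto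
next
  case (Pr g h) then show ?case by (rule total_rec_eval_clocked_code_Pr)
next
  case (Mn f) then show ?case by (rule total_rec_eval_clocked_code_Mn)
qed

section \<open>Rational arithmetic on codes\<close>

definition qP :: "nat \<Rightarrow> nat" where "qP q = nfst q"
definition qN :: "nat \<Rightarrow> nat" where "qN q = nfst (nsnd q)"
definition qD :: "nat \<Rightarrow> nat" where "qD q = Suc (nsnd (nsnd q))"
definition qmk :: "nat \<Rightarrow> nat \<Rightarrow> nat \<Rightarrow> nat" where "qmk P N D = npair P (npair N (D - 1))"
definition qval :: "nat \<Rightarrow> real" where "qval q = (real (qP q) - real (qN q)) / real (qD q)"

lemma qD_pos: "0 < qD q" by (simp add: qD_def)
lemma qmk_simps[simp]: "qP (qmk P N D) = P" "qN (qmk P N D) = N" "0 < D \<Longrightarrow> qD (qmk P N D) = D"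
  by (auto simp: qP_def qN_def qD_def qmk_def)

lemma qval_qmk: "0 < D \<Longrightarrow> qval (qmk P N D) = (real P - real N) / real D"
  by (simp add: qval_def)

definition qadd :: "nat \<Rightarrow> nat \<Rightarrow> nat" where
  "qadd a b = qmk (qP a * qD b + qP b * qD a) (qN a * qD b + qN b * qD a) (qD a * qD b)"
definition qmul :: "nat \<Rightarrow> nat \<Rightarrow> nat" where
  "qmul a b = qmk (qP a * qP b + qN a * qN b) (qP a * qN b + qN a * qP b) (qD a * qD b)"
definition qneg :: "nat \<Rightarrow> nat" where "qneg a = qmk (qN a) (qP a) (qD a)"
definition qsub :: "nat \<Rightarrow> nat \<Rightarrow> nat" where "qsub a b = qadd a (qneg b)"
definition qnat :: "nat \<Rightarrow> nat" where "qnat n = qmk n 0 1"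
definition qinv2 :: "nat \<Rightarrow> nat" where "qinv2 k = qmk 1 0 (2 ^ k)"
definition qle :: "nat \<Rightarrow> nat \<Rightarrow> bool" where
  "qle a b \<longleftrightarrow> qP a * qD b + qN b * qD a \<le> qP b * qD a + qN a * qD b"
definition qlt :: "nat \<Rightarrow> nat \<Rightarrow> bool" where
  "qlt a b \<longleftrightarrow> qP a * qD b + qN b * qD a < qP b * qD a + qN a * qD b"

lemma qval_add[simp]: "qval (qadd a b) = qval a + qval b"
  using qD_pos[of a] qD_pos[of b]
  by (simp add: qadd_def qval_qmk qval_def field_simps)

lemma qval_mul[simp]: "qval (qmul a b) = qval a * qval b"
  using qD_pos[of a] qD_pos[of b]
  by (simp add: qmul_def qval_qmk qval_def field_simps)

lemma qval_neg[simp]: "qval (qneg a) = - qval a"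
  using qD_pos[of a] by (simp add: qneg_def qval_qmk qval_def field_simps)

lemma qval_sub[simp]: "qval (qsub a b) = qval a - qval b" by (simp add: qsub_def)
lemma qval_nat[simp]: "qval (qnat n) = real n" by (simp add: qnat_def qval_qmk)
lemma qval_inv2[simp]: "qval (qinv2 k) = (1/2) ^ k" by (simp add: qinv2_def qval_qmk power_one_over)

lemma qle_iff[simp]: "qle a b \<longleftrightarrow> qval a \<le> qval b"
proof -
  have da: "real (qD a) > 0" and db: "real (qD b) > 0" using qD_pos by auto
  have "qval a \<le> qval b \<longleftrightarrow> (real (qP a) - real (qN a)) * real (qD b) \<le> (real (qP b) - real (qN b)) * real (qD a)"
    unfolding qval_def using da db by (simp add: divide_le_eq le_divide_eq field_simps)
  also have "\<dots> \<longleftrightarrow> real (qP a * qD b + qN b * qD a) \<le> real (qP b * qD a + qN a * qD b)"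
    by (simp add: algebra_simps)
  finally show ?thesis unfolding qle_def of_nat_le_iff by simp
qed

lemma qlt_iff[simp]: "qlt a b \<longleftrightarrow> qval a < qval b"
proof -
  have da: "real (qD a) > 0" and db: "real (qD b) > 0" using qD_pos by auto
  have "qval a < qval b \<longleftrightarrow> (real (qP a) - real (qN a)) * real (qD b) < (real (qP b) - real (qN b)) * real (qD a)"
    unfolding qval_def using da db by (simp add: divide_less_eq less_divide_eq field_simps)
  also have "\<dots> \<longleftrightarrow> real (qP a * qD b + qN b * qD a) < real (qP b * qD a + qN a * qD b)"
    by (simp add: algebra_simps)
  finally show ?thesis unfolding qlt_def of_nat_less_iff by simp
qed

lemma total_rec_qP[rec_intros]: "total_rec F \<Longrightarrow> total_rec (\<lambda>x. qP (F x))"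
  unfolding qP_def by (intro rec_intros)
lemma total_rec_qN[rec_intros]: "total_rec F \<Longrightarrow> total_rec (\<lambda>x. qN (F x))"
  unfolding qN_def by (intro rec_intros)
lemma total_rec_qD[rec_intros]: "total_rec F \<Longrightarrow> total_rec (\<lambda>x. qD (F x))"
  unfolding qD_def by (intro rec_intros)
lemma total_rec_qmk[rec_intros]:
  "total_rec F \<Longrightarrow> total_rec G \<Longrightarrow> total_rec H \<Longrightarrow> total_rec (\<lambda>x. qmk (F x) (G x) (H x))"
  unfolding qmk_def by (intro rec_intros)
lemma total_rec_qadd[rec_intros]:
  "total_rec F \<Longrightarrow> total_rec G \<Longrightarrow> total_rec (\<lambda>x. qadd (F x) (G x))"
  unfolding qadd_def by (intro rec_intros)
lemma total_rec_qmul[rec_intros]: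
  "total_rec F \<Longrightarrow> total_rec G \<Longrightarrow> total_rec (\<lambda>x. qmul (F x) (G x))"
  unfolding qmul_def by (intro rec_intros)
lemma total_rec_qneg[rec_intros]: "total_rec F \<Longrightarrow> total_rec (\<lambda>x. qneg (F x))"
  unfolding qneg_def by (intro rec_intros)
lemma total_rec_qsub[rec_intros]:
  "total_rec F \<Longrightarrow> total_rec G \<Longrightarrow> total_rec (\<lambda>x. qsub (F x) (G x))"
  unfolding qsub_def by (intro rec_intros)
lemma total_rec_qnat[rec_intros]: "total_rec F \<Longrightarrow> total_rec (\<lambda>x. qnat (F x))"
  unfolding qnat_def by (intro rec_intros)
lemma total_rec_qinv2[rec_intros]: "total_rec F \<Longrightarrow> total_rec (\<lambda>x. qinv2 (F x))"
  unfolding qinv2_def by (intro rec_intros)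
lemma decidable_qle[rec_intros]:
  "total_rec F \<Longrightarrow> total_rec G \<Longrightarrow> decidable (\<lambda>x. qle (F x) (G x))"
  unfolding qle_def by (intro rec_intros)
lemma decidable_qlt[rec_intros]:
  "total_rec F \<Longrightarrow> total_rec G \<Longrightarrow> decidable (\<lambda>x. qlt (F x) (G x))"
  unfolding qlt_def by (intro rec_intros)

definition qrat_dec :: "nat \<Rightarrow> nat" where
  "qrat_dec k = qmk (if nfst k mod 2 = 0 then nfst k div 2 else 0) (if nfst k mod 2 = 0 then 0 else nfst k div 2 + 1) (Suc (nsnd k))"

lemma total_rec_qrat_dec[rec_intros]: "total_rec F \<Longrightarrow> total_rec (\<lambda>x. qrat_dec (F x))"
  unfolding qrat_dec_def by (intro rec_intros)

lemma int_decode_alt: "int_decode a = (if a mod 2 = 0 then int (a div 2) else - int (a div 2) - 1)"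
  unfolding int_decode_def sum_decode_def
  by (cases "even a") (auto simp: even_iff_mod_2_eq_zero odd_iff_mod_2_eq_one)

lemma qval_qrat_dec: "qval (qrat_dec k) = real_of_rat (rat_dec k)"
proof -
  have rd: "rat_dec k = Fract (int_decode (nfst k)) (int (nsnd k) + 1)"
    by (simp add: rat_dec_def nfst_def nsnd_def split: prod.split)
  have "real_of_rat (rat_dec k) = real_of_int (int_decode (nfst k)) / (real (nsnd k) + 1)"
    unfolding rd by (simp add: Fract_of_int_quotient of_rat_divide of_rat_add)
  then show ?thesis
    by (auto simp: qrat_dec_def qval_qmk int_decode_alt add.commute)
qed

definition qzero :: nat where "qzero = qnat 0"
lemma qval_zero[simp]: "qval qzero = 0" by (simp add: qzero_def)

definition qvec_nth :: "nat \<Rightarrow> nat \<Rightarrow> nat" where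
  "qvec_nth jn c = (if jn < llen c then qrat_dec (lnth c jn) else qzero)"

lemma total_rec_qvec_nth[rec_intros]: "total_rec F \<Longrightarrow> total_rec (\<lambda>x. qvec_nth jn (F x))"
  unfolding qvec_nth_def qzero_def by (intro rec_intros)

lemma qval_qvec_nth: "qval (qvec_nth (to_nat j) c) = vec_dec c $ j"
  by (simp add: qvec_nth_def vec_dec_def llen_def lnth_eq qval_qrat_dec Let_def)

definition enum_list :: "'n::finite list" where "enum_list = (SOME l. distinct l \<and> set l = UNIV)"
lemma enum_list: "distinct (enum_list :: 'n::finite list)" "set (enum_list :: 'n::finite list) = UNIV"
proof -
  have "\<exists>l. distinct l \<and> set l = (UNIV :: 'n set)" using finite_distinct_list[of "UNIV :: 'n set"] by auto
  from someI_ex[OF this] show "distinct (enum_list :: 'n::finite list)" "set (enum_list :: 'n::finite list) = UNIV"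
    unfolding enum_list_def by auto
qed

definition qsum :: "'n::finite list \<Rightarrow> ('n \<Rightarrow> nat) \<Rightarrow> nat" where
  "qsum js F = foldr (\<lambda>j acc. qadd (F j) acc) js qzero"

lemma qval_qsum: "distinct js \<Longrightarrow> qval (qsum js F) = (\<Sum>j\<in>set js. qval (F j))"
  by (induction js) (auto simp: qsum_def)

lemma total_rec_qsum[rec_intros]:
  "(\<And>j. total_rec (F j)) \<Longrightarrow> total_rec (\<lambda>x. qsum js (\<lambda>j. F j x))"
proof (induction js)
  case Nil then show ?case by (simp add: qsum_def qzero_def total_rec_qnat total_rec_const)
next
  case (Cons j js)
  then have "total_rec (\<lambda>x. qadd (F j x) (qsum js (\<lambda>j. F j x)))" by (intro total_rec_qadd) auto
  then show ?case by (simp add: qsum_def)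
qed

definition qdist_sq :: "'n::finite itself \<Rightarrow> nat \<Rightarrow> nat \<Rightarrow> nat" where
  "qdist_sq T a b = qsum (enum_list :: 'n list) (\<lambda>j. qmul (qsub (qvec_nth (to_nat j) a) (qvec_nth (to_nat j) b)) (qsub (qvec_nth (to_nat j) a) (qvec_nth (to_nat j) b)))"

lemma dist_vec_squared: "(dist (x :: real ^ 'n) y)\<^sup>2 = (\<Sum>j\<in>UNIV. (x $ j - y $ j)\<^sup>2)"
  by (simp add: dist_vec_def L2_set_def dist_real_def power2_abs sum_nonneg)

lemma qval_qdist_sq: "qval (qdist_sq TYPE('n::finite) a b) = (dist (vec_dec a :: real ^ 'n) (vec_dec b))\<^sup>2"
  unfolding qdist_sq_def dist_vec_squared
  by (simp add: qval_qsum enum_list qval_qvec_nth power2_eq_square)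

lemma total_rec_qdist_sq[rec_intros]:
  "total_rec F \<Longrightarrow> total_rec G \<Longrightarrow> total_rec (\<lambda>x. qdist_sq T (F x) (G x))"
  unfolding qdist_sq_def by (intro total_rec_qsum rec_intros)

definition qabs :: "nat \<Rightarrow> nat" where "qabs a = (if qle qzero a then a else qneg a)"
definition qmax0 :: "nat \<Rightarrow> nat" where "qmax0 a = (if qle a qzero then qzero else a)"

lemma qval_abs[simp]: "qval (qabs a) = \<bar>qval a\<bar>" by (simp add: qabs_def)
lemma qval_max0[simp]: "qval (qmax0 a) = max 0 (qval a)" by (auto simp: qmax0_def max_def)

lemma total_rec_qzero[rec_intros]: "total_rec (\<lambda>x. qzero)" by (simp add: total_rec_const)
lemma total_rec_qabs[rec_intros]: "total_rec F \<Longrightarrow> total_rec (\<lambda>x. qabs (F x))"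
  unfolding qabs_def by (intro rec_intros)
lemma total_rec_qmax0[rec_intros]: "total_rec F \<Longrightarrow> total_rec (\<lambda>x. qmax0 (F x))"
  unfolding qmax0_def by (intro rec_intros)

definition qex :: "'n list \<Rightarrow> ('n \<Rightarrow> bool) \<Rightarrow> bool" where
  "qex js F = foldr (\<lambda>j acc. F j \<or> acc) js False"

lemma qex_iff: "qex js F \<longleftrightarrow> (\<exists>j\<in>set js. F j)"
  by (induction js) (auto simp: qex_def)

lemma decidable_qex[rec_intros]:
  "(\<And>j. decidable (F j)) \<Longrightarrow> decidable (\<lambda>x. qex js (\<lambda>j. F j x))"
proof (induction js)
  case Nil then show ?case by (simp add: qex_def decidable_const)
next
  case (Cons j js)
  then have "decidable (\<lambda>x. F j x \<or> qex js (\<lambda>j. F j x))" by (intro decidable_disj) auto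
  then show ?case by (simp add: qex_def)
qed

definition mv_realizer :: "recf \<Rightarrow> 'a rep \<Rightarrow> 'b rep \<Rightarrow> 'a set \<Rightarrow> ('a \<Rightarrow> 'b set) \<Rightarrow> bool" where
  "mv_realizer r \<delta> \<delta>' A h \<longleftrightarrow> (\<forall>a\<in>A. \<forall>p. \<delta> p a \<longrightarrow> (\<exists>q b. realizes r p q \<and> \<delta>' q b \<and> b \<in> h a))"

lemma mv_computable_iff_realizer:
  "mv_computable \<delta> \<delta>' A h \<longleftrightarrow> (\<exists>r. mv_realizer r \<delta> \<delta>' A h)"
  by (simp add: mv_computable_def mv_realizer_def)

lemma mv_realizerD:
  "mv_realizer r \<delta> \<delta>' A h \<Longrightarrow> a \<in> A \<Longrightarrow> \<delta> p a \<Longrightarrow> \<exists>q b. realizes r p q \<and> \<delta>' q b \<and> b \<in> h a"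
  by (simp add: mv_realizer_def)

lemma ex_recf_ignoring_index: "total_rec G \<Longrightarrow> \<exists>r. \<forall>i c. eval r [i, c] (G c)"
  unfolding total_rec_def by (blast intro: eval_Cn1 eval_Pj1)

lemma llen_prefix_code[simp]: "llen (prefix_code p n) = n"
  by (simp add: llen_def prefix_code_def)
lemma lnth_prefix_code[simp]: "e < n \<Longrightarrow> lnth (prefix_code p n) e = p e"
  by (simp add: lnth_encode prefix_code_def)

definition search_machine :: "(nat \<Rightarrow> nat \<Rightarrow> bool) \<Rightarrow> (nat \<Rightarrow> nat \<Rightarrow> nat) \<Rightarrow> nat \<Rightarrow> nat" where
  "search_machine Q F c =
     (let w = LEAST w. (2 * w + 1 < llen c \<and> Q c w) \<or> llen c \<le> w
      in if w < llen c then Suc (F c w) else 0)"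

lemma total_rec_search_machine:
  assumes "decidable (\<lambda>z. Q (nfst z) (nsnd z))" and "total_rec (\<lambda>z. F (nfst z) (nsnd z))"
  shows "total_rec (search_machine Q F)"
proof -
  have "decidable (\<lambda>z. 2 * nsnd z + 1 < llen (nfst z) \<and> Q (nfst z) (nsnd z))"
    by (intro rec_intros assms(1))
  from total_rec_Least_bounded[OF this total_rec_llen[OF total_rec_id]]
  have "total_rec (\<lambda>c. LEAST w. (2 * w + 1 < llen c \<and> Q c w) \<or> llen c \<le> w)" by simp
  then show ?thesis
    unfolding search_machine_def Let_def
    by (intro rec_intros total_rec_compose2[OF assms(2)])
qed

text \<open>A witness w is accepted only once more than 2 w + 1 entries have been read; the predicates
  used below depend on no other entries, so the answers on the prefixes of one name agree.\<close>

lemma search_machine_prefix_code: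
  assumes stable: "\<And>w n. 2 * w + 1 < n \<Longrightarrow> Q (prefix_code p n) w \<longleftrightarrow> Q' w"
    and out: "\<And>w n. 2 * w + 1 < n \<Longrightarrow> F (prefix_code p n) w = F' w"
    and W: "Q' W" "\<And>w. Q' w \<Longrightarrow> W \<le> w"
  shows "search_machine Q F (prefix_code p n) = (if 2 * W + 1 < n then Suc (F' W) else 0)"
proof -
  let ?c = "prefix_code p n"
  let ?w = "LEAST w. (2 * w + 1 < llen ?c \<and> Q ?c w) \<or> llen ?c \<le> w"
  show ?thesis
  proof (cases "2 * W + 1 < n")
    case True
    have "?w = W"
    proof (rule Least_equality)
      show "(2 * W + 1 < llen ?c \<and> Q ?c W) \<or> llen ?c \<le> W" using True stable W(1) by simp
    next
      fix w assume "(2 * w + 1 < llen ?c \<and> Q ?c w) \<or> llen ?c \<le> w"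
      then show "W \<le> w" using True stable W(2) by auto
    qed
    with True show ?thesis unfolding search_machine_def Let_def by (simp add: out)
  next
    case False
    have "\<not> ?w < n"
    proof
      assume "?w < n"
      then have "2 * ?w + 1 < n \<and> Q ?c ?w"
        using LeastI[of "\<lambda>w. (2 * w + 1 < llen ?c \<and> Q ?c w) \<or> llen ?c \<le> w" n] by simp
      with stable W(2) False show False by fastforce
    qed
    with False show ?thesis unfolding search_machine_def Let_def by simp
  qed
qed

lemma realizes_search_machine:
  assumes r: "\<And>i c. eval r [i, c] (search_machine Q F c)"
    and stable: "\<And>w n. 2 * w + 1 < n \<Longrightarrow> Q (prefix_code p n) w \<longleftrightarrow> Q' w"
    and out: "\<And>w n. 2 * w + 1 < n \<Longrightarrow> F (prefix_code p n) w = F' w"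
    and ex: "\<exists>w. Q' w"
  shows "realizes r p (\<lambda>i. F' (LEAST w. Q' w))"
proof -
  define W where "W = (LEAST w. Q' w)"
  have W: "Q' W" "\<And>w. Q' w \<Longrightarrow> W \<le> w"
    unfolding W_def by (rule LeastI_ex[OF ex], rule Least_le)
  note sm = search_machine_prefix_code[where Q=Q and Q'=Q' and F=F and F'=F' and p=p, OF stable out W]
  show ?thesis
    unfolding realizes_def W_def[symmetric]
  proof (rule allI, rule conjI)
    fix i
    have "eval r [i, prefix_code p (2 * W + 2)] (Suc (F' W))"
      using r[of i "prefix_code p (2 * W + 2)"] sm[of "2 * W + 2"] by simp
    then show "\<exists>n. eval r [i, prefix_code p n] (Suc (F' W))" ..
    show "\<forall>n v. eval r [i, prefix_code p n] v \<longrightarrow> v = 0 \<or> v = Suc (F' W)"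
      using r sm eval_unique by (metis (no_types, lifting))
  qed
qed

definition interleave :: "(nat \<Rightarrow> nat) \<Rightarrow> (nat \<Rightarrow> nat) \<Rightarrow> nat \<Rightarrow> nat" where
  "interleave P s e = (if even e then P (e div 2) else s (e div 2))"

lemma interleave_even[simp]: "interleave P s (2 * i) = P i" and interleave_odd[simp]: "interleave P s (2 * i + 1) = s i"
  and interleave_Suc_double[simp]: "interleave P s (Suc (2 * i)) = s i"
  by (simp_all add: interleave_def)

lemma prod_rep_interleave: "rho s x \<Longrightarrow> prod_rep id_rep rho (interleave P s) (P, x)"
  by (simp add: prod_rep_def id_rep_def)

lemma interleave_split: "interleave (\<lambda>i. pp (2 * i)) (\<lambda>i. pp (2 * i + 1)) = pp"
  by (auto simp: interleave_def fun_eq_iff)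

lemma ex_recf_precompose:
  "total_rec T \<Longrightarrow> \<exists>r'. \<forall>i c v. eval r' [i, c] v \<longleftrightarrow> eval r [i, T c] v"
proof -
  assume "total_rec T"
  then obtain rt where rt: "\<And>c. eval rt [c] (T c)" unfolding total_rec_def by blast
  have "eval (Cn r [Pj 0, Cn rt [Pj 1]]) [i, c] v \<longleftrightarrow> eval r [i, T c] v" for i c v
    by (rule eval_Cn2_iff[OF eval_Pj0 eval_Cn1[OF eval_Pj1 rt]])
  then show ?thesis by blast
qed

lemma realizes_transfer:
  assumes ev: "\<And>i c v. eval r' [i, c] v \<longleftrightarrow> eval r [i, T c] v"
    and pre: "\<And>n. T (prefix_code p n) = prefix_code p' (h n)"
    and hs: "\<And>m. \<exists>n. h n = m"
    and re: "realizes r p' q"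
  shows "realizes r' p q"
  unfolding realizes_def
proof (rule allI, rule conjI)
  fix i
  from re obtain m where m: "eval r [i, prefix_code p' m] (Suc (q i))" unfolding realizes_def by blast
  from hs obtain n where "h n = m" by blast
  with m show "\<exists>n. eval r' [i, prefix_code p n] (Suc (q i))" using ev pre by metis
  show "\<forall>n v. eval r' [i, prefix_code p n] v \<longrightarrow> v = 0 \<or> v = Suc (q i)"
    using re unfolding realizes_def ev pre by blast
qed

definition odd_part_code :: "nat \<Rightarrow> nat" where
  "odd_part_code c = list_encode (map (\<lambda>e. lnth c (2 * e + 1)) [0..<llen c div 2])"

lemma total_rec_odd_part_code: "total_rec odd_part_code"
  unfolding odd_part_code_def by (rule total_rec_list_encode_map[where F="\<lambda>c e. lnth c (2 * e + 1)"]) (intro rec_intros)+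

lemma odd_part_code_prefix_code: "odd_part_code (prefix_code pp n) = prefix_code (\<lambda>i. pp (2 * i + 1)) (n div 2)"
  unfolding odd_part_code_def prefix_code_def[of "\<lambda>i. pp (2 * i + 1)"]
  by (intro arg_cong[where f=list_encode] map_cong) (auto simp: prefix_code_def lnth_encode llen_def)

definition pad_even_code :: "nat \<Rightarrow> nat" where
  "pad_even_code c = list_encode (map (\<lambda>e. if e mod 2 = 0 then 0 else lnth c (e div 2)) [0..<llen c])"

lemma total_rec_pad_even_code: "total_rec pad_even_code"
  unfolding pad_even_code_def by (rule total_rec_list_encode_map[where F="\<lambda>c e. if e mod 2 = 0 then 0 else lnth c (e div 2)"]) (intro rec_intros)+

lemma pad_even_code_prefix_code: "pad_even_code (prefix_code p n) = prefix_code (interleave (\<lambda>_. 0) p) n"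
  unfolding pad_even_code_def prefix_code_def[of "interleave (\<lambda>_. 0) p"]
  by (intro arg_cong[where f=list_encode] map_cong) (auto simp: prefix_code_def lnth_encode llen_def interleave_def even_iff_mod_2_eq_zero)

lemma mv_computable_mono:
  "mv_computable \<delta> \<delta>' A h \<Longrightarrow> (\<And>a. a \<in> A \<Longrightarrow> h a \<subseteq> h' a) \<Longrightarrow> mv_computable \<delta> \<delta>' A h'"
  unfolding mv_computable_def by (meson subsetD)

lemma mv_computable_translate:
  assumes h0: "mv_computable \<delta>0 \<delta>' A0 h0"
    and T: "total_rec T" and pre: "\<And>p n. T (prefix_code p n) = prefix_code (\<Phi> p) (k n)" and k: "surj k"
    and name: "\<And>a p. a \<in> A \<Longrightarrow> \<delta> p a \<Longrightarrow> \<iota> a \<in> A0 \<and> \<delta>0 (\<Phi> p) (\<iota> a)"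
    and sub: "\<And>a. a \<in> A \<Longrightarrow> h0 (\<iota> a) \<subseteq> h a"
  shows "mv_computable \<delta> \<delta>' A h"
proof -
  from h0 obtain r0 where r0: "mv_realizer r0 \<delta>0 \<delta>' A0 h0"
    unfolding mv_computable_iff_realizer ..
  obtain r where r: "\<And>i c v. eval r [i, c] v \<longleftrightarrow> eval r0 [i, T c] v"
    using ex_recf_precompose[OF T] by blast
  show ?thesis unfolding mv_computable_def
  proof (intro exI[of _ r] ballI allI impI)
    fix a p assume "a \<in> A" "\<delta> p a"
    with name mv_realizerD[OF r0] obtain q b where "realizes r0 (\<Phi> p) q" "\<delta>' q b" "b \<in> h0 (\<iota> a)" by blast
    moreover have "realizes r p q"
      by (rule realizes_transfer[OF r pre _ \<open>realizes r0 (\<Phi> p) q\<close>]) (metis k surjD)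
    ultimately show "\<exists>q b. realizes r p q \<and> \<delta>' q b \<and> b \<in> h a" using sub \<open>a \<in> A\<close> by blast
  qed
qed

lemma mv_computable_add_param:
  assumes "mv_computable \<delta> \<delta>' A h"
  shows "mv_computable (prod_rep id_rep \<delta>) \<delta>' (D \<times> A) (\<lambda>z. h (snd z))"
proof (rule mv_computable_translate[OF assms total_rec_odd_part_code odd_part_code_prefix_code])
  show "surj (\<lambda>n::nat. n div 2)" by (metis nonzero_mult_div_cancel_left surjI zero_neq_numeral)
qed (auto simp: prod_rep_def)

lemma mv_computable_fix_param:
  assumes "mv_computable (prod_rep id_rep \<delta>) \<delta>' ({\<lambda>_. 0} \<times> A) h"
  shows "mv_computable \<delta> \<delta>' A (\<lambda>a. h (\<lambda>_. 0, a))"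
  by (rule mv_computable_translate[OF assms total_rec_pad_even_code pad_even_code_prefix_code])
     (auto simp: prod_rep_def id_rep_def interleave_def)

section \<open>Radii of balls inside an open set\<close>

lemma dist_le_card_mult:
  "(\<And>j. \<bar>u $ j - v $ j\<bar> \<le> e) \<Longrightarrow> dist (u :: real ^ 'n) v \<le> real CARD('n) * e"
proof -
  assume h: "\<And>j. \<bar>u $ j - v $ j\<bar> \<le> e"
  have "dist u v = L2_set (\<lambda>j. dist (u $ j) (v $ j)) UNIV" by (simp add: dist_vec_def)
  also have "\<dots> \<le> (\<Sum>j\<in>UNIV. dist (u $ j) (v $ j))" by (rule L2_set_le_sum) simp
  also have "\<dots> \<le> (\<Sum>j\<in>(UNIV::'n set). e)" by (rule sum_mono) (simp add: dist_real_def h)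
  also have "\<dots> = real CARD('n) * e" by simp
  finally show ?thesis .
qed

lemma rho_dist: "rho p x \<Longrightarrow> dist (vec_dec (p i)) (x :: real ^ 'n) \<le> real CARD('n) * (1/2) ^ i"
  unfolding rho_def by (rule dist_le_card_mult) auto

lemma ball_dec_eq: "ball_dec b = ball (vec_dec (nfst b)) (real_of_rat (rat_dec (nsnd b)))"
  by (simp add: ball_dec_def nfst_def nsnd_def split: prod.split)

definition cball_test :: "'n::finite itself \<Rightarrow> nat \<Rightarrow> nat \<Rightarrow> nat \<Rightarrow> nat \<Rightarrow> bool" where
  "cball_test T b a j k \<longleftrightarrow> (let s = qsub (qrat_dec (nsnd b)) (qadd (qmul (qnat CARD('n)) (qinv2 j)) (qinv2 k))
     in qlt qzero s \<and> qlt (qdist_sq T a (nfst b)) (qmul s s))"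

definition radius_witness :: "'n::finite itself \<Rightarrow> (nat \<Rightarrow> nat) \<Rightarrow> nat \<Rightarrow> bool" where
  "radius_witness T f w \<longleftrightarrow> cball_test T (f (2 * nfst w)) (f (2 * nfst (nsnd w) + 1)) (nfst (nsnd w)) (nsnd (nsnd w))"

lemma cball_test_iff: "cball_test TYPE('n::finite) b a j k \<longleftrightarrow>
   (let s = real_of_rat (rat_dec (nsnd b)) - (real CARD('n) * (1/2)^j + (1/2)^k)
    in 0 < s \<and> (dist (vec_dec a :: real ^ 'n) (vec_dec (nfst b)))\<^sup>2 < s * s)"
  unfolding cball_test_def Let_def by (simp add: qval_qdist_sq qval_qrat_dec)

lemma radius_witness_sound:
  fixes x :: "real ^ 'n::finite"
  assumes "radius_witness TYPE('n) pp w" "theta (\<lambda>i. pp (2 * i)) U" "rho (\<lambda>i. pp (2 * i + 1)) x"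
  shows "cball x ((1/2) ^ nsnd (nsnd w)) \<subseteq> U"
proof
  fix y assume y: "y \<in> cball x ((1/2) ^ nsnd (nsnd w))"
  define b where "b = pp (2 * nfst w)"
  define j where "j = nfst (nsnd w)"
  define k where "k = nsnd (nsnd w)"
  define a where "a = pp (2 * j + 1)"
  define cv :: "real ^ 'n" where "cv = vec_dec (nfst b)"
  define rr where "rr = real_of_rat (rat_dec (nsnd b))"
  define s where "s = rr - (real CARD('n) * (1/2)^j + (1/2)^k)"
  from assms(1) have "0 < s" "(dist (vec_dec a :: real ^ 'n) cv)\<^sup>2 < s * s"
    unfolding radius_witness_def cball_test_iff Let_def s_def rr_def cv_def a_def b_def j_def k_def by auto
  then have d1: "dist (vec_dec a :: real ^ 'n) cv < s"
    using power2_less_imp_less[of "dist (vec_dec a :: real ^ 'n) cv" s] by (simp add: power2_eq_square)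
  have d2: "dist (vec_dec a) x \<le> real CARD('n) * (1/2)^j"
    using rho_dist[OF assms(3), of j] unfolding a_def by simp
  have d3: "dist x y \<le> (1/2)^k" using y unfolding k_def by simp
  have "dist cv y \<le> dist cv (vec_dec a) + dist (vec_dec a) x + dist x y"
    using dist_triangle[of cv y "vec_dec a"] dist_triangle[of "vec_dec a" y x] by linarith
  also have "\<dots> < rr" using d1 d2 d3 unfolding s_def by (simp add: dist_commute)
  finally have "y \<in> ball_dec b" unfolding ball_dec_eq cv_def rr_def by simp
  then show "y \<in> U" using assms(2) unfolding theta_def b_def by blast
qed

lemma radius_witness_exists:
  fixes x :: "real ^ 'n::finite"
  assumes "x \<in> U" "theta (\<lambda>i. pp (2 * i)) U" "rho (\<lambda>i. pp (2 * i + 1)) x"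
  shows "\<exists>w. radius_witness TYPE('n) pp w"
proof -
  from assms(1,2) obtain ib where "x \<in> ball_dec (pp (2 * ib))" unfolding theta_def by blast
  define b where "b = pp (2 * ib)"
  define cv :: "real ^ 'n" where "cv = vec_dec (nfst b)"
  define rr where "rr = real_of_rat (rat_dec (nsnd b))"
  have "dist cv x < rr" using \<open>x \<in> ball_dec (pp (2 * ib))\<close> unfolding ball_dec_eq cv_def rr_def b_def by simp
  define d where "d = rr - dist cv x"
  have d: "d > 0" unfolding d_def using \<open>dist cv x < rr\<close> by simp
  define C where "C = 2 * real CARD('n) + 1"
  have C: "C > 0" unfolding C_def by simp
  obtain j where j: "(1/2::real) ^ j < d / C" using real_arch_pow_inv[of "d / C" "1/2"] d C by auto
  then have j': "C * (1/2) ^ j < d" using C by (simp add: field_simps)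
  define a where "a = pp (2 * j + 1)"
  have d2: "dist (vec_dec a) x \<le> real CARD('n) * (1/2)^j"
    using rho_dist[OF assms(3), of j] unfolding a_def by simp
  define s where "s = rr - (real CARD('n) * (1/2)^j + (1/2)^j)"
  have "dist (vec_dec a) cv \<le> dist (vec_dec a) x + dist x cv" by (rule dist_triangle)
  also have "\<dots> < s" using d2 j' unfolding s_def C_def d_def by (simp add: dist_commute algebra_simps)
  finally have ds: "dist (vec_dec a :: real ^ 'n) cv < s" .
  then have "0 < s" by (metis le_less_trans zero_le_dist)
  moreover have "(dist (vec_dec a :: real ^ 'n) cv)\<^sup>2 < s * s"
    using ds zero_le_dist[of "vec_dec a :: real ^ 'n" cv] unfolding power2_eq_square
    by (intro mult_strict_mono') auto
  ultimately have "radius_witness TYPE('n) pp (npair ib (npair j j))"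
    unfolding radius_witness_def cball_test_iff Let_def s_def rr_def cv_def a_def b_def by simp
  then show ?thesis by blast
qed

lemma radius_witness_prefix_code:
  assumes "2 * w + 1 < n"
  shows "radius_witness T (lnth (prefix_code pp n)) w = radius_witness T pp w"
proof -
  have "nfst w \<le> w" "nfst (nsnd w) \<le> w" using nfst_le nsnd_le le_trans by blast+
  then show ?thesis using assms unfolding radius_witness_def by simp
qed

lemma decidable_radius_witness: "decidable (\<lambda>z. radius_witness T (lnth (nfst z)) (nsnd z))"
  unfolding radius_witness_def cball_test_def Let_def by (intro rec_intros)

theorem cball_radius_computable:
  "mv_computable (prod_rep theta rho) nu {(U, x::real ^ 'n::finite). open U \<and> x \<in> U}
       (\<lambda>(U, x). {k. cball x ((1/2) ^ k) \<subseteq> U})"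
proof -
  let ?M = "search_machine (\<lambda>c. radius_witness TYPE('n) (lnth c)) (\<lambda>c w. nsnd (nsnd w))"
  have "total_rec ?M"
    by (rule total_rec_search_machine[OF decidable_radius_witness]) (intro rec_intros)
  then obtain r where r: "\<And>i c. eval r [i, c] (?M c)" using ex_recf_ignoring_index by blast
  show ?thesis unfolding mv_computable_def
  proof (intro exI[of _ r] ballI allI impI)
    fix Ux p assume "Ux \<in> {(U, x::real ^ 'n). open U \<and> x \<in> U}" and pn: "prod_rep theta rho p Ux"
    then obtain U x where Ux: "Ux = (U, x)" "x \<in> U" by auto
    from pn have th: "theta (\<lambda>i. p (2 * i)) U" and rh: "rho (\<lambda>i. p (2 * i + 1)) (x :: real ^ 'n)"
      unfolding Ux by (auto simp: prod_rep_def)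
    let ?W = "LEAST w. radius_witness TYPE('n) p w"
    have ex: "\<exists>w. radius_witness TYPE('n) p w" by (rule radius_witness_exists[OF Ux(2) th rh])
    have "realizes r p (\<lambda>i. nsnd (nsnd ?W))"
      by (rule realizes_search_machine[OF r radius_witness_prefix_code refl ex])
    moreover have "cball x ((1/2) ^ nsnd (nsnd ?W)) \<subseteq> U"
      by (rule radius_witness_sound[OF LeastI_ex[OF ex] th rh])
    ultimately show "\<exists>q b. realizes r p q \<and> nu q b \<and> b \<in> (\<lambda>(U, x). {k. cball x ((1/2) ^ k) \<subseteq> U}) Ux"
      unfolding Ux nu_def by auto
  qed
qed

section \<open>Normalised names\<close>

text \<open>If rc codes the rational a / (b + 1), then round_int M rc = \<lfloor>a M / (b + 1)\<rfloor>, computed with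
  division on naturals separately for the two signs of a; round_code M rc codes round_int M rc / M.\<close>

definition round_int :: "nat \<Rightarrow> nat \<Rightarrow> int" where
  "round_int M rc = (if nfst rc mod 2 = 0 then int ((nfst rc div 2 * M) div Suc (nsnd rc))
                else - int (((nfst rc div 2 + 1) * M + nsnd rc) div Suc (nsnd rc)))"

definition round_code :: "nat \<Rightarrow> nat \<Rightarrow> nat" where
  "round_code M rc = npair (if nfst rc mod 2 = 0 then 2 * ((nfst rc div 2 * M) div Suc (nsnd rc))
                  else 2 * (((nfst rc div 2 + 1) * M + nsnd rc) div Suc (nsnd rc)) - 1) (M - 1)"

lemma total_rec_round_code[rec_intros]:
  "total_rec F \<Longrightarrow> total_rec G \<Longrightarrow> total_rec (\<lambda>x. round_code (F x) (G x))"
  unfolding round_code_def by (intro rec_intros)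

lemma rat_dec_alt: "real_of_rat (rat_dec k) = real_of_int (int_decode (nfst k)) / (real (nsnd k) + 1)"
  using qval_qrat_dec[of k] by (simp add: rat_dec_def nfst_def nsnd_def Fract_of_int_quotient of_rat_divide of_rat_add split: prod.split)

lemma int_decode_even: "int_decode (2 * m) = int m"
  by (simp add: int_decode_alt)
lemma int_decode_odd: "m > 0 \<Longrightarrow> int_decode (2 * m - 1) = - int m"
proof -
  assume "m > 0"
  then obtain k where "m = Suc k" by (cases m) auto
  then have "2 * m - 1 = 2 * k + 1" by simp
  then show ?thesis using \<open>m = Suc k\<close> by (simp add: int_decode_alt)
qed

lemma rat_dec_round_code:
  "M > 0 \<Longrightarrow> real_of_rat (rat_dec (round_code M rc)) = real_of_int (round_int M rc) / real M"
proof -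
  assume M: "M > 0"
  have p: "((nfst rc div 2 + 1) * M + nsnd rc) div Suc (nsnd rc) > 0"
  proof -
    have "Suc (nsnd rc) \<le> (nfst rc div 2 + 1) * M + nsnd rc" using M by (simp add: Suc_le_eq add_pos_nonneg)
    then show ?thesis by (simp add: div_greater_zero_iff)
  qed
  show ?thesis
    using M p int_decode_odd[OF p] unfolding rat_dec_alt round_code_def round_int_def
    by (auto simp: int_decode_even of_nat_diff)
qed

lemma nat_div_bounds:
  assumes "d > (0::nat)"
  shows "real (X div d) \<le> real X / real d \<and> real X / real d < real (X div d) + 1"
proof -
  have e: "real X = real (X div d) * real d + real (X mod d)"
    by (metis div_mult_mod_eq of_nat_add of_nat_mult)
  have m: "real (X mod d) < real d" using assms by simp
  show ?thesis using assms m unfolding e by (auto simp: field_simps)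
qed

lemma round_int_approx:
  assumes M: "M > 0"
  shows "\<bar>real_of_int (round_int M rc) / real M - real_of_rat (rat_dec rc)\<bar> \<le> 1 / real M"
proof -
  define d where "d = Suc (nsnd rc)"
  have d: "real d > 0" unfolding d_def by simp
  have rv: "real_of_rat (rat_dec rc) = real_of_int (int_decode (nfst rc)) / real d"
    unfolding rat_dec_alt d_def by simp
  have key: "\<bar>real_of_int (round_int M rc) - real_of_int (int_decode (nfst rc)) * real M / real d\<bar> \<le> 1"
  proof (cases "nfst rc mod 2 = 0")
    case True
    define X where "X = nfst rc div 2 * M"
    have "real (X div d) \<le> real X / real d" "real X / real d < real (X div d) + 1"
      using nat_div_bounds[of d X] d_def by auto
    moreover have "round_int M rc = int (X div d)" using True unfolding round_int_def X_def d_def by simp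
    moreover have "real_of_int (int_decode (nfst rc)) * real M = real X"
      using True unfolding X_def by (simp add: int_decode_alt)
    ultimately show ?thesis by auto
  next
    case False
    define U where "U = (nfst rc div 2 + 1) * M"
    define Y where "Y = (U + (d - 1)) div d"
    have d0: "d > 0" unfolding d_def by simp
    have z: "U + (d - 1) = d * Y + (U + (d - 1)) mod d" unfolding Y_def by simp
    have "(U + (d - 1)) mod d < d" using d0 by simp
    then have n1: "U \<le> d * Y" and n2: "d * Y < U + d" using z d0 by linarith+
    have "real U \<le> real d * real Y" "real d * real Y < real U + real d"
      using n1 n2 unfolding of_nat_mult[symmetric] of_nat_add[symmetric] of_nat_le_iff of_nat_less_iff by auto
    then have "real U / real d \<le> real Y" "real Y < real U / real d + 1"
      using d by (auto simp: field_simps)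
    moreover have "round_int M rc = - int Y" using False unfolding round_int_def Y_def U_def d_def by simp
    moreover have "real_of_int (int_decode (nfst rc)) * real M = - real U"
      using False unfolding U_def by (simp add: int_decode_alt algebra_simps)
    ultimately show ?thesis by auto
  qed
  have "\<bar>real_of_int (round_int M rc) / real M - real_of_rat (rat_dec rc)\<bar>
      = \<bar>real_of_int (round_int M rc) - real_of_int (int_decode (nfst rc)) * real M / real d\<bar> / real M"
    unfolding rv using M d by (simp add: field_simps abs_div)
  also have "\<dots> \<le> 1 / real M" using key M by (simp add: divide_right_mono)
  finally show ?thesis .
qed

lemma round_code_le:
  assumes M: "M > 0" and B: "\<bar>real_of_rat (rat_dec rc)\<bar> \<le> real B"
  shows "round_code M rc \<le> npair (2 * (B * M + 1)) M"
proof -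
  have "\<bar>real_of_int (round_int M rc) / real M\<bar> \<le> real B + 1 / real M"
    using round_int_approx[OF M, of rc] B by linarith
  then have "\<bar>real_of_int (round_int M rc)\<bar> \<le> real B * real M + 1"
    using M by (simp add: abs_div field_simps)
  then have ab: "nat \<bar>round_int M rc\<bar> \<le> B * M + 1"
    by (metis (mono_tags, opaque_lifting) nat_le_iff of_int_abs of_int_le_iff of_int_of_nat_eq of_nat_1 of_nat_add of_nat_mult)
  define E where "E = (if nfst rc mod 2 = 0 then 2 * ((nfst rc div 2 * M) div Suc (nsnd rc))
                  else 2 * (((nfst rc div 2 + 1) * M + nsnd rc) div Suc (nsnd rc)) - 1)"
  have "E \<le> 2 * nat \<bar>round_int M rc\<bar>" unfolding E_def round_int_def by auto
  then have "E \<le> 2 * (B * M + 1)" using order_trans mult_le_mono2[OF ab] by blast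
  then show ?thesis unfolding round_code_def E_def[symmetric] by (intro npair_mono) auto
qed

definition coord_codes :: "'n::finite itself \<Rightarrow> nat set" where "coord_codes T = to_nat ` (UNIV :: 'n set)"
definition coord_len :: "'n::finite itself \<Rightarrow> nat" where "coord_len T = Suc (Max (coord_codes T))"
definition vec_entry :: "nat \<Rightarrow> nat \<Rightarrow> nat" where "vec_entry a e = (if e < llen a then lnth a e else 0)"

definition round_vec :: "'n::finite itself \<Rightarrow> nat \<Rightarrow> nat \<Rightarrow> nat" where
  "round_vec T i a = list_encode (map (\<lambda>e. if e \<in> coord_codes T then round_code (2 ^ Suc i) (vec_entry a e) else 0) [0..<coord_len T])"

lemma finite_coord_codes: "finite (coord_codes T)" by (simp add: coord_codes_def)
lemma coord_codes_less_coord_len: "e \<in> coord_codes T \<Longrightarrow> e < coord_len T"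
proof -
  assume "e \<in> coord_codes T"
  then have "e \<le> Max (coord_codes T)" by (rule Max_ge[OF finite_coord_codes])
  then show ?thesis unfolding coord_len_def by simp
qed

lemma total_rec_vec_entry[rec_intros]:
  "total_rec F \<Longrightarrow> total_rec G \<Longrightarrow> total_rec (\<lambda>x. vec_entry (F x) (G x))"
  unfolding vec_entry_def by (intro rec_intros)

lemma total_rec_round_vec_fun: "total_rec (\<lambda>z. round_vec T (nfst z) (nsnd z))"
  unfolding round_vec_def
  by (intro total_rec_list_encode_map total_rec_if decidable_mem_finite[OF finite_coord_codes] total_rec_round_code total_rec_vec_entry total_rec_power2 total_rec_Suc total_rec_nfst total_rec_nsnd total_rec_id total_rec_const)

lemma total_rec_round_vec[rec_intros]:
  "total_rec F \<Longrightarrow> total_rec G \<Longrightarrow> total_rec (\<lambda>x. round_vec T (F x) (G x))"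
  by (rule total_rec_compose2[OF total_rec_round_vec_fun])

lemma rat_dec_0: "rat_dec 0 = 0"
  by (simp add: rat_dec_def prod_decode_def int_decode_def sum_decode_def prod_decode_aux.simps Zero_rat_def)

lemma rat_dec_vec_entry: "real_of_rat (rat_dec (vec_entry a (to_nat (j :: 'n::finite)))) = vec_dec a $ j"
  by (simp add: vec_entry_def vec_dec_def llen_def lnth_eq Let_def rat_dec_0)

lemma vec_dec_round_vec:
  "vec_dec (round_vec TYPE('n::finite) i a) $ (j :: 'n) = real_of_int (round_int (2 ^ Suc i) (vec_entry a (to_nat j))) / 2 ^ Suc i"
proof -
  have j: "to_nat j \<in> coord_codes TYPE('n)" by (simp add: coord_codes_def)
  then have l: "to_nat j < coord_len TYPE('n)" by (rule coord_codes_less_coord_len)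
  show ?thesis
    using j l rat_dec_round_code[of "2 ^ Suc i" "vec_entry a (to_nat j)"]
    by (simp add: round_vec_def vec_dec_def Let_def)
qed

lemma round_vec_approx:
  "\<bar>vec_dec (round_vec TYPE('n::finite) i a) $ (j :: 'n) - vec_dec a $ j\<bar> \<le> (1/2) ^ Suc i"
  using round_int_approx[of "2 ^ Suc i" "vec_entry a (to_nat j)"] unfolding vec_dec_round_vec rat_dec_vec_entry
  by (simp add: power_one_over)

text \<open>Entry i of a normalised name is entry i + 1 of the given name rounded to the grid of mesh
  2^-(i+1); the precision 2^-i is kept, and for points of a bounded set only finitely many
  entries are possible at each position.\<close>

definition normalize_name :: "'n::finite itself \<Rightarrow> (nat \<Rightarrow> nat) \<Rightarrow> nat \<Rightarrow> nat" where
  "normalize_name T p i = round_vec T i (p (Suc i))"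

lemma rho_normalize_name: "rho p (x :: real ^ 'n::finite) \<Longrightarrow> rho (normalize_name TYPE('n) p) x"
  unfolding rho_def
proof (intro allI)
  fix i j assume r: "\<forall>i j. \<bar>vec_dec (p i) $ j - x $ j\<bar> \<le> (1 / 2) ^ i"
  have "\<bar>vec_dec (normalize_name TYPE('n) p i) $ j - x $ j\<bar>
     \<le> \<bar>vec_dec (round_vec TYPE('n) i (p (Suc i))) $ j - vec_dec (p (Suc i)) $ j\<bar> + \<bar>vec_dec (p (Suc i)) $ j - x $ j\<bar>"
    unfolding normalize_name_def by linarith
  also have "\<dots> \<le> (1/2) ^ Suc i + (1/2) ^ Suc i" by (rule add_mono[OF round_vec_approx]) (use r[rule_format, of "Suc i" j] in simp)
  also have "\<dots> = (1/2) ^ i" by simp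
  finally show "\<bar>vec_dec (normalize_name TYPE('n) p i) $ j - x $ j\<bar> \<le> (1/2) ^ i" .
qed

lemma list_encode_mono:
  "length xs = length ys \<Longrightarrow> (\<forall>i<length xs. xs ! i \<le> ys ! i) \<Longrightarrow> list_encode xs \<le> list_encode ys"
proof (induction xs arbitrary: ys)
  case (Cons x xs)
  then obtain y ys' where ys: "ys = y # ys'" by (cases ys) auto
  with Cons.prems have "x \<le> y" "list_encode xs \<le> list_encode ys'"
    using Cons.IH[of ys'] by (auto, fastforce)
  then show ?case unfolding ys using npair_mono[of x y "list_encode xs" "list_encode ys'"] by (simp add: npair_def)
qed simp

definition round_vec_bound :: "'n::finite itself \<Rightarrow> nat \<Rightarrow> nat \<Rightarrow> nat" where
  "round_vec_bound T B i = list_encode (replicate (coord_len T) (npair (2 * (B * 2 ^ Suc i + 1)) (2 ^ Suc i)))"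

lemma total_rec_round_vec_bound[rec_intros]:
  "total_rec F \<Longrightarrow> total_rec G \<Longrightarrow> total_rec (\<lambda>x. round_vec_bound T (F x) (G x))"
proof -
  assume f: "total_rec F" and g: "total_rec G"
  have "total_rec (\<lambda>x. list_encode (map (\<lambda>e. npair (2 * (F x * 2 ^ Suc (G x) + 1)) (2 ^ Suc (G x))) [0..<coord_len T]))"
    by (rule total_rec_list_encode_map[where F="\<lambda>x e. npair (2 * (F x * 2 ^ Suc (G x) + 1)) (2 ^ Suc (G x))"])
       (intro rec_intros total_rec_compose[OF f] total_rec_compose[OF g])+
  then show ?thesis unfolding round_vec_bound_def by (simp add: map_replicate_const)
qed

lemma round_vec_le_bound:
  assumes "\<And>j. \<bar>vec_dec a $ (j :: 'n::finite)\<bar> \<le> real B"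
  shows "round_vec TYPE('n) i a \<le> round_vec_bound TYPE('n) B i"
  unfolding round_vec_def round_vec_bound_def
proof (rule list_encode_mono, simp, intro allI impI)
  fix e assume "e < length (map (\<lambda>e. if e \<in> coord_codes TYPE('n) then round_code (2 ^ Suc i) (vec_entry a e) else 0) [0..<coord_len TYPE('n)])"
  then have e: "e < coord_len TYPE('n)" by simp
  show "map (\<lambda>e. if e \<in> coord_codes TYPE('n) then round_code (2 ^ Suc i) (vec_entry a e) else 0) [0..<coord_len TYPE('n)] ! e
        \<le> replicate (coord_len TYPE('n)) (npair (2 * (B * 2 ^ Suc i + 1)) (2 ^ Suc i)) ! e"
  proof (cases "e \<in> coord_codes TYPE('n)")
    case True
    then obtain j :: 'n where j: "e = to_nat j" by (auto simp: coord_codes_def)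
    have "round_code (2 ^ Suc i) (vec_entry a e) \<le> npair (2 * (B * 2 ^ Suc i + 1)) (2 ^ Suc i)"
      by (rule round_code_le) (use assms[of j] in \<open>simp_all add: j rat_dec_vec_entry\<close>)
    then show ?thesis using e True by simp
  next
    case False then show ?thesis using e by simp
  qed
qed

lemma list_decode_elem_le: "y \<in> set (list_decode c) \<Longrightarrow> y \<le> c"
proof (induction c rule: less_induct)
  case (less c)
  show ?case
  proof (cases "c = 0")
    case True with less.prems show ?thesis by simp
  next
    case False
    with less.prems have "y = lhd c \<or> y \<in> set (list_decode (ltl c))" using list_decode_lhd_ltl[of c] by auto
    then show ?thesis
    proof
      assume "y \<in> set (list_decode (ltl c))"
      with less.IH[OF ltl_less] False have "y \<le> ltl c" by simp
      then show ?thesis using ltl_le[of c] by simp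
    qed (simp add: lhd_le)
  qed
qed

lemma lnth_le: "i < llen c \<Longrightarrow> lnth c i \<le> c"
  using list_decode_elem_le[of "list_decode c ! i" c] by (simp add: llen_def lnth_eq)

lemma int_decode_abs_le: "\<bar>int_decode a\<bar> \<le> int a"
  by (simp add: int_decode_alt) presburger

lemma rat_dec_abs_le: "\<bar>real_of_rat (rat_dec e)\<bar> \<le> real e"
proof -
  have "\<bar>real_of_rat (rat_dec e)\<bar> = \<bar>real_of_int (int_decode (nfst e))\<bar> / (real (nsnd e) + 1)"
    by (simp add: rat_dec_alt abs_div)
  also have "\<dots> \<le> \<bar>real_of_int (int_decode (nfst e))\<bar>"
    using divide_left_mono[of 1 "real (nsnd e) + 1" "\<bar>real_of_int (int_decode (nfst e))\<bar>"] by simp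
  also have "\<dots> \<le> real (nfst e)" using int_decode_abs_le[of "nfst e"] by linarith
  also have "\<dots> \<le> real e" using nfst_le[of e] by simp
  finally show ?thesis .
qed

lemma vec_dec_abs_le: "\<bar>vec_dec c $ j\<bar> \<le> real c"
proof -
  have "\<bar>vec_dec c $ j\<bar> = \<bar>real_of_rat (rat_dec (vec_entry c (to_nat j)))\<bar>" by (simp add: rat_dec_vec_entry)
  also have "\<dots> \<le> real (vec_entry c (to_nat j))" by (rule rat_dec_abs_le)
  also have "\<dots> \<le> real c" unfolding vec_entry_def using lnth_le[of "to_nat j" c] by auto
  finally show ?thesis .
qed

lemma kappa_coord_bound:
  assumes "kappa \<kappa> K" "x \<in> K"
  shows "\<bar>(x :: real ^ 'n::finite) $ j\<bar> \<le> real (\<kappa> 0)"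
proof -
  from assms(1) have "K \<subseteq> \<Union>(ball_dec ` set (list_decode (\<kappa> 0)))" unfolding kappa_def by blast
  with assms(2) obtain b where b: "b \<in> set (list_decode (\<kappa> 0))" "x \<in> ball_dec b" by blast
  define cv :: "real ^ 'n" where "cv = vec_dec (nfst b)"
  define \<rho> where "\<rho> = real_of_rat (rat_dec (nsnd b))"
  have "dist cv x < \<rho>" using b(2) unfolding ball_dec_eq cv_def \<rho>_def by simp
  moreover have "\<bar>x $ j - cv $ j\<bar> \<le> dist cv x"
    using component_le_norm_cart[of "x - cv" j] by (simp add: dist_norm norm_minus_commute)
  moreover have "\<bar>cv $ j\<bar> \<le> real (nfst b)" unfolding cv_def by (rule vec_dec_abs_le)
  moreover have "\<rho> \<le> real (nsnd b)" using rat_dec_abs_le[of "nsnd b"] unfolding \<rho>_def by linarith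
  moreover have "nfst b + nsnd b \<le> b" using add_le_npair[of "nfst b" "nsnd b"] by simp
  moreover have "b \<le> \<kappa> 0" by (rule list_decode_elem_le[OF b(1)])
  ultimately show ?thesis by linarith
qed

section \<open>The values of a realizer on normalised names\<close>

definition normalize_prefix :: "'n::finite itself \<Rightarrow> nat \<Rightarrow> nat" where
  "normalize_prefix T c = list_encode (map (\<lambda>e. if e mod 2 = 0 then lnth c e else round_vec T (e div 2) (lnth c (e + 2))) [0..<llen c - 2])"

lemma total_rec_normalize_prefix: "total_rec (normalize_prefix T)"
  unfolding normalize_prefix_def
  by (rule total_rec_list_encode_map[where F="\<lambda>c e. if e mod 2 = 0 then lnth c e else round_vec T (e div 2) (lnth c (e + 2))"])
     (intro rec_intros)+

lemma normalize_prefix_prefix_code: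
  "normalize_prefix T (prefix_code pp n) = prefix_code (interleave (\<lambda>i. pp (2 * i)) (normalize_name T (\<lambda>i. pp (2 * i + 1)))) (n - 2)"
  unfolding normalize_prefix_def prefix_code_def[of _ "n - 2"] llen_prefix_code
proof (rule arg_cong[where f=list_encode], rule map_cong[OF refl])
  fix e assume "e \<in> set [0..<n - 2]"
  then have e: "e < n - 2" by simp
  show "(if e mod 2 = 0 then lnth (prefix_code pp n) e else round_vec T (e div 2) (lnth (prefix_code pp n) (e + 2)))
        = interleave (\<lambda>i. pp (2 * i)) (normalize_name T (\<lambda>i. pp (2 * i + 1))) e"
  proof (cases "even e")
    case True then show ?thesis using e by (simp add: interleave_def flip: even_iff_mod_2_eq_zero)
  next
    case False
    have h: "2 * (e div 2) + 1 = e" using False by (rule odd_two_times_div_two_succ)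
    then have "2 * Suc (e div 2) + 1 = e + 2" by simp
    then show ?thesis using e False by (simp add: interleave_def normalize_name_def flip: even_iff_mod_2_eq_zero)
  qed
qed

definition normal_values :: "'n::finite itself \<Rightarrow> recf \<Rightarrow> ((nat \<Rightarrow> nat) \<times> (real ^ 'n) \<Rightarrow> (real ^ 'm::finite) set)
    \<Rightarrow> (nat \<Rightarrow> nat) \<times> (real ^ 'n) \<Rightarrow> (real ^ 'm) set" where
  "normal_values T r f Px = {y \<in> f Px. \<exists>p q. rho p (snd Px) \<and> realizes r (interleave (fst Px) (normalize_name T p)) q \<and> rho q y}"

lemma normal_values_subset: "normal_values T r f Px \<subseteq> f Px"
  by (auto simp: normal_values_def)

lemma normal_values_computable:
  fixes f :: "(nat \<Rightarrow> nat) \<times> (real ^ 'n::finite) \<Rightarrow> (real ^ 'm::finite) set"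
  assumes r: "mv_realizer r (prod_rep id_rep rho) rho (D \<times> X) f"
  shows "mv_computable (prod_rep id_rep rho) rho (D \<times> X) (normal_values TYPE('n) r f)"
proof -
  obtain rg where rg: "\<And>i c v. eval rg [i, c] v \<longleftrightarrow> eval r [i, normalize_prefix TYPE('n) c] v"
    using ex_recf_precompose[OF total_rec_normalize_prefix] by blast
  show ?thesis unfolding mv_computable_def
  proof (intro exI[of _ rg] ballI allI impI)
    fix a pp assume a: "a \<in> D \<times> X" and pn: "prod_rep id_rep rho pp a"
    then obtain P x where ae: "a = (P, x)" and P: "P = (\<lambda>i. pp (2 * i))"
      and rx: "rho (\<lambda>i. pp (2 * i + 1)) x"
      by (cases a) (auto simp: prod_rep_def id_rep_def)
    define s where "s = normalize_name TYPE('n) (\<lambda>i. pp (2 * i + 1))"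
    have "rho s x" unfolding s_def by (rule rho_normalize_name[OF rx])
    then have "prod_rep id_rep rho (interleave P s) a" unfolding ae by (rule prod_rep_interleave)
    with mv_realizerD[OF r a] obtain q b where qb: "realizes r (interleave P s) q" "rho q b" "b \<in> f a"
      by blast
    have "realizes rg pp q"
      by (rule realizes_transfer[OF rg normalize_prefix_prefix_code _ qb(1)[unfolded P s_def]])
         (metis diff_add_inverse2)
    moreover have "b \<in> normal_values TYPE('n) r f a"
      unfolding normal_values_def ae using qb rx ae P s_def by auto
    ultimately show "\<exists>q b. realizes rg pp q \<and> rho q b \<and> b \<in> normal_values TYPE('n) r f a"
      using qb by blast
  qed
qed

lemma constant_subseq_bounded:
  fixes w :: "nat \<Rightarrow> nat"
  assumes "\<And>k. w k \<le> (b :: nat)"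
  shows "\<exists>r'::nat\<Rightarrow>nat. strict_mono r' \<and> (\<forall>k. w (r' k) = w (r' 0))"
proof -
  have "finite (range w)" using assms by (metis finite_atMost finite_subset image_subsetI atMost_iff)
  then have "\<exists>y. infinite (w -` {w y})" using inf_img_fin_dom[of w "UNIV::nat set"] infinite_UNIV_nat by simp
  then obtain c where "infinite (w -` {c})" by blast
  define S where "S = w -` {c}"
  have "infinite S" using \<open>infinite (w -` {c})\<close> S_def by simp
  obtain e :: "nat \<Rightarrow> nat" where e: "strict_mono e" "\<forall>k. e k \<in> S"
    using strict_mono_enumerate[OF \<open>infinite S\<close>] enumerate_in_set[OF \<open>infinite S\<close>] by blast
  then have "\<forall>k. w (e k) = c" unfolding S_def by auto
  then show ?thesis using e(1) by (intro exI[of _ e]) simp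
qed

lemma bounded_seqs_stable_subseq:
  fixes u :: "nat \<Rightarrow> nat \<Rightarrow> nat" and xs :: "nat \<Rightarrow> real ^ 'n::finite"
  assumes ub: "\<And>k i. u k i \<le> \<beta> i" and K: "compact K" and xsK: "\<And>k. xs k \<in> K"
  shows "\<exists>\<sigma> s x. strict_mono \<sigma> \<and> x \<in> K \<and> (xs \<circ> \<sigma>) \<longlonglongrightarrow> x \<and> (\<forall>n. \<exists>m0. \<forall>m\<ge>m0. \<forall>i<n. u (\<sigma> m) i = s i)"
proof -
  from K have "seq_compact K" by (rule compact_imp_seq_compact)
  with xsK obtain x \<sigma>1 where x: "x \<in> K" and s1: "strict_mono \<sigma>1" and lim: "(xs \<circ> \<sigma>1) \<longlonglongrightarrow> x"
    unfolding seq_compact_def by metis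
  define v where "v k = u (\<sigma>1 k)" for k
  interpret sq: subseqs "\<lambda>n \<sigma>. \<forall>k. v (\<sigma> k) n = v (\<sigma> 0) n"
  proof
    fix n :: nat and s :: "nat \<Rightarrow> nat" assume "strict_mono s"
    from constant_subseq_bounded[of "\<lambda>k. v (s k) n" "\<beta> n"] ub obtain r' :: "nat \<Rightarrow> nat" where
      "strict_mono r'" "\<forall>k. v (s (r' k)) n = v (s (r' 0)) n" unfolding v_def by blast
    then show "\<exists>r'::nat\<Rightarrow>nat. strict_mono r' \<and> (\<forall>k. v ((s \<circ> r') k) n = v ((s \<circ> r') 0) n)"
      by (intro exI[of _ r']) simp
  qed
  have hold: "\<forall>m. v (sq.diagseq (Suc k + m)) k = v (sq.diagseq (Suc k)) k" for k
  proof -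
    have "\<forall>m. v ((sq.diagseq \<circ> (+) (Suc k)) m) k = v ((sq.diagseq \<circ> (+) (Suc k)) 0) k"
      by (rule sq.diagseq_holds) (simp only: comp_apply, metis)
    then show ?thesis by simp
  qed
  define s where "s i = v (sq.diagseq (Suc i)) i" for i
  define \<sigma> where "\<sigma> = \<sigma>1 \<circ> sq.diagseq"
  have "strict_mono \<sigma>" unfolding \<sigma>_def using s1 sq.subseq_diagseq by (rule strict_mono_o)
  moreover have "(xs \<circ> \<sigma>) \<longlonglongrightarrow> x"
    using LIMSEQ_subseq_LIMSEQ[OF lim sq.subseq_diagseq] unfolding \<sigma>_def by (simp add: o_assoc)
  moreover have "\<forall>m\<ge>n. \<forall>i<n. u (\<sigma> m) i = s i" for n :: nat
  proof (intro allI impI)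
    fix m i :: nat assume "n \<le> m" "i < n"
    then have e: "Suc i + (m - Suc i) = m" by simp
    have "v (sq.diagseq (Suc i + (m - Suc i))) i = v (sq.diagseq (Suc i)) i" using hold[of i] by blast
    then have "v (sq.diagseq m) i = v (sq.diagseq (Suc i)) i" unfolding e .
    then show "u (\<sigma> m) i = s i" unfolding \<sigma>_def s_def v_def by simp
  qed
  then have "\<forall>n. \<exists>m0. \<forall>m\<ge>m0. \<forall>i<n. u (\<sigma> m) i = s i" by blast
  ultimately show ?thesis using x by blast
qed

lemma prefix_code_interleave_cong:
  "(\<forall>i<n. s1 i = s2 i) \<Longrightarrow> prefix_code (interleave P s1) n = prefix_code (interleave P s2) n"
  unfolding prefix_code_def by (intro arg_cong[where f=list_encode] map_cong refl) (auto simp: interleave_def)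

lemma rho_limit:
  fixes xs :: "nat \<Rightarrow> real ^ 'n::finite"
  assumes lim: "xs \<longlonglongrightarrow> x" and ev: "\<And>i. \<exists>m0. \<forall>m\<ge>m0. us m i = s i" and rh: "\<And>m. rho (us m) (xs m)"
  shows "rho s x"
  unfolding rho_def
proof (intro allI)
  fix i j
  obtain m0 where m0: "\<forall>m\<ge>m0. us m i = s i" using ev by blast
  have "(\<lambda>m. \<bar>vec_dec (s i) $ j - xs m $ j\<bar>) \<longlonglongrightarrow> \<bar>vec_dec (s i) $ j - x $ j\<bar>"
    by (intro tendsto_intros lim)
  moreover have "\<forall>m\<ge>m0. \<bar>vec_dec (s i) $ j - xs m $ j\<bar> \<le> (1/2) ^ i"
    using m0 rh unfolding rho_def by metis
  ultimately show "\<bar>vec_dec (s i) $ j - x $ j\<bar> \<le> (1/2) ^ i"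
    by (intro LIMSEQ_le_const2) auto
qed

lemma compact_coord_bound:
  assumes "compact (K :: (real ^ 'n::finite) set)"
  obtains B :: nat where "\<And>x j. x \<in> K \<Longrightarrow> \<bar>x $ j\<bar> + 1 \<le> real B"
proof -
  from compact_imp_bounded[OF assms] obtain M where M: "\<And>x. x \<in> K \<Longrightarrow> norm x \<le> M"
    unfolding bounded_iff by blast
  define B where "B = nat (ceiling M) + 1"
  have "\<bar>x $ j\<bar> + 1 \<le> real B" if "x \<in> K" for x j
  proof -
    have "\<bar>x $ j\<bar> \<le> norm x" by (rule component_le_norm_cart)
    also have "\<dots> \<le> M" using M that by simp
    also have "\<dots> \<le> real (nat (ceiling M))" by linarith
    finally show ?thesis unfolding B_def by simp
  qed
  then show ?thesis using that by blast
qed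

lemma normalize_name_le_bound:
  assumes "rho p (x :: real ^ 'n::finite)" "\<And>j. \<bar>x $ j\<bar> + 1 \<le> real B"
  shows "normalize_name TYPE('n) p i \<le> round_vec_bound TYPE('n) B i"
  unfolding normalize_name_def
proof (rule round_vec_le_bound)
  fix j :: 'n
  have "\<bar>vec_dec (p (Suc i)) $ j - x $ j\<bar> \<le> (1/2) ^ Suc i" using assms(1) unfolding rho_def by blast
  moreover have "(1/2::real) ^ Suc i \<le> 1" by (rule power_le_one) auto
  ultimately show "\<bar>vec_dec (p (Suc i)) $ j\<bar> \<le> real B" using assms(2)[of j] by linarith
qed

lemma first_output_bounded:
  fixes f :: "(nat \<Rightarrow> nat) \<times> (real ^ 'n::finite) \<Rightarrow> (real ^ 'm::finite) set"
  assumes r: "mv_realizer r (prod_rep id_rep rho) rho (D \<times> X) f"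
    and P: "P \<in> D" and K: "compact K" "K \<subseteq> X"
  shows "\<exists>N. \<forall>x\<in>K. \<forall>p q. rho p x \<and> realizes r (interleave P (normalize_name TYPE('n) p)) q \<longrightarrow> q 0 \<le> N"
proof (rule ccontr)
  assume "\<not> ?thesis"
  then have "\<forall>N. \<exists>x p q. x \<in> K \<and> rho p x \<and> realizes r (interleave P (normalize_name TYPE('n) p)) q \<and> N < q 0"
    by (auto simp: not_le) blast
  then obtain xs ps qs where seq: "\<And>N. xs N \<in> K \<and> rho (ps N) (xs N) \<and> realizes r (interleave P (normalize_name TYPE('n) (ps N))) (qs N) \<and> N < qs N 0"
    by metis
  obtain B where B: "\<And>x j. x \<in> K \<Longrightarrow> \<bar>x $ j\<bar> + 1 \<le> real B" using compact_coord_bound[OF K(1)] by blast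
  define u where "u k = normalize_name TYPE('n) (ps k)" for k
  have ub: "u k i \<le> round_vec_bound TYPE('n) B i" for k i
    unfolding u_def using normalize_name_le_bound seq B by blast
  from bounded_seqs_stable_subseq[of u "round_vec_bound TYPE('n) B" K xs, OF ub K(1)] seq obtain \<sigma> s x where
    sm: "strict_mono \<sigma>" and x: "x \<in> K" and lim: "(xs \<circ> \<sigma>) \<longlonglongrightarrow> x" and ag: "\<forall>n. \<exists>m0. \<forall>m\<ge>m0. \<forall>i<n. u (\<sigma> m) i = s i"
    by blast
  have "rho s x"
  proof (rule rho_limit[OF lim])
    fix i show "\<exists>m0. \<forall>m\<ge>m0. u (\<sigma> m) i = s i" using ag[rule_format, of "Suc i"] by blast
    fix m show "rho (u (\<sigma> m)) ((xs \<circ> \<sigma>) m)" unfolding u_def using rho_normalize_name[of "ps (\<sigma> m)" "xs (\<sigma> m)"] seq[of "\<sigma> m"] by simp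
  qed
  then have "prod_rep id_rep rho (interleave P s) (P, x)" by (rule prod_rep_interleave)
  with mv_realizerD[OF r] P x K(2) obtain q' b where "realizes r (interleave P s) q'" by blast
  then obtain n0 where n0: "eval r [0, prefix_code (interleave P s) n0] (Suc (q' 0))" unfolding realizes_def by blast
  obtain m0 where m0: "\<forall>m\<ge>m0. \<forall>i<n0. u (\<sigma> m) i = s i" using ag by blast
  define m where "m = max m0 (q' 0)"
  have "prefix_code (interleave P (u (\<sigma> m))) n0 = prefix_code (interleave P s) n0"
    using m0 unfolding m_def by (intro prefix_code_interleave_cong) auto
  with n0 have "eval r [0, prefix_code (interleave P (u (\<sigma> m))) n0] (Suc (q' 0))" by simp
  with seq[of "\<sigma> m"] have "Suc (q' 0) = Suc (qs (\<sigma> m) 0)" unfolding realizes_def u_def by blast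
  moreover have "q' 0 \<le> \<sigma> m" using seq_suble[OF sm, of m] unfolding m_def by linarith
  moreover have "\<sigma> m < qs (\<sigma> m) 0" using seq by blast
  ultimately show False by linarith
qed

lemma normal_values_bounded:
  fixes f :: "(nat \<Rightarrow> nat) \<times> (real ^ 'n::finite) \<Rightarrow> (real ^ 'm::finite) set"
  assumes r: "mv_realizer r (prod_rep id_rep rho) rho (D \<times> X) f"
    and P: "P \<in> D" and K: "compact K" "K \<subseteq> X"
  shows "bounded (\<Union>x\<in>K. normal_values TYPE('n) r f (P, x))"
proof -
  obtain N where N: "\<forall>x\<in>K. \<forall>p q. rho p x \<and> realizes r (interleave P (normalize_name TYPE('n) p)) q \<longrightarrow> q 0 \<le> N"
    using first_output_bounded[OF r P K] by blast
  define R where "R = (\<Sum>c\<le>N. norm (vec_dec c :: real ^ 'm)) + real CARD('m)"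
  have "norm y \<le> R" if "y \<in> (\<Union>x\<in>K. normal_values TYPE('n) r f (P, x))" for y
  proof -
    from that obtain x p q where x: "x \<in> K" and pq: "rho p x" "realizes r (interleave P (normalize_name TYPE('n) p)) q" "rho q y"
      unfolding normal_values_def by auto
    have qN: "q 0 \<le> N" using N x pq by blast
    have "dist (vec_dec (q 0)) y \<le> real CARD('m) * (1/2) ^ 0" by (rule rho_dist[OF pq(3)])
    then have "norm y \<le> norm (vec_dec (q 0) :: real ^ 'm) + real CARD('m)"
      using norm_triangle_ineq2[of y "vec_dec (q 0)"] by (simp add: dist_norm norm_minus_commute)
    also have "norm (vec_dec (q 0) :: real ^ 'm) \<le> (\<Sum>c\<le>N. norm (vec_dec c :: real ^ 'm))"
      using qN by (intro member_le_sum) auto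
    finally show ?thesis unfolding R_def by linarith
  qed
  then show ?thesis unfolding bounded_iff by blast
qed

section \<open>Computing a bound on a compact set\<close>

definition cube :: "real ^ 'n::finite \<Rightarrow> real \<Rightarrow> (real ^ 'n) set" where
  "cube a h = {y. \<forall>j. \<bar>a $ j - y $ j\<bar> \<le> h}"

lemma ball_cube_disjoint_iff:
  fixes c a :: "real ^ 'n::finite"
  assumes h: "h \<ge> 0" and \<rho>: "\<rho> > 0"
  shows "ball c \<rho> \<inter> cube a h = {} \<longleftrightarrow> \<rho>\<^sup>2 \<le> (\<Sum>j\<in>UNIV. (max 0 (\<bar>c $ j - a $ j\<bar> - h))\<^sup>2)"
proof -
  define S where "S = (\<Sum>j\<in>UNIV. (max 0 (\<bar>c $ j - a $ j\<bar> - h))\<^sup>2)"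
  have low: "S \<le> (dist c y)\<^sup>2" if "y \<in> cube a h" for y
    unfolding S_def dist_vec_squared
  proof (rule sum_mono)
    fix j
    have "\<bar>a $ j - y $ j\<bar> \<le> h" using that by (simp add: cube_def)
    then have "max 0 (\<bar>c $ j - a $ j\<bar> - h) \<le> \<bar>c $ j - y $ j\<bar>" by auto
    then show "(max 0 (\<bar>c $ j - a $ j\<bar> - h))\<^sup>2 \<le> (c $ j - y $ j)\<^sup>2"
      using power_mono[of "max 0 (\<bar>c $ j - a $ j\<bar> - h)" "\<bar>c $ j - y $ j\<bar>" 2] by simp
  qed
  define y0 :: "real ^ 'n" where
    "y0 = (\<chi> j. if c $ j < a $ j - h then a $ j - h else if c $ j > a $ j + h then a $ j + h else c $ j)"
  have y0: "y0 \<in> cube a h" unfolding cube_def y0_def using h by auto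
  have "(dist c y0)\<^sup>2 = S" unfolding S_def dist_vec_squared
  proof (rule sum.cong[OF refl])
    fix j show "(c $ j - y0 $ j)\<^sup>2 = (max 0 (\<bar>c $ j - a $ j\<bar> - h))\<^sup>2"
      unfolding y0_def using h by (auto simp: abs_if max_def) (auto simp: power2_eq_square algebra_simps)
  qed
  show ?thesis unfolding S_def[symmetric]
  proof
    assume dj: "ball c \<rho> \<inter> cube a h = {}"
    have "\<rho> \<le> dist c y0"
    proof (rule ccontr)
      assume "\<not> \<rho> \<le> dist c y0"
      then have "y0 \<in> ball c \<rho>" by simp
      with y0 dj show False by blast
    qed
    then have "\<rho>\<^sup>2 \<le> (dist c y0)\<^sup>2" using \<rho> by (intro power_mono) auto
    then show "\<rho>\<^sup>2 \<le> S" using \<open>(dist c y0)\<^sup>2 = S\<close> by simp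
  next
    assume a: "\<rho>\<^sup>2 \<le> S"
    show "ball c \<rho> \<inter> cube a h = {}"
    proof (rule ccontr)
      assume "ball c \<rho> \<inter> cube a h \<noteq> {}"
      then obtain y where "dist c y < \<rho>" "y \<in> cube a h" by auto
      then have "(dist c y)\<^sup>2 < \<rho>\<^sup>2" by (intro power_strict_mono) auto
      with low[OF \<open>y \<in> cube a h\<close>] a show False by linarith
    qed
  qed
qed

lemma rat_dec_surj: "\<exists>k. rat_dec k = q"
proof (cases q)
  case (Fract a b)
  define k where "k = prod_encode (int_encode a, nat (b - 1))"
  have "rat_dec k = Fract a (int (nat (b - 1)) + 1)" by (simp add: k_def rat_dec_def)
  also have "int (nat (b - 1)) + 1 = b" using Fract by simp
  finally show ?thesis using Fract by blast
qed

lemma vec_dec_dense: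
  assumes "\<epsilon> > 0"
  shows "\<exists>c. dist (vec_dec c) (x :: real ^ 'n::finite) < \<epsilon>"
proof -
  define e where "e = \<epsilon> / (2 * real CARD('n))"
  have e: "e > 0" unfolding e_def using assms by simp
  have "\<forall>j. \<exists>q::rat. x $ j < of_rat q \<and> of_rat q < x $ j + e" using of_rat_dense e by simp
  then obtain q :: "'n \<Rightarrow> rat" where q: "\<And>j. x $ j < of_rat (q j) \<and> of_rat (q j) < x $ j + e" by metis
  have "\<forall>j. \<exists>k. rat_dec k = q j" using rat_dec_surj by blast
  from choice[OF this] obtain cq where cq: "\<And>j. rat_dec (cq j) = q j" by blast
  define l where "l = map (\<lambda>k. if k \<in> coord_codes TYPE('n) then cq (from_nat k :: 'n) else 0) [0..<coord_len TYPE('n)]"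
  have v: "vec_dec (list_encode l) $ j = of_rat (q j)" for j :: 'n
  proof -
    have j: "to_nat j \<in> coord_codes TYPE('n)" by (simp add: coord_codes_def)
    then have "to_nat j < coord_len TYPE('n)" by (rule coord_codes_less_coord_len)
    then show ?thesis using j cq unfolding l_def by (simp add: vec_dec_def)
  qed
  have "dist (vec_dec (list_encode l)) x \<le> real CARD('n) * e"
  proof (rule dist_le_card_mult)
    fix j show "\<bar>vec_dec (list_encode l) $ j - x $ j\<bar> \<le> e" using q[of j] v[of j] by (simp add: abs_if)
  qed
  also have "\<dots> < \<epsilon>" unfolding e_def using assms by simp
  finally show ?thesis by blast
qed

lemma rational_cover_avoiding:
  fixes K Q :: "(real ^ 'n::finite) set"
  assumes K: "compact K" and Q: "closed Q" and d: "K \<inter> Q = {}"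
  shows "\<exists>l. K \<subseteq> \<Union>(ball_dec ` set l) \<and> (\<forall>b\<in>set l. ball_dec b \<inter> Q = {})"
proof -
  obtain \<delta> where \<delta>: "\<delta> > 0" "\<forall>x\<in>K. \<forall>y\<in>Q. \<delta> \<le> dist x y"
    using separate_compact_closed[OF K Q d] by blast
  have "(0::real) < \<delta> / 2" using \<delta> by simp
  from of_rat_dense[OF this] obtain \<rho>0 :: rat where \<rho>0: "0 < (of_rat \<rho>0 :: real)" "(of_rat \<rho>0 :: real) < \<delta> / 2" by blast
  obtain rc where rc: "rat_dec rc = \<rho>0" using rat_dec_surj by blast
  have "\<forall>x. \<exists>c. dist (vec_dec c) (x :: real ^ 'n) < of_rat \<rho>0" using vec_dec_dense \<rho>0(1) by blast
  then obtain cc where cc: "\<And>x. dist (vec_dec (cc x)) (x :: real ^ 'n) < of_rat \<rho>0" by metis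
  define bx where "bx x = npair (cc x) rc" for x
  have bxe: "ball_dec (bx x) = ball (vec_dec (cc x)) (of_rat \<rho>0)" for x
    unfolding bx_def ball_dec_eq by (simp add: rc)
  have cov: "K \<subseteq> (\<Union>x\<in>K. ball_dec (bx x))" using cc unfolding bxe by fastforce
  obtain C' where C': "C' \<subseteq> K" "finite C'" "K \<subseteq> (\<Union>x\<in>C'. ball_dec (bx x))"
    using compactE_image[OF K _ cov] unfolding bxe by blast
  obtain xs where xs: "set xs = C'" using finite_list[OF C'(2)] by blast
  define l where "l = map bx xs"
  have "K \<subseteq> \<Union>(ball_dec ` set l)" using C'(3) xs unfolding l_def by auto
  moreover have "ball_dec b \<inter> Q = {}" if "b \<in> set l" for b
  proof -
    from that obtain x where x: "x \<in> K" "b = bx x" using xs C'(1) unfolding l_def by auto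
    show ?thesis
    proof (rule ccontr)
      assume "ball_dec b \<inter> Q \<noteq> {}"
      then obtain y where y0: "y \<in> ball_dec b" "y \<in> Q" by blast
      then have y: "y \<in> Q" "y \<in> ball (vec_dec (cc x)) (of_rat \<rho>0)" using x(2) bxe[of x] by auto
      then have y': "dist (vec_dec (cc x)) y < of_rat \<rho>0" by simp
      have "dist x y \<le> dist (vec_dec (cc x)) x + dist (vec_dec (cc x)) y" by (rule dist_triangle3)
      also have "\<dots> < \<delta>" using cc[of x] y' \<rho>0 by linarith
      finally show False using \<delta>(2) x y by force
    qed
  qed
  ultimately show ?thesis by blast
qed

lemma rho_of_consistent:
  fixes s :: "nat \<Rightarrow> nat"
  assumes cons: "\<And>i i' (j::'n::finite). \<bar>vec_dec (s i) $ j - vec_dec (s i') $ j\<bar> \<le> (1/2) ^ i + (1/2) ^ i'"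
  shows "\<exists>x :: real ^ 'n. rho s x"
proof -
  have "\<exists>L. (\<lambda>i. vec_dec (s i) $ j) \<longlonglongrightarrow> L" for j :: 'n
  proof -
    have "Cauchy (\<lambda>i. vec_dec (s i) $ j)"
    proof (rule metric_CauchyI)
      fix e :: real assume e: "e > 0"
      obtain M where M: "(1/2::real) ^ M < e / 2" using real_arch_pow_inv[of "e/2" "1/2"] e by auto
      show "\<exists>M. \<forall>m\<ge>M. \<forall>n\<ge>M. dist (vec_dec (s m) $ j) (vec_dec (s n) $ j) < e"
      proof (intro exI[of _ M] allI impI)
        fix m n :: nat assume "M \<le> m" "M \<le> n"
        then have "(1/2::real) ^ m \<le> (1/2) ^ M" "(1/2::real) ^ n \<le> (1/2) ^ M" by (simp_all add: power_decreasing)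
        with cons[where i=m and i'=n and j=j] M show "dist (vec_dec (s m) $ j) (vec_dec (s n) $ j) < e"
          unfolding dist_real_def by linarith
      qed
    qed
    then show ?thesis using Cauchy_convergent_iff convergent_def by blast
  qed
  then have "\<forall>j::'n. \<exists>L. (\<lambda>i. vec_dec (s i) $ j) \<longlonglongrightarrow> L" by blast
  from choice[OF this] obtain L where L: "\<And>j::'n. (\<lambda>i. vec_dec (s i) $ j) \<longlonglongrightarrow> L j" by blast
  define x :: "real ^ 'n" where "x = (\<chi> j. L j)"
  have "\<bar>vec_dec (s i) $ j - x $ j\<bar> \<le> (1/2) ^ i" for i j
  proof -
    have "(\<lambda>i'. \<bar>vec_dec (s i) $ j - vec_dec (s i') $ j\<bar>) \<longlonglongrightarrow> \<bar>vec_dec (s i) $ j - L j\<bar>"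
      by (intro tendsto_intros L)
    moreover have "(\<lambda>i'. (1/2::real) ^ i + (1/2) ^ i') \<longlonglongrightarrow> (1/2) ^ i + 0"
      by (intro tendsto_intros LIMSEQ_power_zero) auto
    ultimately have "\<bar>vec_dec (s i) $ j - L j\<bar> \<le> (1/2) ^ i + 0"
      by (rule LIMSEQ_le) (use cons in auto)
    then show ?thesis unfolding x_def by simp
  qed
  then show ?thesis unfolding rho_def by blast
qed

definition disjoint_test :: "'n::finite itself \<Rightarrow> nat \<Rightarrow> nat \<Rightarrow> nat \<Rightarrow> bool" where
  "disjoint_test T b a i \<longleftrightarrow> qle (qrat_dec (nsnd b)) qzero \<or>
     qle (qmul (qrat_dec (nsnd b)) (qrat_dec (nsnd b)))
         (qsum (enum_list :: 'n list) (\<lambda>j. qmul (qmax0 (qsub (qabs (qsub (qvec_nth (to_nat j) (nfst b)) (qvec_nth (to_nat j) a))) (qinv2 i)))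
                                          (qmax0 (qsub (qabs (qsub (qvec_nth (to_nat j) (nfst b)) (qvec_nth (to_nat j) a))) (qinv2 i)))))"

lemma disjoint_test_iff:
  "disjoint_test TYPE('n::finite) b a i \<longleftrightarrow> ball_dec b \<inter> cube (vec_dec a :: real ^ 'n) ((1/2) ^ i) = {}"
proof -
  define \<rho> where "\<rho> = real_of_rat (rat_dec (nsnd b))"
  define c :: "real ^ 'n" where "c = vec_dec (nfst b)"
  have sum: "qval (qsum (enum_list :: 'n list) (\<lambda>j. qmul (qmax0 (qsub (qabs (qsub (qvec_nth (to_nat j) (nfst b)) (qvec_nth (to_nat j) a))) (qinv2 i)))
                                          (qmax0 (qsub (qabs (qsub (qvec_nth (to_nat j) (nfst b)) (qvec_nth (to_nat j) a))) (qinv2 i)))))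
     = (\<Sum>j\<in>UNIV. (max 0 (\<bar>c $ j - (vec_dec a :: real ^ 'n) $ j\<bar> - (1/2) ^ i))\<^sup>2)"
    by (simp add: qval_qsum enum_list qval_qvec_nth c_def power2_eq_square)
  show ?thesis
  proof (cases "\<rho> \<le> 0")
    case True
    then have "ball_dec b = ({} :: (real ^ 'n) set)" unfolding ball_dec_eq \<rho>_def by auto
    then show ?thesis using True unfolding disjoint_test_def \<rho>_def by (simp add: qval_qrat_dec)
  next
    case False
    then have "\<not> qle (qrat_dec (nsnd b)) qzero" unfolding \<rho>_def by (simp add: qval_qrat_dec)
    moreover have "ball_dec b = ball c \<rho>" unfolding ball_dec_eq c_def \<rho>_def ..
    ultimately show ?thesis
      unfolding disjoint_test_def using ball_cube_disjoint_iff[of "(1/2)^i" \<rho> c "vec_dec a"] False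
      by (simp add: qval_qrat_dec sum \<rho>_def power2_eq_square)
  qed
qed

lemma decidable_disjoint_test[rec_intros]:
  "total_rec F \<Longrightarrow> total_rec G \<Longrightarrow> total_rec H \<Longrightarrow> decidable (\<lambda>x. disjoint_test T (F x) (G x) (H x))"
  unfolding disjoint_test_def by (intro rec_intros)

definition inconsistent_test :: "'n::finite itself \<Rightarrow> nat \<Rightarrow> nat \<Rightarrow> nat \<Rightarrow> nat \<Rightarrow> bool" where
  "inconsistent_test T a a' i i' \<longleftrightarrow> qex (enum_list :: 'n list)
     (\<lambda>j. qlt (qadd (qinv2 i) (qinv2 i')) (qabs (qsub (qvec_nth (to_nat j) a) (qvec_nth (to_nat j) a'))))"

lemma inconsistent_test_iff: "inconsistent_test TYPE('n::finite) a a' i i' \<longleftrightarrow>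
   (\<exists>j::'n. (1/2) ^ i + (1/2) ^ i' < \<bar>vec_dec a $ j - vec_dec a' $ j\<bar>)"
  by (simp add: inconsistent_test_def qex_iff enum_list qval_qvec_nth)

lemma decidable_inconsistent_test[rec_intros]:
  "total_rec F \<Longrightarrow> total_rec G \<Longrightarrow> total_rec H \<Longrightarrow> total_rec I \<Longrightarrow> decidable (\<lambda>x. inconsistent_test T (F x) (G x) (H x) (I x))"
  unfolding inconsistent_test_def by (intro rec_intros)

definition interleave_prefix :: "(nat \<Rightarrow> nat) \<Rightarrow> nat \<Rightarrow> nat \<Rightarrow> nat" where
  "interleave_prefix Pa cw n = list_encode (map (\<lambda>e. if e mod 2 = 0 then Pa (e div 2) else lnth cw (e div 2)) [0..<n])"

definition converges_on :: "recf \<Rightarrow> (nat \<Rightarrow> nat) \<Rightarrow> nat \<Rightarrow> nat \<Rightarrow> nat \<Rightarrow> bool" where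
  "converges_on r Pa d t cw \<longleftrightarrow> (\<exists>n\<le>2 * d. 2 \<le> eval_clocked_code r (npair t (list_encode [0, interleave_prefix Pa cw n])))"

definition inconsistent_prefix :: "'n::finite itself \<Rightarrow> nat \<Rightarrow> nat \<Rightarrow> bool" where
  "inconsistent_prefix T d cw \<longleftrightarrow> (\<exists>i<d. \<exists>i'<d. inconsistent_test T (lnth cw i) (lnth cw i') i i')"

definition excluded_by_cover :: "'n::finite itself \<Rightarrow> (nat \<Rightarrow> nat) \<Rightarrow> nat \<Rightarrow> nat \<Rightarrow> nat \<Rightarrow> bool" where
  "excluded_by_cover T Ka d t cw \<longleftrightarrow> (\<exists>i<d. \<exists>e<t. \<forall>k<llen (Ka e). disjoint_test T (lnth (Ka e) k) (lnth cw i) i)"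

definition candidate :: "'n::finite itself \<Rightarrow> nat \<Rightarrow> nat \<Rightarrow> nat \<Rightarrow> bool" where
  "candidate T B d cw \<longleftrightarrow> llen cw = d \<and> (\<forall>i<d. lnth cw i \<le> round_vec_bound T B i)"

definition candidate_bound :: "'n::finite itself \<Rightarrow> nat \<Rightarrow> nat \<Rightarrow> nat" where
  "candidate_bound T B d = Suc (list_encode (map (round_vec_bound T B) [0..<d]))"

text \<open>At depth d and clock t the search is done if every candidate cw, a code of d possible
  entries of a normalised name of a point of K, makes r produce its first output within t steps,
  or is not the prefix of any name, or describes a cube that one of the first t covers listed in
  the kappa-name certifies to be disjoint from K.\<close>

definition search_done :: "'n::finite itself \<Rightarrow> recf \<Rightarrow> (nat \<Rightarrow> nat) \<Rightarrow> (nat \<Rightarrow> nat) \<Rightarrow> nat \<Rightarrow> nat \<Rightarrow> bool" where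
  "search_done T r Pa Ka d t \<longleftrightarrow> (\<forall>cw<candidate_bound T (Suc (Ka 0)) d. candidate T (Suc (Ka 0)) d cw \<longrightarrow>
      converges_on r Pa d t cw \<or> inconsistent_prefix T d cw \<or> excluded_by_cover T Ka d t cw)"

definition candidate_output :: "'n::finite itself \<Rightarrow> recf \<Rightarrow> (nat \<Rightarrow> nat) \<Rightarrow> (nat \<Rightarrow> nat) \<Rightarrow> nat \<Rightarrow> nat \<Rightarrow> nat \<Rightarrow> nat" where
  "candidate_output T r Pa Ka d t y = (if candidate T (Suc (Ka 0)) d (nfst y) \<and> nsnd y \<le> 2 * d \<and> 2 \<le> eval_clocked_code r (npair t (list_encode [0, interleave_prefix Pa (nfst y) (nsnd y)]))
     then eval_clocked_code r (npair t (list_encode [0, interleave_prefix Pa (nfst y) (nsnd y)])) - 2 else 0)"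

definition output_bound :: "'n::finite itself \<Rightarrow> recf \<Rightarrow> (nat \<Rightarrow> nat) \<Rightarrow> (nat \<Rightarrow> nat) \<Rightarrow> nat \<Rightarrow> nat \<Rightarrow> nat" where
  "output_bound T r Pa Ka d t = Suc (bmax (candidate_output T r Pa Ka d t) (Suc (npair (candidate_bound T (Suc (Ka 0)) d) (2 * d))))"

definition trunc_less :: "(nat \<Rightarrow> nat) \<Rightarrow> nat \<Rightarrow> nat \<Rightarrow> nat" where "trunc_less Pa d e = (if e < d then Pa e else 0)"
definition trunc_le :: "(nat \<Rightarrow> nat) \<Rightarrow> nat \<Rightarrow> nat \<Rightarrow> nat" where "trunc_le Ka t e = (if e \<le> t then Ka e else 0)"
definition even_entries :: "nat \<Rightarrow> nat \<Rightarrow> nat" where "even_entries c e = lnth c (2 * e)"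
definition odd_entries :: "nat \<Rightarrow> nat \<Rightarrow> nat" where "odd_entries c e = lnth c (2 * e + 1)"

text \<open>The truncations make the search predicate read only the entries below 2 z + 2 of the
  prefix code c of the interleaved name.\<close>

definition search_done_code :: "'n::finite itself \<Rightarrow> recf \<Rightarrow> nat \<Rightarrow> nat \<Rightarrow> bool" where
  "search_done_code T r c z \<longleftrightarrow>
     search_done T r (trunc_less (even_entries c) (nfst z)) (trunc_le (odd_entries c) (nsnd z)) (nfst z) (nsnd z)"

definition output_bound_code :: "'n::finite itself \<Rightarrow> recf \<Rightarrow> nat \<Rightarrow> nat \<Rightarrow> nat" where
  "output_bound_code T r c z =
     output_bound T r (trunc_less (even_entries c) (nfst z)) (trunc_le (odd_entries c) (nsnd z)) (nfst z) (nsnd z)"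

lemma total_rec_eval_clocked_code[rec_intros]:
  "total_rec F \<Longrightarrow> total_rec (\<lambda>x. eval_clocked_code r (F x))"
  by (rule total_rec_compose[OF total_rec_eval_clocked_code_fun])
lemma total_rec_list_encode_pair[rec_intros]:
  "total_rec F \<Longrightarrow> total_rec G \<Longrightarrow> total_rec (\<lambda>x. list_encode [F x, G x])"
proof -
  assume "total_rec F" "total_rec G"
  then have "total_rec (\<lambda>x. lcons (F x) (lcons (G x) 0))" by (intro rec_intros)
  then show ?thesis by (simp add: lcons_def npair_def)
qed

lemma total_rec_interleave_prefix:
  "total_rec (\<lambda>z. Pa (nfst z) (nsnd z)) \<Longrightarrow> total_rec CW \<Longrightarrow> total_rec N \<Longrightarrow> total_rec (\<lambda>x. interleave_prefix (Pa x) (CW x) (N x))"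
proof -
  assume a: "total_rec (\<lambda>z. Pa (nfst z) (nsnd z))" and b: "total_rec CW" "total_rec N"
  have "total_rec (\<lambda>x. list_encode (map (\<lambda>e. if e mod 2 = 0 then Pa x (e div 2) else lnth (CW x) (e div 2)) [0..<N x]))"
    by (rule total_rec_list_encode_map[where F="\<lambda>x e. if e mod 2 = 0 then Pa x (e div 2) else lnth (CW x) (e div 2)"])
       (intro rec_intros total_rec_compose2[OF a] total_rec_compose[OF b(1)] b(2))+
  then show ?thesis unfolding interleave_prefix_def .
qed

lemma decidable_search_done_code: "decidable (\<lambda>z. search_done_code T r (nfst z) (nsnd z))"
  unfolding search_done_code_def search_done_def converges_on_def inconsistent_prefix_def excluded_by_cover_def candidate_def candidate_bound_def trunc_less_def trunc_le_def even_entries_def odd_entries_def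
  by (intro rec_intros total_rec_interleave_prefix)

lemma total_rec_output_bound_code: "total_rec (\<lambda>z. output_bound_code T r (nfst z) (nsnd z))"
  unfolding output_bound_code_def output_bound_def candidate_output_def candidate_def candidate_bound_def trunc_less_def trunc_le_def even_entries_def odd_entries_def
  by (intro rec_intros total_rec_interleave_prefix)

lemma interleave_prefix_trunc:
  "n \<le> 2 * d \<Longrightarrow> interleave_prefix (trunc_less Pa d) cw n = interleave_prefix Pa cw n"
  unfolding interleave_prefix_def by (intro arg_cong[where f=list_encode] map_cong refl) (auto simp: trunc_less_def)

lemma converges_on_trunc: "converges_on r (trunc_less Pa d) d t cw = converges_on r Pa d t cw"
  unfolding converges_on_def using interleave_prefix_trunc by auto

lemma excluded_by_cover_trunc: "excluded_by_cover T (trunc_le Ka t) d t cw = excluded_by_cover T Ka d t cw"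
proof -
  have e: "\<And>e. e < t \<Longrightarrow> trunc_le Ka t e = Ka e" by (simp add: trunc_le_def)
  show ?thesis unfolding excluded_by_cover_def
  proof
    assume "\<exists>i<d. \<exists>e<t. \<forall>k<llen (trunc_le Ka t e). disjoint_test T (lnth (trunc_le Ka t e) k) (lnth cw i) i"
    then obtain i e where "i < d" "e < t" "\<forall>k<llen (trunc_le Ka t e). disjoint_test T (lnth (trunc_le Ka t e) k) (lnth cw i) i" by blast
    then show "\<exists>i<d. \<exists>e<t. \<forall>k<llen (Ka e). disjoint_test T (lnth (Ka e) k) (lnth cw i) i" using e by metis
  next
    assume "\<exists>i<d. \<exists>e<t. \<forall>k<llen (Ka e). disjoint_test T (lnth (Ka e) k) (lnth cw i) i"
    then obtain i e where "i < d" "e < t" "\<forall>k<llen (Ka e). disjoint_test T (lnth (Ka e) k) (lnth cw i) i" by blast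
    then show "\<exists>i<d. \<exists>e<t. \<forall>k<llen (trunc_le Ka t e). disjoint_test T (lnth (trunc_le Ka t e) k) (lnth cw i) i" using e by metis
  qed
qed

lemma search_done_trunc: "search_done T r (trunc_less Pa d) (trunc_le Ka t) d t = search_done T r Pa Ka d t"
  unfolding search_done_def converges_on_trunc excluded_by_cover_trunc by (simp add: trunc_le_def)

lemma candidate_output_trunc:
  "candidate_output T r (trunc_less Pa d) (trunc_le Ka t) d t = candidate_output T r Pa Ka d t"
  unfolding candidate_output_def using interleave_prefix_trunc by (auto simp: trunc_le_def fun_eq_iff)

lemma output_bound_trunc: "output_bound T r (trunc_less Pa d) (trunc_le Ka t) d t = output_bound T r Pa Ka d t"
  unfolding output_bound_def candidate_output_trunc by (simp add: trunc_le_def)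

lemma trunc_less_even_entries:
  "2 * d \<le> n \<Longrightarrow> trunc_less (even_entries (prefix_code (interleave P K) n)) d = trunc_less P d"
  by (auto simp: trunc_less_def even_entries_def fun_eq_iff)

lemma trunc_le_odd_entries:
  "2 * t + 1 < n \<Longrightarrow> trunc_le (odd_entries (prefix_code (interleave P K) n)) t = trunc_le K t"
  by (auto simp: trunc_le_def odd_entries_def fun_eq_iff)

lemma search_done_code_prefix_code:
  "2 * z + 1 < n \<Longrightarrow>
   search_done_code T r (prefix_code (interleave P K) n) z \<longleftrightarrow> search_done T r P K (nfst z) (nsnd z)"
  using nfst_le[of z] nsnd_le[of z] unfolding search_done_code_def
  by (simp add: trunc_less_even_entries trunc_le_odd_entries search_done_trunc)

lemma output_bound_code_prefix_code:
  "2 * z + 1 < n \<Longrightarrow>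
   output_bound_code T r (prefix_code (interleave P K) n) z = output_bound T r P K (nfst z) (nsnd z)"
  using nfst_le[of z] nsnd_le[of z] unfolding output_bound_code_def
  by (simp add: trunc_less_even_entries trunc_le_odd_entries output_bound_trunc)

lemma interleave_prefix_list_encode:
  "n \<le> 2 * d \<Longrightarrow> interleave_prefix P (list_encode (map s [0..<d])) n = prefix_code (interleave P s) n"
  unfolding interleave_prefix_def prefix_code_def
  by (intro arg_cong[where f=list_encode] map_cong refl) (auto simp: interleave_def lnth_encode even_iff_mod_2_eq_zero)

lemma eval_clocked_code_npair: "eval_clocked_code r (npair t (list_encode xs)) = option_code (eval_clocked r t xs)"
  by (simp add: eval_clocked_code_def)

lemma not_inconsistent_prefix:
  assumes "rho s (x :: real ^ 'n::finite)"
  shows "\<not> inconsistent_prefix TYPE('n) d (list_encode (map s [0..<d]))"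
proof
  assume "inconsistent_prefix TYPE('n) d (list_encode (map s [0..<d]))"
  then obtain i i' j where "(1/2) ^ i + (1/2) ^ i' < \<bar>vec_dec (s i) $ j - vec_dec (s i') $ (j :: 'n)\<bar>"
    unfolding inconsistent_prefix_def inconsistent_test_iff by (auto simp: lnth_encode)
  moreover have "\<bar>vec_dec (s i) $ j - x $ j\<bar> \<le> (1/2) ^ i" "\<bar>vec_dec (s i') $ j - x $ j\<bar> \<le> (1/2) ^ i'"
    using assms unfolding rho_def by auto
  ultimately show False by linarith
qed

lemma not_excluded_by_cover:
  assumes k: "kappa \<kappa> K" and x: "x \<in> K" and s: "rho s (x :: real ^ 'n::finite)"
  shows "\<not> excluded_by_cover TYPE('n) \<kappa> d t (list_encode (map s [0..<d]))"
proof
  assume "excluded_by_cover TYPE('n) \<kappa> d t (list_encode (map s [0..<d]))"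
  then obtain i e where "i < d" and disj: "\<forall>k<llen (\<kappa> e). disjoint_test TYPE('n) (lnth (\<kappa> e) k) (s i) i"
    unfolding excluded_by_cover_def by (auto simp: lnth_encode)
  from k x obtain b where b: "b \<in> set (list_decode (\<kappa> e))" "x \<in> ball_dec b"
    unfolding kappa_def by blast
  then obtain k' where "k' < llen (\<kappa> e)" "lnth (\<kappa> e) k' = b"
    by (auto simp: llen_def lnth_eq in_set_conv_nth)
  with disj have "ball_dec b \<inter> cube (vec_dec (s i) :: real ^ 'n) ((1/2) ^ i) = {}"
    unfolding disjoint_test_iff by metis
  moreover have "x \<in> cube (vec_dec (s i)) ((1/2) ^ i)" using s unfolding rho_def cube_def by auto
  ultimately show False using b(2) by blast
qed

lemma normalize_name_candidate:
  fixes d :: nat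
  assumes k: "kappa \<kappa> K" and x: "x \<in> K" and p: "rho p (x :: real ^ 'n::finite)"
  defines "cw \<equiv> list_encode (map (normalize_name TYPE('n) p) [0..<d])"
  shows "candidate TYPE('n) (Suc (\<kappa> 0)) d cw" and "cw < candidate_bound TYPE('n) (Suc (\<kappa> 0)) d"
proof -
  have "\<bar>x $ j\<bar> + 1 \<le> real (Suc (\<kappa> 0))" for j using kappa_coord_bound[OF k x, of j] by simp
  then have sb: "normalize_name TYPE('n) p i \<le> round_vec_bound TYPE('n) (Suc (\<kappa> 0)) i" for i
    by (rule normalize_name_le_bound[OF p])
  then show "candidate TYPE('n) (Suc (\<kappa> 0)) d cw"
    unfolding candidate_def cw_def by (simp add: llen_def lnth_encode)
  have "cw \<le> list_encode (map (round_vec_bound TYPE('n) (Suc (\<kappa> 0))) [0..<d])"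
    unfolding cw_def by (rule list_encode_mono) (auto simp: sb)
  then show "cw < candidate_bound TYPE('n) (Suc (\<kappa> 0)) d" unfolding candidate_bound_def by simp
qed

lemma candidate_output_less_output_bound:
  assumes "cw < candidate_bound T (Suc (Ka 0)) d" and "n \<le> 2 * d"
  shows "candidate_output T r Pa Ka d t (npair cw n) < output_bound T r Pa Ka d t"
proof -
  have "npair cw n < Suc (npair (candidate_bound T (Suc (Ka 0)) d) (2 * d))"
    using npair_mono[of cw "candidate_bound T (Suc (Ka 0)) d" n "2 * d"] assms by simp
  then show ?thesis unfolding output_bound_def using bmax_ge le_imp_less_Suc by blast
qed

lemma output_bound_sound:
  fixes x :: "real ^ 'n::finite" and y :: "real ^ 'm::finite"
  assumes G: "search_done TYPE('n) r P \<kappa> d t" and k: "kappa \<kappa> K" and x: "x \<in> K" and p: "rho p x"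
    and q: "realizes r (interleave P (normalize_name TYPE('n) p)) q" and y: "rho q y"
  shows "\<bar>y $ j\<bar> \<le> real (output_bound TYPE('n) r P \<kappa> d t)"
proof -
  define s where "s = normalize_name TYPE('n) p"
  define cw where "cw = list_encode (map s [0..<d])"
  have rs: "rho s x" unfolding s_def by (rule rho_normalize_name[OF p])
  note cand = normalize_name_candidate[OF k x p, of d, folded s_def, folded cw_def]
  from G cand not_inconsistent_prefix[OF rs, of d] not_excluded_by_cover[OF k x rs, of d t]
  obtain n where n: "n \<le> 2 * d"
    and conv: "2 \<le> eval_clocked_code r (npair t (list_encode [0, interleave_prefix P cw n]))"
    unfolding search_done_def converges_on_def cw_def by blast
  have pre: "interleave_prefix P cw n = prefix_code (interleave P s) n"
    unfolding cw_def by (rule interleave_prefix_list_encode[OF n])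
  from conv obtain v where v: "eval_clocked r t [0, prefix_code (interleave P s) n] = Some (Suc v)"
    unfolding pre eval_clocked_code_npair
    by (cases "eval_clocked r t [0, prefix_code (interleave P s) n]") (auto simp: Suc_le_eq gr0_conv_Suc)
  then have "v = q 0" using q eval_clocked_sound unfolding realizes_def s_def by blast
  moreover have "candidate_output TYPE('n) r P \<kappa> d t (npair cw n) = v"
    unfolding candidate_output_def nfst_npair nsnd_npair pre eval_clocked_code_npair v using cand(1) n by simp
  ultimately have "q 0 < output_bound TYPE('n) r P \<kappa> d t"
    using candidate_output_less_output_bound[where Ka=\<kappa> and r=r and Pa=P and t=t, OF cand(2) n] by simp
  moreover have "\<bar>vec_dec (q 0) $ j - y $ j\<bar> \<le> 1" using y unfolding rho_def by (metis power_0)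
  moreover have "\<bar>vec_dec (q 0) $ j\<bar> \<le> real (q 0)" by (rule vec_dec_abs_le)
  ultimately show ?thesis by linarith
qed

lemma closed_cube: "closed (cube (a :: real ^ 'n::finite) h)"
proof -
  have "cube a h = (\<Inter>j. {y. \<bar>a $ j - y $ j\<bar> \<le> h})" by (auto simp: cube_def)
  moreover have "closed {y :: real ^ 'n. \<bar>a $ j - y $ j\<bar> \<le> h}" for j
    by (intro closed_Collect_le continuous_intros)
  ultimately show ?thesis by auto
qed

lemma interleave_prefix_eq:
  "(\<forall>i<n. lnth cw i = s i) \<Longrightarrow> interleave_prefix P cw n = prefix_code (interleave P s) n"
  unfolding interleave_prefix_def prefix_code_def
  by (intro arg_cong[where f=list_encode] map_cong refl) (auto simp: interleave_def even_iff_mod_2_eq_zero)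

lemma inconsistent_prefix_eventually:
  assumes "(1/2) ^ i + (1/2) ^ i' < \<bar>vec_dec (s i) $ j - vec_dec (s i') $ (j :: 'n::finite)\<bar>"
  shows "\<exists>N. \<forall>d cw. N \<le> d \<longrightarrow> (\<forall>l<N. lnth cw l = s l) \<longrightarrow> inconsistent_prefix TYPE('n) d cw"
proof (intro exI allI impI)
  fix d cw assume d: "Suc (max i i') \<le> d" and agree: "\<forall>l<Suc (max i i'). lnth cw l = s l"
  then have "i < d" "i' < d" "lnth cw i = s i" "lnth cw i' = s i'" by auto
  moreover have "inconsistent_test TYPE('n) (s i) (s i') i i'"
    unfolding inconsistent_test_iff using assms by blast
  ultimately have "i < d" "i' < d" "inconsistent_test TYPE('n) (lnth cw i) (lnth cw i') i i'" by simp_all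
  then show "inconsistent_prefix TYPE('n) d cw"
    unfolding inconsistent_prefix_def by blast
qed

lemma converges_on_eventually:
  assumes "realizes r (interleave P s) q"
  shows "\<exists>N. \<forall>d cw. N \<le> d \<longrightarrow> (\<forall>l<N. lnth cw l = s l) \<longrightarrow> converges_on r P d d cw"
proof -
  from assms obtain n0 where "eval r [0, prefix_code (interleave P s) n0] (Suc (q 0))"
    unfolding realizes_def by blast
  from eval_clocked_complete[OF this] obtain t0
    where t0: "\<forall>t\<ge>t0. eval_clocked r t [0, prefix_code (interleave P s) n0] = Some (Suc (q 0))" by blast
  show ?thesis
  proof (intro exI allI impI)
    fix d cw assume d: "n0 + t0 \<le> d" and "\<forall>l<n0 + t0. lnth cw l = s l"
    then have "interleave_prefix P cw n0 = prefix_code (interleave P s) n0"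
      by (intro interleave_prefix_eq) auto
    then have "eval_clocked_code r (npair d (list_encode [0, interleave_prefix P cw n0])) = Suc (Suc (q 0))"
      unfolding eval_clocked_code_npair using t0 d by simp
    with d show "converges_on r P d d cw" unfolding converges_on_def by (intro exI[of _ n0]) auto
  qed
qed

lemma cube_disjoint_of_notin:
  fixes K :: "(real ^ 'n::finite) set"
  assumes K: "closed K" and s: "rho s x" and x: "x \<notin> K"
  shows "\<exists>i. K \<inter> cube (vec_dec (s i)) ((1/2) ^ i) = {}"
proof -
  have "open (- K)" using K by (simp add: open_Compl)
  then obtain \<epsilon> where \<epsilon>: "\<epsilon> > 0" "ball x \<epsilon> \<subseteq> - K" using x open_contains_ball by blast
  obtain i where i: "(1/2::real) ^ i < \<epsilon> / (2 * real CARD('n))"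
    using real_arch_pow_inv[of "\<epsilon> / (2 * real CARD('n))" "1/2"] \<epsilon> by auto
  have "y \<notin> K" if "y \<in> cube (vec_dec (s i)) ((1/2) ^ i)" for y
  proof -
    have "\<bar>x $ j - y $ j\<bar> \<le> 2 * (1/2) ^ i" for j
    proof -
      have "\<bar>vec_dec (s i) $ j - x $ j\<bar> \<le> (1/2) ^ i" using s unfolding rho_def by blast
      moreover have "\<bar>vec_dec (s i) $ j - y $ j\<bar> \<le> (1/2) ^ i" using that unfolding cube_def by blast
      ultimately show ?thesis by linarith
    qed
    then have "dist x y \<le> real CARD('n) * (2 * (1/2) ^ i)" by (rule dist_le_card_mult)
    also have "\<dots> < \<epsilon>" using i by (simp add: field_simps)
    finally have "y \<in> ball x \<epsilon>" by simp
    with \<epsilon>(2) show ?thesis by blast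
  qed
  then show ?thesis by blast
qed

lemma excluded_by_cover_eventually:
  fixes K :: "(real ^ 'n::finite) set"
  assumes k: "kappa \<kappa> K" and s: "rho s x" and x: "x \<notin> K"
  shows "\<exists>N. \<forall>d cw. N \<le> d \<longrightarrow> (\<forall>l<N. lnth cw l = s l) \<longrightarrow> excluded_by_cover TYPE('n) \<kappa> d d cw"
proof -
  have K: "compact K" using k by (simp add: kappa_def)
  from cube_disjoint_of_notin[OF compact_imp_closed[OF K] s x]
  obtain i where i: "K \<inter> cube (vec_dec (s i)) ((1/2) ^ i) = {}" ..
  let ?Q = "cube (vec_dec (s i)) ((1/2) ^ i) :: (real ^ 'n) set"
  obtain l where l: "K \<subseteq> \<Union>(ball_dec ` set l)" "\<forall>b\<in>set l. ball_dec b \<inter> ?Q = {}"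
    using rational_cover_avoiding[OF K closed_cube i] by blast
  from k l(1) obtain e where e: "\<kappa> e = list_encode l" unfolding kappa_def by (metis list_encode_inverse)
  have disj: "disjoint_test TYPE('n) (lnth (\<kappa> e) k') (s i) i" if "k' < llen (\<kappa> e)" for k'
  proof -
    from that have "k' < length l" unfolding e by (simp add: llen_def)
    with l(2) show ?thesis unfolding disjoint_test_iff e by (simp add: lnth_encode)
  qed
  show ?thesis
  proof (intro exI[of _ "Suc (max i e)"] allI impI)
    fix d cw assume "Suc (max i e) \<le> d" and "\<forall>l<Suc (max i e). lnth cw l = s l"
    then have "i < d" "e < d" "lnth cw i = s i" by auto
    moreover from disj have "\<forall>k'<llen (\<kappa> e). disjoint_test TYPE('n) (lnth (\<kappa> e) k') (lnth cw i) i"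
      using \<open>lnth cw i = s i\<close> by simp
    ultimately show "excluded_by_cover TYPE('n) \<kappa> d d cw"
      unfolding excluded_by_cover_def by blast
  qed
qed

lemma bounded_seqs_cluster:
  fixes u :: "nat \<Rightarrow> nat \<Rightarrow> nat"
  assumes "\<And>k i. u k i \<le> \<beta> i"
  shows "\<exists>s. \<forall>N. \<exists>k\<ge>N. \<forall>i<N. u k i = s i"
proof -
  obtain \<sigma> s :: "nat \<Rightarrow> nat"
    where \<sigma>: "strict_mono \<sigma>" and s: "\<forall>n. \<exists>m0. \<forall>m\<ge>m0. \<forall>i<n. u (\<sigma> m) i = s i"
    using bounded_seqs_stable_subseq[of u \<beta> "{0 :: real ^ 1}" "\<lambda>_. 0", OF assms] by auto
  have "\<exists>k\<ge>N. \<forall>i<N. u k i = s i" for N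
  proof -
    from s obtain m0 where "\<forall>m\<ge>m0. \<forall>i<N. u (\<sigma> m) i = s i" by blast
    moreover have "N \<le> \<sigma> (max m0 N)" using seq_suble[OF \<sigma>, of "max m0 N"] by simp
    ultimately show ?thesis by (intro exI[of _ "\<sigma> (max m0 N)"]) auto
  qed
  then show ?thesis by blast
qed

lemma search_done_exists:
  fixes f :: "(nat \<Rightarrow> nat) \<times> (real ^ 'n::finite) \<Rightarrow> (real ^ 'm::finite) set"
  assumes r: "mv_realizer r (prod_rep id_rep rho) rho (D \<times> X) f"
    and P: "P \<in> D" and k: "kappa \<kappa> K" and KX: "K \<subseteq> X"
  shows "\<exists>d t. search_done TYPE('n) r P \<kappa> d t"
proof (rule ccontr)
  assume "\<not> ?thesis"
  then have "\<forall>d. \<exists>cw. candidate TYPE('n) (Suc (\<kappa> 0)) d cw \<and> \<not> converges_on r P d d cw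
      \<and> \<not> inconsistent_prefix TYPE('n) d cw \<and> \<not> excluded_by_cover TYPE('n) \<kappa> d d cw"
    unfolding search_done_def by blast
  then obtain cws where cws: "\<And>d. candidate TYPE('n) (Suc (\<kappa> 0)) d (cws d) \<and> \<not> converges_on r P d d (cws d)
      \<and> \<not> inconsistent_prefix TYPE('n) d (cws d) \<and> \<not> excluded_by_cover TYPE('n) \<kappa> d d (cws d)"
    by metis
  define u where "u d i = (if i < d then lnth (cws d) i else 0)" for d i
  have "u d i \<le> round_vec_bound TYPE('n) (Suc (\<kappa> 0)) i" for d i
    using cws[of d] unfolding u_def candidate_def by auto
  then obtain s where s: "\<forall>N. \<exists>d\<ge>N. \<forall>i<N. u d i = s i" using bounded_seqs_cluster by blast
  have "\<exists>N. \<forall>d cw. N \<le> d \<longrightarrow> (\<forall>l<N. lnth cw l = s l) \<longrightarrow>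
      converges_on r P d d cw \<or> inconsistent_prefix TYPE('n) d cw \<or> excluded_by_cover TYPE('n) \<kappa> d d cw"
  proof (cases "\<exists>i i' j. (1/2) ^ i + (1/2) ^ i' < \<bar>vec_dec (s i) $ j - vec_dec (s i') $ (j :: 'n)\<bar>")
    case True
    then obtain i i' and j :: 'n
      where "(1/2) ^ i + (1/2) ^ i' < \<bar>vec_dec (s i) $ j - vec_dec (s i') $ j\<bar>" by blast
    from inconsistent_prefix_eventually[OF this] show ?thesis by blast
  next
    case False
    then have "\<bar>vec_dec (s i) $ j - vec_dec (s i') $ (j :: 'n)\<bar> \<le> (1/2) ^ i + (1/2) ^ i'" for i i' j
      by (simp add: not_less)
    then obtain x :: "real ^ 'n" where x: "rho s x" using rho_of_consistent by blast
    show ?thesis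
    proof (cases "x \<in> K")
      case True
      with mv_realizerD[OF r] P KX prod_rep_interleave[OF x] obtain q where "realizes r (interleave P s) q" by blast
      from converges_on_eventually[OF this] show ?thesis by blast
    next
      case False
      from excluded_by_cover_eventually[OF k x this] show ?thesis by blast
    qed
  qed
  then obtain N where N: "\<And>d cw. N \<le> d \<Longrightarrow> \<forall>l<N. lnth cw l = s l \<Longrightarrow>
      converges_on r P d d cw \<or> inconsistent_prefix TYPE('n) d cw \<or> excluded_by_cover TYPE('n) \<kappa> d d cw"
    by blast
  from s obtain d where "N \<le> d" "\<forall>l<N. u d l = s l" by blast
  then have "\<forall>l<N. lnth (cws d) l = s l" unfolding u_def by auto
  with N[OF \<open>N \<le> d\<close>] cws[of d] show False by blast
qed

theorem normal_values_bound_computable: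
  fixes f :: "(nat \<Rightarrow> nat) \<times> (real ^ 'n::finite) \<Rightarrow> (real ^ 'm::finite) set"
  assumes r: "mv_realizer r (prod_rep id_rep rho) rho (D \<times> X) f"
  shows "mv_computable (prod_rep id_rep kappa) nu (D \<times> {K. compact K \<and> K \<subseteq> X})
           (\<lambda>(P, K). {N. \<forall>y\<in>(\<Union>x\<in>K. normal_values TYPE('n) r f (P, x)). \<forall>j. \<bar>y $ j\<bar> \<le> real N})"
proof -
  let ?M = "search_machine (search_done_code TYPE('n) r) (output_bound_code TYPE('n) r)"
  have "total_rec ?M"
    by (rule total_rec_search_machine[OF decidable_search_done_code total_rec_output_bound_code])
  then obtain re where re: "\<And>i c. eval re [i, c] (?M c)" using ex_recf_ignoring_index by blast
  show ?thesis unfolding mv_computable_def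
  proof (intro exI[of _ re] ballI allI impI)
    fix PK pp assume "PK \<in> D \<times> {K. compact K \<and> K \<subseteq> X}" and pn: "prod_rep id_rep kappa pp PK"
    then obtain P K where PK: "PK = (P, K)" "P \<in> D" "K \<subseteq> X" by auto
    define \<kappa> where "\<kappa> = (\<lambda>i. pp (2 * i + 1))"
    from pn have P: "P = (\<lambda>i. pp (2 * i))" and k: "kappa \<kappa> K"
      unfolding PK by (auto simp: prod_rep_def id_rep_def \<kappa>_def)
    have pp: "pp = interleave P \<kappa>" unfolding P \<kappa>_def interleave_split ..
    let ?Z = "LEAST z. search_done TYPE('n) r P \<kappa> (nfst z) (nsnd z)"
    obtain d t where "search_done TYPE('n) r P \<kappa> d t" using search_done_exists[OF r PK(2) k PK(3)] by blast
    then have ex: "\<exists>z. search_done TYPE('n) r P \<kappa> (nfst z) (nsnd z)" by (intro exI[of _ "npair d t"]) simp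
    have "realizes re pp (\<lambda>i. output_bound TYPE('n) r P \<kappa> (nfst ?Z) (nsnd ?Z))"
      unfolding pp by (rule realizes_search_machine[OF re search_done_code_prefix_code output_bound_code_prefix_code ex])
    moreover have "\<bar>y $ j\<bar> \<le> real (output_bound TYPE('n) r P \<kappa> (nfst ?Z) (nsnd ?Z))"
      if "y \<in> (\<Union>x\<in>K. normal_values TYPE('n) r f (P, x))" for y j
    proof -
      from that obtain x p q where x: "x \<in> K"
        and pq: "rho p x" "realizes r (interleave P (normalize_name TYPE('n) p)) q" "rho q y"
        unfolding normal_values_def by auto
      show ?thesis by (rule output_bound_sound[OF LeastI_ex[OF ex] k x pq])
    qed
    ultimately show "\<exists>q b. realizes re pp q \<and> nu q b \<and>
        b \<in> (\<lambda>(P, K). {N. \<forall>y\<in>(\<Union>x\<in>K. normal_values TYPE('n) r f (P, x)). \<forall>j. \<bar>y $ j\<bar> \<le> real N}) PK"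
      unfolding PK nu_def by auto
  qed
qed

theorem bounded_subfunction_param:
  fixes f :: "(nat \<Rightarrow> nat) \<times> (real ^ 'n::finite) \<Rightarrow> (real ^ 'm::finite) set"
  assumes "mv_computable (prod_rep id_rep rho) rho (D \<times> X) f"
  obtains g where "mv_computable (prod_rep id_rep rho) rho (D \<times> X) g" and "\<forall>z\<in>D \<times> X. g z \<subseteq> f z"
    and "\<forall>p\<in>D. \<forall>K. compact K \<and> K \<subseteq> X \<longrightarrow> bounded (\<Union>x\<in>K. g (p, x))"
    and "mv_computable (prod_rep id_rep kappa) nu (D \<times> {K. compact K \<and> K \<subseteq> X})
           (\<lambda>(p, K). {N. \<forall>y\<in>(\<Union>x\<in>K. g (p, x)). \<forall>j. \<bar>y $ j\<bar> \<le> real N})"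
proof -
  from assms obtain r where r: "mv_realizer r (prod_rep id_rep rho) rho (D \<times> X) f"
    unfolding mv_computable_iff_realizer ..
  show thesis
    by (rule that[OF normal_values_computable[OF r] _ _ normal_values_bound_computable[OF r]])
       (use normal_values_subset normal_values_bounded[OF r] in blast)+
qed

theorem bounded_subfunction:
  fixes f :: "(real ^ 'n::finite) \<Rightarrow> (real ^ 'm::finite) set"
  assumes "mv_computable rho rho X f"
  obtains g where "mv_computable rho rho X g" and "\<forall>x\<in>X. g x \<subseteq> f x"
    and "\<forall>K. compact K \<and> K \<subseteq> X \<longrightarrow> bounded (\<Union>x\<in>K. g x)"
    and "mv_computable kappa nu {K. compact K \<and> K \<subseteq> X} (\<lambda>K. {N. \<forall>y\<in>(\<Union>x\<in>K. g x). \<forall>j. \<bar>y $ j\<bar> \<le> real N})"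
proof -
  let ?Z = "\<lambda>_::nat. 0::nat"
  have "mv_computable (prod_rep id_rep rho) rho ({?Z} \<times> X) (\<lambda>z. f (snd z))"
    by (rule mv_computable_add_param[OF assms])
  then obtain g where g: "mv_computable (prod_rep id_rep rho) rho ({?Z} \<times> X) g"
    "\<forall>z\<in>{?Z} \<times> X. g z \<subseteq> f (snd z)" "\<forall>p\<in>{?Z}. \<forall>K. compact K \<and> K \<subseteq> X \<longrightarrow> bounded (\<Union>x\<in>K. g (p, x))"
    "mv_computable (prod_rep id_rep kappa) nu ({?Z} \<times> {K. compact K \<and> K \<subseteq> X})
       (\<lambda>(p, K). {N. \<forall>y\<in>(\<Union>x\<in>K. g (p, x)). \<forall>j. \<bar>y $ j\<bar> \<le> real N})"
    by (rule bounded_subfunction_param)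
  show thesis
  proof (rule that[of "\<lambda>x. g (?Z, x)"])
    show "mv_computable rho rho X (\<lambda>x. g (?Z, x))" by (rule mv_computable_fix_param[OF g(1)])
    show "mv_computable kappa nu {K. compact K \<and> K \<subseteq> X}
        (\<lambda>K. {N. \<forall>y\<in>(\<Union>x\<in>K. g (?Z, x)). \<forall>j. \<bar>y $ j\<bar> \<le> real N})"
      using mv_computable_fix_param[OF g(4)] by simp
  qed (use g(2,3) in auto)
qed

theorem lemma2:
  fixes X :: "(real ^ 'n) set"
  assumes "re_open X"
  shows
   "mv_computable (prod_rep theta rho) nu {(U, x::real ^ 'n). open U \<and> x \<in> U}
       (\<lambda>(U, x). {k. cball x ((1/2) ^ k) \<subseteq> U})
  \<and> (\<forall>f :: real ^ 'n \<Rightarrow> (real ^ 'm) set. mv_computable rho rho X f \<longrightarrow>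
       (\<exists>g. mv_computable rho rho X g \<and> (\<forall>x\<in>X. g x \<subseteq> f x) \<and>
            (\<forall>K. compact K \<and> K \<subseteq> X \<longrightarrow> bounded (\<Union>x\<in>K. g x))))
  \<and> (\<forall>f :: real ^ 'n \<Rightarrow> (real ^ 1) set. mv_computable rho rho X f \<longrightarrow>
       (\<exists>g. mv_computable rho rho X g \<and> (\<forall>x\<in>X. g x \<subseteq> f x) \<and>
            (\<forall>K. compact K \<and> K \<subseteq> X \<longrightarrow> bounded (\<Union>x\<in>K. g x)) \<and>
            mv_computable kappa nu {K. compact K \<and> K \<subseteq> X}
              (\<lambda>K. {N. \<forall>y\<in>(\<Union>x\<in>K. g x). \<bar>y $ 1\<bar> \<le> real N})))
  \<and> (\<forall>(D :: (nat \<Rightarrow> nat) set) (f :: (nat \<Rightarrow> nat) \<times> (real ^ 'n) \<Rightarrow> (real ^ 'm) set).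
       mv_computable (prod_rep id_rep rho) rho (D \<times> X) f \<longrightarrow>
       (\<exists>g. mv_computable (prod_rep id_rep rho) rho (D \<times> X) g \<and> (\<forall>z\<in>D \<times> X. g z \<subseteq> f z) \<and>
            (\<forall>p\<in>D. \<forall>K. compact K \<and> K \<subseteq> X \<longrightarrow> bounded (\<Union>x\<in>K. g (p, x)))))
  \<and> (\<forall>(D :: (nat \<Rightarrow> nat) set) (f :: (nat \<Rightarrow> nat) \<times> (real ^ 'n) \<Rightarrow> (real ^ 1) set).
       mv_computable (prod_rep id_rep rho) rho (D \<times> X) f \<longrightarrow>
       (\<exists>g. mv_computable (prod_rep id_rep rho) rho (D \<times> X) g \<and> (\<forall>z\<in>D \<times> X. g z \<subseteq> f z) \<and>
            (\<forall>p\<in>D. \<forall>K. compact K \<and> K \<subseteq> X \<longrightarrow> bounded (\<Union>x\<in>K. g (p, x))) \<and>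
            mv_computable (prod_rep id_rep kappa) nu (D \<times> {K. compact K \<and> K \<subseteq> X})
              (\<lambda>(p, K). {N. \<forall>y\<in>(\<Union>x\<in>K. g (p, x)). \<bar>y $ 1\<bar> \<le> real N})))"
  apply (intro conjI allI impI cball_radius_computable)
     apply (erule bounded_subfunction)
     subgoal for f g by (intro exI[of _ g] conjI; assumption)
    apply (erule bounded_subfunction)
    subgoal for f g by (intro exI[of _ g] conjI; (assumption | erule mv_computable_mono)) auto
   apply (erule bounded_subfunction_param)
   subgoal for D f g by (intro exI[of _ g] conjI; assumption)
  apply (erule bounded_subfunction_param)
  subgoal for D f g by (intro exI[of _ g] conjI; (assumption | erule mv_computable_mono)) auto
  done

end
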